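(* (1) For pairs of partitions $(\lambda,\mu)$ and $(\nu,\sigma)$ with $|\lambda|+|\mu|=|\nu|+|\sigma|=n$, the multiplicity $\dim\operatorname{Hom}_{P_{\nu^*,\sigma^*}}(\operatorname{sgn}_{P_{\nu^*,\sigma^*}},V_{\lambda,\mu})$ equals $0$ if $(\nu,\sigma)\succ(\lambda,\mu)$ and equals $1$ if $(\nu,\sigma)=(\lambda,\mu)$. (2) Let $(\lambda_1,\mu_1)\succ(\lambda_2,\mu_2)\succ\cdots\succ(\lambda_M,\mu_M)$ be all pairs of partitions with $|\lambda_j|+|\mu_j|=n$, and put $P_j=P_{\lambda_j^*,\mu_j^*}$. Then for each $i$, the set of generalized parabolic subgroups $P$ with $\dim\operatorname{Hom}_P(\operatorname{sgn}_P,V_{\lambda_i,\mu_i})>0$ contains $P_i$ and does not contain $P_1,\dots,P_{i-1}$.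
   Context: $B_n$ is realized as the group of $n\times n$ signed permutation matrices, $S_n\ltimes\mathbb{Z}_2^n$. For tuples of positive integers $(p_1,\dots,p_k)$ and $(p_{k+1},\dots,p_l)$ with total sum $n$, the generalized parabolic subgroup $P_{(p_1,\dots,p_k),(p_{k+1},\dots,p_l)}=S_{p_1}\times\cdots\times S_{p_k}\times B_{p_{k+1}}\times\cdots\times B_{p_l}$, where each $S_{p_j}$ permutes the consecutive indices $a+1,\dots,a+p_j$ ($a=p_1+\dots+p_{j-1}$) and each $B_{p_j}$ is generated by those permutations together with the diagonal matrices with $\pm1$ in positions $a+1,\dots,a+p_j$ and $1$ elsewhere; for partitions $\alpha,\beta$, $P_{\alpha,\beta}$ uses their nonzero parts. $\operatorname{sgn}_P$ is the restriction to $P$ of the determinant. $V_\lambda$ is the irreducible representation of $S_{|\lambda|}$ indexed by $\lambda$ in the standard way ($V_{[1,\dots,1]}$ the sign), $\lambda^*$ the transposed partition; $\chi_i$ is the character of $\mathbb{Z}_2^n$ with $\operatorname{diag}(\epsilon_1,\dots,\epsilon_n)\mapsto\epsilon_{i+1}\cdots\epsilon_n$; for $|\lambda|=i$, $V_{\lambda,\mu}=\operatorname{Ind}_{(S_i\times S_{n-i})\ltimes\mathbb{Z}_2^n}^{B_n}(V_\lambda\otimes V_\mu\otimes\chi_i)$ (with $S_i\times S_{n-i}$ permuting $\{1,\dots,i\}$ and $\{i+1,\dots,n\}$, and $\mathbb{Z}_2^n$ acting by $\chi_i$). The order $\succ$ on pairs of partitions: $(\lambda,\mu)\succ(\nu,\sigma)$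 iff $\mu^*>\sigma^*$ in the lexicographic order, or $\mu=\sigma$ and $\lambda^*>\nu^*$ in the lexicographic order. *)

theory Defs
  imports "Jordan_Normal_Form.Determinant" "HOL-Library.Function_Algebras"
    "HOL-Combinatorics.Permutations"
begin

section \<open>The hyperoctahedral group B_n as signed permutation matrices\<close>

text \<open>Indices are 0-based: the paper's index k corresponds to k-1 here.\<close>

definition signed_perm_mats :: "nat \<Rightarrow> int mat set" where
  "signed_perm_mats n = {A \<in> carrier_mat n n.
      (\<forall>i<n. \<forall>j<n. A $$ (i,j) \<in> {-1, 0, 1}) \<and>
      (\<forall>i<n. \<exists>!j. j < n \<and> A $$ (i,j) \<noteq> 0) \<and>
      (\<forall>j<n. \<exists>!i. i < n \<and> A $$ (i,j) \<noteq> 0)}"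

text \<open>Underlying permutation: A e_j = (+-) e_(sp_perm A j).\<close>
definition sp_perm :: "int mat \<Rightarrow> nat \<Rightarrow> nat" where
  "sp_perm A j = (if j < dim_col A then (THE i. i < dim_row A \<and> A $$ (i,j) \<noteq> 0) else j)"

definition sp_sign :: "int mat \<Rightarrow> nat \<Rightarrow> int" where
  "sp_sign A j = A $$ (sp_perm A j, j)"

definition gen_parabolic :: "nat list \<Rightarrow> nat list \<Rightarrow> int mat set" where
  "gen_parabolic \<alpha> \<beta> = (let ps = \<alpha> @ \<beta> in
     {A \<in> signed_perm_mats (sum_list ps).
        \<forall>k < length ps. \<forall>j. sum_list (take k ps) \<le> j \<and> j < sum_list (take (Suc k) ps) \<longrightarrow>
           sum_list (take k ps) \<le> sp_perm A j \<and> sp_perm A j < sum_list (take (Suc k) ps) \<and>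
           (k < length \<alpha> \<longrightarrow> sp_sign A j = 1)})"

definition gen_parabolics :: "nat \<Rightarrow> int mat set set" where
  "gen_parabolics n = {gen_parabolic \<alpha> \<beta> | \<alpha> \<beta>.
      (\<forall>p \<in> set (\<alpha> @ \<beta>). 0 < p) \<and> sum_list (\<alpha> @ \<beta>) = n}"

definition is_partition :: "nat list \<Rightarrow> bool" where
  "is_partition lam \<longleftrightarrow> sorted (rev lam) \<and> (\<forall>p \<in> set lam. 0 < p)"

definition conj_part :: "nat list \<Rightarrow> nat list" where
  "conj_part lam = map (\<lambda>j. length (filter (\<lambda>p. j < p) lam)) [0..<fold max lam 0]"

text \<open>Lexicographic order on partitions (proper prefixes are smaller,
  which agrees with padding by zeros since parts are positive).\<close>
definition lex_gt :: "nat list \<Rightarrow> nat list \<Rightarrow> bool" where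
  "lex_gt a b \<longleftrightarrow> (b, a) \<in> lexord {(x, y). x < y}"

definition pair_succ :: "nat list \<times> nat list \<Rightarrow> nat list \<times> nat list \<Rightarrow> bool" where
  "pair_succ p q \<longleftrightarrow> (let (lam, \<mu>) = p; (\<nu>, \<sigma>) = q in
     lex_gt (conj_part \<mu>) (conj_part \<sigma>) \<or> (\<mu> = \<sigma> \<and> lex_gt (conj_part lam) (conj_part \<nu>)))"

text \<open>Young diagram, tableaux (bijections boxes -> entries {0..<m}),
  tabloids encoded as row-assignment functions entry -> row.\<close>
definition young :: "nat list \<Rightarrow> (nat \<times> nat) set" where
  "young lam = {(r, c). r < length lam \<and> c < lam ! r}"

definition tableaux :: "nat list \<Rightarrow> (nat \<times> nat \<Rightarrow> nat) set" where
  "tableaux lam = {T. bij_betw T (young lam) {0..<sum_list lam}}"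

definition tabloid_of :: "nat list \<Rightarrow> (nat \<times> nat \<Rightarrow> nat) \<Rightarrow> nat \<Rightarrow> nat" where
  "tabloid_of lam T = (\<lambda>e. if e < sum_list lam then fst (THE b. b \<in> young lam \<and> T b = e) else 0)"

definition col_stab :: "nat list \<Rightarrow> (nat \<times> nat \<Rightarrow> nat) \<Rightarrow> (nat \<Rightarrow> nat) set" where
  "col_stab lam T = {\<pi>. \<pi> permutes {0..<sum_list lam} \<and>
      (\<forall>b \<in> young lam. \<exists>b' \<in> young lam. T b' = \<pi> (T b) \<and> snd b' = snd b)}"

definition polytabloid :: "nat list \<Rightarrow> (nat \<times> nat \<Rightarrow> nat) \<Rightarrow> (nat \<Rightarrow> nat) \<Rightarrow> complex" where
  "polytabloid lam T = (\<lambda>r. \<Sum>\<pi> \<in> col_stab lam T.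
      of_int (sign \<pi>) * (if r = tabloid_of lam (\<pi> \<circ> T) then 1 else 0))"

definition scale1 :: "complex \<Rightarrow> ('a \<Rightarrow> complex) \<Rightarrow> ('a \<Rightarrow> complex)" where
  "scale1 c f = (\<lambda>x. c * f x)"
definition scale2 :: "complex \<Rightarrow> ('a \<Rightarrow> 'b \<Rightarrow> complex) \<Rightarrow> ('a \<Rightarrow> 'b \<Rightarrow> complex)" where
  "scale2 c f = (\<lambda>x. scale1 c (f x))"
definition scale3 :: "complex \<Rightarrow> ('a \<Rightarrow> 'b \<Rightarrow> 'c \<Rightarrow> complex) \<Rightarrow> ('a \<Rightarrow> 'b \<Rightarrow> 'c \<Rightarrow> complex)" where
  "scale3 c f = (\<lambda>x. scale2 c (f x))"

text \<open>V_lambda: the Specht module, on which a permutation pi of the entries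
  acts by (pi . f)(r) = f (r o pi) (i.e. pi . {t} = {pi o t}).\<close>
definition specht :: "nat list \<Rightarrow> ((nat \<Rightarrow> nat) \<Rightarrow> complex) set" where
  "specht lam = Modules.module.span scale1 {polytabloid lam T | T. T \<in> tableaux lam}"

section \<open>The representations V_(lambda,mu)\<close>

text \<open>V_lambda tensor V_mu, realised inside functions on pairs of tabloids.\<close>
definition tensor_specht :: "nat list \<Rightarrow> nat list \<Rightarrow> ((nat \<Rightarrow> nat) \<times> (nat \<Rightarrow> nat) \<Rightarrow> complex) set" where
  "tensor_specht lam \<mu> = Modules.module.span scale1
     {(\<lambda>(r1, r2). f r1 * g r2) | f g. f \<in> specht lam \<and> g \<in> specht \<mu>}"

text \<open>H = (S_i x S_(n-i)) semidirect Z_2^n inside B_n.\<close>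
definition young_sub :: "nat \<Rightarrow> nat \<Rightarrow> int mat set" where
  "young_sub i n = {A \<in> signed_perm_mats n. \<forall>j < i. sp_perm A j < i}"

definition chi :: "nat \<Rightarrow> int mat \<Rightarrow> int" where
  "chi i A = (\<Prod>j \<in> {i..<dim_col A}. sp_sign A j)"

text \<open>Action of h in H on V_lambda (x) V_mu (x) chi_i: S_i acts on the entries
  0..<i of the lambda-tabloid, S_(n-i) on entries i..<n (shifted to 0..<n-i)
  of the mu-tabloid, and the diagonal part by chi_i.\<close>
definition act_W :: "nat \<Rightarrow> nat \<Rightarrow> int mat \<Rightarrow> ((nat \<Rightarrow> nat) \<times> (nat \<Rightarrow> nat) \<Rightarrow> complex)
    \<Rightarrow> ((nat \<Rightarrow> nat) \<times> (nat \<Rightarrow> nat) \<Rightarrow> complex)" where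
  "act_W i n h w = (\<lambda>(r1, r2). of_int (chi i h) *
      w (r1 \<circ> (\<lambda>e. if e < i then sp_perm h e else e),
         r2 \<circ> (\<lambda>e. if e < n - i then sp_perm h (e + i) - i else e)))"

text \<open>The induced representation Ind_H^(B_n) W = {f : B_n -> W | f(hg) = h.f(g)},
  with (g . f)(x) = f(x g).\<close>
definition ind_rep :: "nat list \<Rightarrow> nat list \<Rightarrow>
    (int mat \<Rightarrow> (nat \<Rightarrow> nat) \<times> (nat \<Rightarrow> nat) \<Rightarrow> complex) set" where
  "ind_rep lam \<mu> = (let i = sum_list lam; n = sum_list lam + sum_list \<mu> in
     {f. (\<forall>x. x \<notin> signed_perm_mats n \<longrightarrow> f x = 0) \<and>
         (\<forall>g \<in> signed_perm_mats n. f g \<in> tensor_specht lam \<mu>) \<and>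
         (\<forall>h \<in> young_sub i n. \<forall>g \<in> signed_perm_mats n. f (h * g) = act_W i n h (f g))})"

definition act_ind :: "nat \<Rightarrow> int mat \<Rightarrow> (int mat \<Rightarrow> 'w) \<Rightarrow> (int mat \<Rightarrow> 'w::zero)" where
  "act_ind n g f = (\<lambda>x. if x \<in> signed_perm_mats n then f (x * g) else 0)"

text \<open>Hom_P(sgn_P, V_(lambda,mu)): complex-linear maps from the one-dimensional
  representation C (P acting by the determinant) into V_(lambda,mu) that are P-equivariant.\<close>
definition hom_sgn :: "int mat set \<Rightarrow> nat list \<Rightarrow> nat list \<Rightarrow>
    (complex \<Rightarrow> int mat \<Rightarrow> (nat \<Rightarrow> nat) \<times> (nat \<Rightarrow> nat) \<Rightarrow> complex) set" where
  "hom_sgn P lam \<mu> = (let n = sum_list lam + sum_list \<mu> in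
     {\<phi>. (\<forall>c. \<phi> c \<in> ind_rep lam \<mu>) \<and>
         (\<forall>c d. \<phi> (c + d) = \<phi> c + \<phi> d) \<and>
         (\<forall>a c. \<phi> (a * c) = scale2 a (\<phi> c)) \<and>
         (\<forall>g \<in> P. \<forall>c. \<phi> (of_int (det g) * c) = act_ind n g (\<phi> c))})"

definition mult_sgn :: "int mat set \<Rightarrow> nat list \<Rightarrow> nat list \<Rightarrow> nat" where
  "mult_sgn P lam \<mu> = Vector_Spaces.vector_space.dim scale3 (hom_sgn P lam \<mu>)"

end

theory Submission
  imports Defs
begin

(* Write lam' for the conjugate of a partition lam. The value f at 1 of a homomorphism in
   Hom_P(sgn, V_(lam,mu)) is a function on B_n with f(h x) = h . f(x) for h in
   H = (S_i x S_(n-i)) x| Z_2^n and f(x g) = det g . f(x) for g in P. If g in P is a sign flip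
   or a transposition and x maps the indices moved by g into one half of {1..n}, then
   x g x^-1 lies in H and acts on f(x) trivially, resp. by swapping two entries of a tabloid,
   while det g = -1. Hence, wherever f(x) is nonzero at a pair of tabloids, x maps the B-blocks
   of P into the second half and each tabloid is injective on the images of the blocks of P.
   A tabloid of shape mu that is injective on disjoint blocks of sizes b_1, b_2, ... satisfies
   b_1 + ... + b_c <= mu'_1 + ... + mu'_c for all c, so b is not lexicographically larger than
   mu'; this rules out (nu, sigma) > (lam, mu). For P = P_(lam',mu') the same constraints force f
   to vanish off H and f(1) to be supported on the orbit of the column tableaux under their
   column stabilizers, where it is determined by a single value: f is a multiple of the
   function induced from the product of the two column polytabloids, which is itself such a
   homomorphism. *)

section \<open>Signed permutation matrices\<close>

definition signed_perm_mat :: "nat \<Rightarrow> (nat \<Rightarrow> nat) \<Rightarrow> (nat \<Rightarrow> int) \<Rightarrow> int mat" where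
  "signed_perm_mat n p s = mat n n (\<lambda>(k,j). if k = p j then s j else 0)"

lemma signed_perm_mat_carrier[simp]: "signed_perm_mat n p s \<in> carrier_mat n n"
  by (simp add: signed_perm_mat_def)

lemma signed_perm_mat_index[simp]:
  "k < n \<Longrightarrow> j < n \<Longrightarrow> signed_perm_mat n p s $$ (k,j) = (if k = p j then s j else 0)"
  by (simp add: signed_perm_mat_def)

lemma signed_perm_mat_dims[simp]:
  "dim_row (signed_perm_mat n p s) = n" "dim_col (signed_perm_mat n p s) = n"
  by (auto simp: signed_perm_mat_def)

lemma signed_perm_mat_in:
  assumes p: "p permutes {0..<n}" and s: "\<And>j. j < n \<Longrightarrow> s j \<in> {-1,1}"
  shows "signed_perm_mat n p s \<in> signed_perm_mats n"
proof -
  have pj: "j < n \<Longrightarrow> p j < n" for j using p permutes_in_image by fastforce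
  have row: "\<exists>!j. j < n \<and> signed_perm_mat n p s $$ (i,j) \<noteq> 0" if "i < n" for i
  proof -
    obtain j where j: "p j = i" using permutes_surj[OF p] by (metis surjD)
    hence jn: "j < n" using p that by (metis atLeastLessThan_iff permutes_not_in zero_le)
    show ?thesis
    proof (rule ex1I[of _ j])
      show "j < n \<and> signed_perm_mat n p s $$ (i, j) \<noteq> 0" using jn j s[OF jn] that by auto
      fix j' assume "j' < n \<and> signed_perm_mat n p s $$ (i, j') \<noteq> 0"
      hence "p j' = i" "j' < n" using that by (auto split: if_splits)
      thus "j' = j" using j p by (metis permutes_inj injD)
    qed
  qed
  have col: "\<exists>!i. i < n \<and> signed_perm_mat n p s $$ (i,j) \<noteq> 0" if "j < n" for j
    using that pj[OF that] s[OF that] by (intro ex1I[of _ "p j"]) (auto split: if_splits)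
  have ent: "\<And>i j. i < n \<Longrightarrow> j < n \<Longrightarrow> signed_perm_mat n p s $$ (i,j) \<in> {-1,0,1}"
    using s by auto
  show ?thesis unfolding signed_perm_mats_def mem_Collect_eq
    by (intro conjI allI impI signed_perm_mat_carrier ent row col)
qed

lemma sp_perm_signed_perm_mat:
  assumes p: "p permutes {0..<n}" and s: "\<And>j. j < n \<Longrightarrow> s j \<noteq> 0"
  shows "sp_perm (signed_perm_mat n p s) = p"
proof
  fix j
  show "sp_perm (signed_perm_mat n p s) j = p j"
  proof (cases "j < n")
    case True
    have pj: "p j < n" using p True permutes_in_image by fastforce
    show ?thesis unfolding sp_perm_def using True pj s[OF True]
      by (auto intro!: the_equality split: if_splits)
  next
    case False
    then show ?thesis unfolding sp_perm_def using p by (simp add: permutes_not_in)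
  qed
qed

lemma sp_sign_signed_perm_mat:
  assumes p: "p permutes {0..<n}" and s: "\<And>j. j < n \<Longrightarrow> s j \<noteq> 0" and j: "j < n"
  shows "sp_sign (signed_perm_mat n p s) j = s j"
proof -
  have pj: "p j < n" using p j permutes_in_image by fastforce
  have "sp_perm (signed_perm_mat n p s) j = p j" using sp_perm_signed_perm_mat[OF p s] by simp
  thus ?thesis unfolding sp_sign_def using pj j by simp
qed

lemma signed_perm_matsD:
  assumes A: "A \<in> signed_perm_mats n"
  shows "A \<in> carrier_mat n n"
    and "\<And>j. j < n \<Longrightarrow> sp_perm A j < n \<and> A $$ (sp_perm A j, j) \<noteq> 0"
    and "\<And>j k. j < n \<Longrightarrow> k < n \<Longrightarrow> k \<noteq> sp_perm A j \<Longrightarrow> A $$ (k, j) = 0"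
    and "\<And>j. j \<ge> n \<Longrightarrow> sp_perm A j = j"
proof -
  show C: "A \<in> carrier_mat n n" using A by (simp add: signed_perm_mats_def)
  have col: "\<And>j. j<n \<Longrightarrow> \<exists>!i. i < n \<and> A $$ (i,j) \<noteq> 0" using A by (simp add: signed_perm_mats_def)
  show *: "sp_perm A j < n \<and> A $$ (sp_perm A j, j) \<noteq> 0" if "j < n" for j
  proof -
    have "sp_perm A j = (THE i. i < n \<and> A $$ (i,j) \<noteq> 0)" using C that by (simp add: sp_perm_def)
    thus ?thesis using theI'[OF col[OF that]] by simp
  qed
  show "A $$ (k, j) = 0" if "j < n" "k < n" "k \<noteq> sp_perm A j" for j k
    using col[OF that(1)] *[OF that(1)] that by blast
  show "sp_perm A j = j" if "j \<ge> n" for j using C that by (simp add: sp_perm_def)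
qed

lemma sp_perm_permutes:
  assumes A: "A \<in> signed_perm_mats n"
  shows "sp_perm A permutes {0..<n}"
proof -
  note F = signed_perm_matsD[OF A]
  have inj: "inj_on (sp_perm A) {0..<n}"
  proof
    fix a b assume ab: "a \<in> {0..<n}" "b \<in> {0..<n}" "sp_perm A a = sp_perm A b"
    have "\<exists>!j. j < n \<and> A $$ (sp_perm A a, j) \<noteq> 0"
      using A F(2)[of a] ab by (simp add: signed_perm_mats_def)
    thus "a = b" using F(2)[of a] F(2)[of b] ab by auto
  qed
  have "sp_perm A ` {0..<n} \<subseteq> {0..<n}" using F(2) by auto
  hence "bij_betw (sp_perm A) {0..<n} {0..<n}" using inj by (simp add: bij_betw_def endo_inj_surj)
  thus ?thesis using F(4) by (intro bij_imp_permutes) auto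
qed

lemma sp_perm_less:
  "A \<in> signed_perm_mats n \<Longrightarrow> j < n \<Longrightarrow> sp_perm A j < n"
  using signed_perm_matsD(2) by blast

lemma sp_sign_in:
  assumes A: "A \<in> signed_perm_mats n" and j: "j < n"
  shows "sp_sign A j \<in> {-1, 1}"
proof -
  have "A $$ (sp_perm A j, j) \<in> {-1,0,1}"
    using A sp_perm_less[OF A j] j by (simp add: signed_perm_mats_def)
  thus ?thesis using signed_perm_matsD(2)[OF A j] by (auto simp: sp_sign_def)
qed

lemma signed_perm_mat_of:
  assumes A: "A \<in> signed_perm_mats n"
  shows "A = signed_perm_mat n (sp_perm A) (sp_sign A)"
proof (rule eq_matI)
  fix k j assume "k < dim_row (signed_perm_mat n (sp_perm A) (sp_sign A))"
    and "j < dim_col (signed_perm_mat n (sp_perm A) (sp_sign A))"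
  hence "k < n" "j < n" by auto
  thus "A $$ (k, j) = signed_perm_mat n (sp_perm A) (sp_sign A) $$ (k, j)"
    using signed_perm_matsD(3)[OF A, of j k] by (auto simp: sp_sign_def)
qed (use signed_perm_matsD(1)[OF A] in auto)

lemma signed_perm_mat_cong:
  assumes "\<And>j. j < n \<Longrightarrow> p j = p' j" "\<And>j. j < n \<Longrightarrow> s j = s' j"
  shows "signed_perm_mat n p s = signed_perm_mat n p' s'"
  using assms by (intro eq_matI) auto

lemma signed_perm_mat_mult:
  assumes q: "q permutes {0..<n}"
  shows "signed_perm_mat n p s * signed_perm_mat n q t = signed_perm_mat n (p \<circ> q) (\<lambda>j. s (q j) * t j)"
proof (rule eq_matI)
  fix k j assume "k < dim_row (signed_perm_mat n (p \<circ> q) (\<lambda>j. s (q j) * t j))"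
    "j < dim_col (signed_perm_mat n (p \<circ> q) (\<lambda>j. s (q j) * t j))"
  hence k: "k < n" and j: "j < n" by auto
  have qj: "q j < n" using q j permutes_in_image by fastforce
  have "(signed_perm_mat n p s * signed_perm_mat n q t) $$ (k,j)
      = (\<Sum>l\<in>{0..<n}. signed_perm_mat n p s $$ (k,l) * signed_perm_mat n q t $$ (l,j))"
    using k j by (simp add: scalar_prod_def row_def col_def)
  also have "\<dots> = (\<Sum>l\<in>{0..<n}. if l = q j then signed_perm_mat n p s $$ (k,l) * t j else 0)"
    using j by (intro sum.cong) auto
  also have "\<dots> = signed_perm_mat n p s $$ (k, q j) * t j" using qj by (simp add: sum.delta)
  finally show "(signed_perm_mat n p s * signed_perm_mat n q t) $$ (k,j)
      = signed_perm_mat n (p \<circ> q) (\<lambda>j. s (q j) * t j) $$ (k, j)"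
    using k j qj by simp
qed auto

lemma det_signed_perm_mat:
  assumes p: "p permutes {0..<n}"
  shows "det (signed_perm_mat n p s) = sign p * (\<Prod>j<n. s j)"
proof -
  let ?A = "signed_perm_mat n p s"
  have "det ?A = (\<Sum>q | q permutes {0..<n}. of_int (sign q) * (\<Prod>j<n. ?A $$ (q j, j)))"
    by (rule det_col) simp
  also have "\<dots> = (\<Sum>q | q permutes {0..<n}. if q = p then sign p * (\<Prod>j<n. s j) else 0)"
  proof (rule sum.cong[OF refl])
    fix q assume q: "q \<in> {q. q permutes {0..<n}}"
    show "of_int (sign q) * (\<Prod>j<n. ?A $$ (q j, j)) = (if q = p then sign p * (\<Prod>j<n. s j) else 0)"
    proof (cases "q = p")
      case True
      have "(\<Prod>j<n. ?A $$ (q j, j)) = (\<Prod>j<n. s j)"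
        using True p by (intro prod.cong) (auto simp: permutes_in_image)
      thus ?thesis using True by simp
    next
      case False
      then obtain j where j: "q j \<noteq> p j" by auto
      hence "j < n" using p q by (metis atLeastLessThan_iff mem_Collect_eq not_less0 not_less permutes_not_in)
      hence "(\<Prod>j<n. ?A $$ (q j, j)) = 0"
        using j q by (intro prod_zero bexI[of _ j]) (auto simp: permutes_in_image)
      thus ?thesis using False by simp
    qed
  qed
  also have "\<dots> = sign p * (\<Prod>j<n. s j)"
    using p by (simp add: sum.delta finite_permutations)
  finally show ?thesis .
qed

lemma one_mat_eq_signed_perm_mat: "1\<^sub>m n = signed_perm_mat n id (\<lambda>_. 1)"
  by (intro eq_matI) auto

lemma one_mat_in_signed_perm_mats: "1\<^sub>m n \<in> signed_perm_mats n"
  unfolding one_mat_eq_signed_perm_mat by (rule signed_perm_mat_in) auto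

lemma sp_perm_one_mat: "sp_perm (1\<^sub>m n) = id"
  unfolding one_mat_eq_signed_perm_mat by (rule sp_perm_signed_perm_mat) (auto simp: permutes_id)

lemma sp_sign_one_mat: "j < n \<Longrightarrow> sp_sign (1\<^sub>m n) j = 1"
  unfolding one_mat_eq_signed_perm_mat by (rule sp_sign_signed_perm_mat) (auto simp: permutes_id)

lemma signed_perm_mats_mult:
  assumes A: "A \<in> signed_perm_mats n" and B: "B \<in> signed_perm_mats n"
  shows "A * B \<in> signed_perm_mats n"
    and "sp_perm (A * B) = sp_perm A \<circ> sp_perm B"
    and "\<And>j. j < n \<Longrightarrow> sp_sign (A * B) j = sp_sign A (sp_perm B j) * sp_sign B j"
proof -
  have pA: "sp_perm A permutes {0..<n}" and pB: "sp_perm B permutes {0..<n}"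
    using A B by (auto intro: sp_perm_permutes)
  have AB: "A * B = signed_perm_mat n (sp_perm A \<circ> sp_perm B) (\<lambda>j. sp_sign A (sp_perm B j) * sp_sign B j)"
    by (subst signed_perm_mat_of[OF A], subst signed_perm_mat_of[OF B], rule signed_perm_mat_mult[OF pB])
  have pAB: "sp_perm A \<circ> sp_perm B permutes {0..<n}" by (rule permutes_compose[OF pB pA])
  have s: "sp_sign A (sp_perm B j) * sp_sign B j \<in> {-1,1}" if j: "j < n" for j
    using sp_sign_in[OF A sp_perm_less[OF B j]] sp_sign_in[OF B j] by fastforce
  hence snz: "\<And>j. j < n \<Longrightarrow> sp_sign A (sp_perm B j) * sp_sign B j \<noteq> 0" by fastforce
  show "A * B \<in> signed_perm_mats n" unfolding AB by (rule signed_perm_mat_in[OF pAB s])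
  show "sp_perm (A * B) = sp_perm A \<circ> sp_perm B"
    unfolding AB by (rule sp_perm_signed_perm_mat[OF pAB snz])
  show "sp_sign (A * B) j = sp_sign A (sp_perm B j) * sp_sign B j" if "j < n" for j
    unfolding AB by (rule sp_sign_signed_perm_mat[OF pAB snz that])
qed

lemma det_signed_perm_mats:
  assumes A: "A \<in> signed_perm_mats n"
  shows "det A = sign (sp_perm A) * (\<Prod>j<n. sp_sign A j)"
  by (subst signed_perm_mat_of[OF A], rule det_signed_perm_mat[OF sp_perm_permutes[OF A]])

definition sign_flip :: "nat \<Rightarrow> nat \<Rightarrow> int mat" where
  "sign_flip n j = signed_perm_mat n id (\<lambda>l. if l = j then -1 else 1)"

definition transp_mat :: "nat \<Rightarrow> nat \<Rightarrow> nat \<Rightarrow> int mat" where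
  "transp_mat n a b = signed_perm_mat n (Transposition.transpose a b) (\<lambda>_. 1)"

lemma sign_flip_in: "sign_flip n j \<in> signed_perm_mats n"
  unfolding sign_flip_def by (rule signed_perm_mat_in) (auto simp: permutes_id)

lemma sp_perm_sign_flip: "sp_perm (sign_flip n j) = id"
  unfolding sign_flip_def by (rule sp_perm_signed_perm_mat) (auto simp: permutes_id)

lemma sp_sign_sign_flip: "l < n \<Longrightarrow> sp_sign (sign_flip n j) l = (if l = j then -1 else 1)"
  unfolding sign_flip_def by (rule sp_sign_signed_perm_mat) (auto simp: permutes_id)

lemma det_sign_flip: "j < n \<Longrightarrow> det (sign_flip n j) = -1"
  unfolding sign_flip_def by (subst det_signed_perm_mat) (auto simp: permutes_id)

lemma chi_sign_flip: "k < n \<Longrightarrow> chi i (sign_flip n k) = (if i \<le> k then -1 else 1)"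
proof -
  assume k: "k < n"
  have "chi i (sign_flip n k) = (\<Prod>l\<in>{i..<n}. if l = k then -1 else 1)"
    unfolding chi_def using sp_sign_sign_flip by (intro prod.cong) (auto simp: sign_flip_def)
  also have "\<dots> = (if i \<le> k then -1 else 1)" using k by simp
  finally show ?thesis .
qed

lemma sign_flip_conj:
  assumes x: "x \<in> signed_perm_mats n" and j: "j < n"
  shows "sign_flip n (sp_perm x j) * x = x * sign_flip n j"
proof -
  have px: "sp_perm x permutes {0..<n}" by (rule sp_perm_permutes[OF x])
  have inj: "inj (sp_perm x)" using px permutes_inj by blast
  have "sign_flip n (sp_perm x j) * x
      = signed_perm_mat n (id \<circ> sp_perm x) (\<lambda>l. (if sp_perm x l = sp_perm x j then -1 else 1) * sp_sign x l)"
    unfolding sign_flip_def by (subst signed_perm_mat_of[OF x], subst signed_perm_mat_mult[OF px]) simp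
  also have "\<dots> = signed_perm_mat n (sp_perm x \<circ> id) (\<lambda>l. sp_sign x (id l) * (if l = j then -1 else 1))"
    using inj by (intro signed_perm_mat_cong) (auto simp: inj_eq)
  also have "\<dots> = x * sign_flip n j"
    unfolding sign_flip_def by (subst (2) signed_perm_mat_of[OF x], subst signed_perm_mat_mult) (auto simp: permutes_id)
  finally show ?thesis .
qed

lemma transp_mat_in: "a < n \<Longrightarrow> b < n \<Longrightarrow> transp_mat n a b \<in> signed_perm_mats n"
  unfolding transp_mat_def by (rule signed_perm_mat_in) (auto intro: permutes_swap_id)

lemma sp_perm_transp_mat: "a < n \<Longrightarrow> b < n \<Longrightarrow> sp_perm (transp_mat n a b) = Transposition.transpose a b"
  unfolding transp_mat_def by (rule sp_perm_signed_perm_mat) (auto intro: permutes_swap_id)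

lemma sp_sign_transp_mat: "a < n \<Longrightarrow> b < n \<Longrightarrow> l < n \<Longrightarrow> sp_sign (transp_mat n a b) l = 1"
  unfolding transp_mat_def by (subst sp_sign_signed_perm_mat) (auto intro: permutes_swap_id)

lemma det_transp_mat: "a < n \<Longrightarrow> b < n \<Longrightarrow> a \<noteq> b \<Longrightarrow> det (transp_mat n a b) = -1"
  unfolding transp_mat_def by (subst det_signed_perm_mat) (auto intro: permutes_swap_id simp: sign_swap_id)

definition signed_transp_mat :: "nat \<Rightarrow> nat \<Rightarrow> nat \<Rightarrow> int \<Rightarrow> int mat" where
  "signed_transp_mat n a b c = signed_perm_mat n (Transposition.transpose a b) (\<lambda>l. if l = a \<or> l = b then c else 1)"

lemma signed_transp_mat_in:
  assumes a: "a < n" and b: "b < n" and c: "c \<in> {-1, 1}"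
  shows "signed_transp_mat n a b c \<in> signed_perm_mats n"
    "sp_perm (signed_transp_mat n a b c) = Transposition.transpose a b"
proof -
  have p: "Transposition.transpose a b permutes {0..<n}" using a b by (auto intro: permutes_swap_id)
  show "signed_transp_mat n a b c \<in> signed_perm_mats n"
    unfolding signed_transp_mat_def by (rule signed_perm_mat_in[OF p]) (use c in auto)
  show "sp_perm (signed_transp_mat n a b c) = Transposition.transpose a b"
    unfolding signed_transp_mat_def
    by (rule sp_perm_signed_perm_mat[OF p]) (use c in auto)
qed

lemma chi_signed_transp_mat:
  assumes a: "a < n" and b: "b < n" and c: "c \<in> {-1, 1}" and ab: "a \<noteq> b"
    and side: "(a < i \<and> b < i) \<or> (i \<le> a \<and> i \<le> b)"
  shows "chi i (signed_transp_mat n a b c) = 1"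
proof -
  have p: "Transposition.transpose a b permutes {0..<n}" using a b by (auto intro: permutes_swap_id)
  have "chi i (signed_transp_mat n a b c)
      = (\<Prod>l\<in>{i..<n}. (if l = a then c else 1) * (if l = b then c else 1))"
    unfolding chi_def signed_transp_mat_def
    by (intro prod.cong) (use ab c in \<open>auto simp: sp_sign_signed_perm_mat[OF p]\<close>)
  also have "\<dots> = (\<Prod>l\<in>{i..<n}. if l = a then c else 1) * (\<Prod>l\<in>{i..<n}. if l = b then c else 1)"
    by (rule prod.distrib)
  also have "\<dots> = 1" using side a b c by auto
  finally show ?thesis .
qed

lemma signed_transp_mat_conj:
  assumes x: "x \<in> signed_perm_mats n" and a: "a < n" and b: "b < n" and ab: "a \<noteq> b"
  shows "signed_transp_mat n (sp_perm x a) (sp_perm x b) (sp_sign x a * sp_sign x b) * x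
      = x * transp_mat n a b"
proof -
  have px: "sp_perm x permutes {0..<n}" by (rule sp_perm_permutes[OF x])
  have inj: "inj (sp_perm x)" using px permutes_inj by blast
  have pt: "Transposition.transpose a b permutes {0..<n}" using a b by (auto intro: permutes_swap_id)
  let ?pa = "sp_perm x a" let ?pb = "sp_perm x b" let ?c = "sp_sign x a * sp_sign x b"
  have sa: "sp_sign x a * sp_sign x a = 1" "sp_sign x b * sp_sign x b = 1"
    using sp_sign_in[OF x a] sp_sign_in[OF x b] by auto
  have "signed_transp_mat n ?pa ?pb ?c * x
      = signed_perm_mat n (Transposition.transpose ?pa ?pb \<circ> sp_perm x) (\<lambda>l. (if sp_perm x l = ?pa \<or> sp_perm x l = ?pb then ?c else 1) * sp_sign x l)"
    unfolding signed_transp_mat_def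
      by (subst signed_perm_mat_of[OF x], subst signed_perm_mat_mult[OF px]) simp
  also have "\<dots> = signed_perm_mat n (sp_perm x \<circ> Transposition.transpose a b) (\<lambda>l. sp_sign x (Transposition.transpose a b l) * 1)"
  proof (rule signed_perm_mat_cong)
    fix l assume l: "l < n"
    show "(Transposition.transpose ?pa ?pb \<circ> sp_perm x) l = (sp_perm x \<circ> Transposition.transpose a b) l"
    proof (cases "l = a \<or> l = b")
      case True thus ?thesis by auto
    next
      case False
      hence "sp_perm x l \<noteq> ?pa" "sp_perm x l \<noteq> ?pb" using inj by (auto simp: inj_eq)
      thus ?thesis using False by simp
    qed
    show "(if sp_perm x l = ?pa \<or> sp_perm x l = ?pb then ?c else 1) * sp_sign x l
        = sp_sign x (Transposition.transpose a b l) * 1"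
    proof (cases "l = a \<or> l = b")
      case True thus ?thesis using sa ab by (auto simp: algebra_simps)
    next
      case False
      hence "sp_perm x l \<noteq> ?pa" "sp_perm x l \<noteq> ?pb" using inj by (auto simp: inj_eq)
      thus ?thesis using False by simp
    qed
  qed
  also have "\<dots> = x * transp_mat n a b"
    unfolding transp_mat_def by (subst (2) signed_perm_mat_of[OF x], subst signed_perm_mat_mult[OF pt]) simp
  finally show ?thesis .
qed

section \<open>Conjugate partitions\<close>

definition col_length :: "nat list \<Rightarrow> nat \<Rightarrow> nat" where
  "col_length lam c = length (filter (\<lambda>p. c < p) lam)"

lemma fold_max_upper: "a \<le> fold max xs a \<and> (\<forall>p\<in>set xs. p \<le> fold max xs (a::nat))"
proof (induction xs arbitrary: a)
  case Nil then show ?case by simp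
next
  case (Cons x xs)
  have IH: "max x a \<le> fold max xs (max x a)" "\<forall>p\<in>set xs. p \<le> fold max xs (max x a)"
    using Cons[of "max x a"] by auto
  have "a \<le> fold max xs (max x a)" "x \<le> fold max xs (max x a)" using IH(1) by linarith+
  then show ?case using IH(2) by simp
qed

lemma fold_max_cases: "fold max xs a = a \<or> fold max xs (a::nat) \<in> set xs"
proof (induction xs arbitrary: a)
  case Nil then show ?case by simp
next
  case (Cons x xs)
  have "fold max xs (max x a) = max x a \<or> fold max xs (max x a) \<in> set xs" by (rule Cons)
  moreover have "max x a = x \<or> max x a = a" by linarith
  ultimately show ?case by auto
qed

lemma length_conj_part: "length (conj_part lam) = fold max lam 0"
  by (simp add: conj_part_def)

lemma nth_conj_part: "c < length (conj_part lam) \<Longrightarrow> conj_part lam ! c = col_length lam c"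
  by (simp add: conj_part_def col_length_def)

lemma col_length_eq_sum: "col_length lam c = (\<Sum>q<length lam. if c < lam ! q then 1 else 0)"
proof (induction lam)
  case Nil then show ?case by (simp add: col_length_def)
next
  case (Cons a lam)
  have "(\<Sum>q<length (a # lam). if c < (a # lam) ! q then 1 else (0::nat))
      = (if c < a then 1 else 0) + (\<Sum>q<length lam. if c < lam ! q then 1 else 0)"
    by (simp only: length_Cons sum.lessThan_Suc_shift) simp
  then show ?case using Cons by (simp add: col_length_def)
qed

lemma sum_col_length: "(\<Sum>j<c. col_length lam j) = (\<Sum>q<length lam. min (lam ! q) c)"
proof (induction c)
  case 0 then show ?case by simp
next
  case (Suc c)
  have "(\<Sum>j<Suc c. col_length lam j)
      = (\<Sum>q<length lam. min (lam ! q) c) + (\<Sum>q<length lam. if c < lam ! q then 1 else 0)"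
    using Suc by (simp add: col_length_eq_sum)
  also have "\<dots> = (\<Sum>q<length lam. min (lam ! q) (Suc c))"
    by (subst sum.distrib[symmetric]) (intro sum.cong, auto)
  finally show ?case .
qed

lemma sum_list_nth: "sum_list xs = (\<Sum>q<length xs. xs ! q)"
  by (simp add: sum_list_sum_nth atLeast0LessThan)

lemma sum_list_take_eq_sum: "k \<le> length xs \<Longrightarrow> sum_list (take k xs) = (\<Sum>q<k. xs ! q)"
  by (simp add: sum_list_nth min_def)

lemma sum_list_take_conj_part:
  assumes "c \<le> length (conj_part lam)"
  shows "sum_list (take c (conj_part lam)) = (\<Sum>q<length lam. min (lam ! q) c)"
proof -
  have "sum_list (take c (conj_part lam)) = (\<Sum>j<c. conj_part lam ! j)"
    using assms by (rule sum_list_take_eq_sum)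
  also have "\<dots> = (\<Sum>j<c. col_length lam j)" using assms by (intro sum.cong) (auto simp: nth_conj_part)
  finally show ?thesis by (simp add: sum_col_length)
qed

lemma sum_list_conj_part: "sum_list (conj_part lam) = sum_list lam"
proof -
  let ?M = "fold max lam 0"
  have "sum_list (conj_part lam) = sum_list (take ?M (conj_part lam))" by (simp add: length_conj_part)
  also have "\<dots> = (\<Sum>q<length lam. min (lam ! q) ?M)"
    by (rule sum_list_take_conj_part) (simp add: length_conj_part)
  also have "\<dots> = (\<Sum>q<length lam. lam ! q)"
    using fold_max_upper[of 0 lam] by (intro sum.cong) (auto simp: min_def)
  finally show ?thesis by (simp add: sum_list_nth)
qed

lemma conj_part_pos: "p \<in> set (conj_part lam) \<Longrightarrow> 0 < p"
proof -
  assume "p \<in> set (conj_part lam)"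
  then obtain c where c: "c < fold max lam 0" "p = col_length lam c"
    by (auto simp: conj_part_def col_length_def)
  hence "fold max lam 0 \<in> set lam" using fold_max_cases[of lam 0] by auto
  thus "0 < p" using c by (auto simp: col_length_def filter_empty_conv)
qed

lemma is_partition_Cons: "is_partition (a # lam) \<longleftrightarrow> 0 < a \<and> (\<forall>p\<in>set lam. p \<le> a) \<and> is_partition lam"
  by (auto simp: is_partition_def sorted_append)

lemma less_col_length_iff:
  assumes "is_partition lam" "q < length lam"
  shows "q < col_length lam c \<longleftrightarrow> c < lam ! q"
  using assms
proof (induction lam arbitrary: q)
  case Nil then show ?case by simp
next
  case (Cons a lam)
  have a: "\<forall>p\<in>set lam. p \<le> a" and lp: "is_partition lam" using Cons.prems is_partition_Cons by auto
  show ?case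
  proof (cases "c < a")
    case False
    hence "filter (\<lambda>p. c < p) lam = []" using a by (auto simp: filter_empty_conv)
    moreover have "\<not> c < (a # lam) ! q"
    proof (cases q)
      case (Suc q')
      hence "q' < length lam" using Cons.prems(2) by simp
      hence "lam ! q' \<le> a" using a nth_mem by blast
      thus ?thesis using Suc False by simp
    qed (use False in simp)
    ultimately show ?thesis using False by (simp add: col_length_def)
  next
    case True
    show ?thesis
    proof (cases q)
      case 0 then show ?thesis using True by (simp add: col_length_def)
    next
      case (Suc q')
      have "q' < length lam" using Suc Cons.prems by simp
      then show ?thesis using Cons.IH[OF lp] Suc True by (simp add: col_length_def)
    qed
  qed
qed

lemma young_iff_conj_part:
  assumes lam: "is_partition lam"
  shows "(q, c) \<in> young lam \<longleftrightarrow> c < length (conj_part lam) \<and> q < conj_part lam ! c"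
proof
  assume "(q, c) \<in> young lam"
  hence qc: "q < length lam" "c < lam ! q" by (auto simp: young_def)
  have "lam ! q \<le> fold max lam 0" using fold_max_upper[of 0 lam] qc(1) nth_mem by blast
  hence c: "c < length (conj_part lam)" using qc by (simp add: length_conj_part)
  thus "c < length (conj_part lam) \<and> q < conj_part lam ! c"
    using less_col_length_iff[OF lam qc(1)] qc nth_conj_part[OF c] by simp
next
  assume a: "c < length (conj_part lam) \<and> q < conj_part lam ! c"
  hence "q < col_length lam c" using nth_conj_part[of c lam] by simp
  moreover hence "q < length lam"
    unfolding col_length_def by (meson length_filter_le order.strict_trans2)
  ultimately show "(q, c) \<in> young lam" using less_col_length_iff[OF lam] by (simp add: young_def)
qed

definition block_start :: "nat list \<Rightarrow> nat \<Rightarrow> nat" where "block_start ps c = sum_list (take c ps)"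

lemma block_start_mono: "c \<le> c' \<Longrightarrow> block_start ps c \<le> block_start ps c'"
proof -
  assume "c \<le> c'"
  hence "take c ps = take c (take c' ps)" by (simp add: min_def)
  hence "take c' ps = take c ps @ drop c (take c' ps)" by (metis append_take_drop_id)
  hence "sum_list (take c' ps) = sum_list (take c ps) + sum_list (drop c (take c' ps))"
    by (metis sum_list_append)
  thus ?thesis by (simp add: block_start_def)
qed

lemma block_start_Suc: "c < length ps \<Longrightarrow> block_start ps (Suc c) = block_start ps c + ps ! c"
  by (simp add: block_start_def take_Suc_conv_app_nth)

lemma block_start_length: "length ps \<le> c \<Longrightarrow> block_start ps c = sum_list ps"
  by (simp add: block_start_def)

lemma block_start_unique:
  assumes "block_start ps c \<le> e" "e < block_start ps (Suc c)" "block_start ps c' \<le> e"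
    "e < block_start ps (Suc c')"
  shows "c = c'"
proof (rule ccontr)
  assume "c \<noteq> c'"
  then consider "Suc c \<le> c'" | "Suc c' \<le> c" by linarith
  thus False
  proof cases
    case 1 thus False using block_start_mono[OF 1, of ps] assms by linarith
  next
    case 2 thus False using block_start_mono[OF 2, of ps] assms by linarith
  qed
qed

lemma block_exists:
  assumes "e < sum_list ps"
  shows "\<exists>c<length ps. block_start ps c \<le> e \<and> e < block_start ps (Suc c)"
  using assms
proof (induction ps arbitrary: e)
  case Nil then show ?case by simp
next
  case (Cons a ps)
  show ?case
  proof (cases "e < a")
    case True
    then show ?thesis by (intro exI[of _ 0]) (auto simp: block_start_def)
  next
    case False
    hence "e - a < sum_list ps" using Cons.prems by simp
    then obtain c where c: "c < length ps" "block_start ps c \<le> e - a"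
      "e - a < block_start ps (Suc c)" using Cons.IH by blast
    have "block_start (a # ps) (Suc c) = a + block_start ps c"
      "block_start (a # ps) (Suc (Suc c)) = a + block_start ps (Suc c)" by (simp_all add: block_start_def)
    thus ?thesis using c False by (intro exI[of _ "Suc c"]) auto
  qed
qed

definition block_of :: "nat list \<Rightarrow> nat \<Rightarrow> nat" where
  "block_of ps e = (THE c. c < length ps \<and> block_start ps c \<le> e \<and> e < block_start ps (Suc c))"

lemma block_of_bounds:
  assumes "e < sum_list ps"
  shows "block_of ps e < length ps \<and> block_start ps (block_of ps e) \<le> e
      \<and> e < block_start ps (Suc (block_of ps e))"
proof -
  obtain c where c: "c < length ps" "block_start ps c \<le> e" "e < block_start ps (Suc c)"
    using block_exists[OF assms] by blast
  have "block_of ps e = c" unfolding block_of_def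
    by (rule the_equality) (use c block_start_unique in auto)
  thus ?thesis using c by simp
qed

lemma block_of_eqI: "block_start ps c \<le> e \<Longrightarrow> e < block_start ps (Suc c) \<Longrightarrow> c < length ps
    \<Longrightarrow> block_of ps e = c"
proof -
  assume c: "block_start ps c \<le> e" "e < block_start ps (Suc c)" "c < length ps"
  have "e < sum_list ps" using c block_start_mono[of "Suc c" "length ps" ps] block_start_length[of ps "length ps"] by simp
  thus ?thesis using block_of_bounds[of e ps] block_start_unique c by blast
qed

lemma block_start_append_left: "c \<le> length a \<Longrightarrow> block_start (a @ b) c = block_start a c"
  by (simp add: block_start_def)

lemma block_start_append_right: "block_start (a @ b) (length a + k) = sum_list a + block_start b k"
  by (simp add: block_start_def)

lemma block_of_append_left:
  assumes "j < sum_list a"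
  shows "block_of (a @ b) j = block_of a j"
proof -
  have c: "block_of a j < length a" "block_start a (block_of a j) \<le> j"
    "j < block_start a (Suc (block_of a j))" using block_of_bounds[OF assms] by auto
  have "block_start (a @ b) (block_of a j) = block_start a (block_of a j)"
    "block_start (a @ b) (Suc (block_of a j)) = block_start a (Suc (block_of a j))"
    using c(1) by (auto simp: block_start_def)
  thus ?thesis using c by (intro block_of_eqI) auto
qed

lemma block_of_append_right:
  assumes "sum_list a \<le> j" "j < sum_list a + sum_list b"
  shows "block_of (a @ b) j = length a + block_of b (j - sum_list a)"
proof -
  obtain d where d: "j = sum_list a + d" using assms(1) le_iff_add by blast
  have jb: "d < sum_list b" using assms d by simp
  have c: "block_of b d < length b" "block_start b (block_of b d) \<le> d"
    "d < block_start b (Suc (block_of b d))" using block_of_bounds[OF jb] by auto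
  note e = block_start_append_right[of a b]
  have e1: "block_start (a @ b) (Suc (length a + block_of b d))
      = sum_list a + block_start b (Suc (block_of b d))"
    using e[of "Suc (block_of b d)"] by simp
  have "block_of (a @ b) j = length a + block_of b d"
    by (rule block_of_eqI) (use c d e[of "block_of b d"] e1 in auto)
  thus ?thesis using d by simp
qed

lemma block_start_le_sum: "block_start ps c \<le> sum_list ps"
proof (cases "c \<le> length ps")
  case True thus ?thesis using block_start_mono[OF True, of ps] block_start_length[of ps "length ps"] by simp
next
  case False thus ?thesis by (simp add: block_start_length)
qed

section \<open>Tabloids injective on blocks\<close>

definition is_tabloid :: "nat list \<Rightarrow> (nat \<Rightarrow> nat) \<Rightarrow> bool" where
  "is_tabloid lam r \<longleftrightarrow> (\<forall>e. sum_list lam \<le> e \<longrightarrow> r e = 0)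
      \<and> (\<forall>q. card {e\<in>{0..<sum_list lam}. r e = q} = (if q < length lam then lam ! q else 0))"

lemma is_tabloid_less_length:
  assumes "is_tabloid lam r" "e < sum_list lam"
  shows "r e < length lam"
proof (rule ccontr)
  assume "\<not> r e < length lam"
  hence "card {e'\<in>{0..<sum_list lam}. r e' = r e} = 0" using assms(1) by (simp add: is_tabloid_def)
  moreover have "e \<in> {e'\<in>{0..<sum_list lam}. r e' = r e}" using assms by simp
  moreover have "finite {e'\<in>{0..<sum_list lam}. r e' = r e}" by simp
  ultimately show False by (auto simp: card_eq_0_iff)
qed

lemma card_eq_sum_fibers:
  assumes "finite A" "r ` A \<subseteq> {..<(L::nat)}"
  shows "card A = (\<Sum>q<L. card {e\<in>A. r e = q})"
proof -
  have "A = (\<Union>q\<in>{..<L}. {e\<in>A. r e = q})" using assms by auto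
  hence "card A = card (\<Union>q\<in>{..<L}. {e\<in>A. r e = q})" by simp
  also have "\<dots> = (\<Sum>q<L. card {e\<in>A. r e = q})"
    using assms by (intro card_UN_disjoint) auto
  finally show ?thesis .
qed

locale injective_blocks =
  fixes lam :: "nat list" and r :: "nat \<Rightarrow> nat" and \<beta> :: "nat list" and D :: "nat \<Rightarrow> nat set"
  assumes tabloid: "is_tabloid lam r"
    and block_subset: "\<And>c. c < length \<beta> \<Longrightarrow> D c \<subseteq> {0..<sum_list lam}"
    and card_block: "\<And>c. c < length \<beta> \<Longrightarrow> card (D c) = \<beta> ! c"
    and blocks_disjoint: "\<And>c c'. c < length \<beta> \<Longrightarrow> c' < length \<beta> \<Longrightarrow> c \<noteq> c' \<Longrightarrow> D c \<inter> D c' = {}"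
    and inj_on_block: "\<And>c. c < length \<beta> \<Longrightarrow> inj_on r (D c)"
begin

definition blocks_below :: "nat \<Rightarrow> nat set" where "blocks_below c = (\<Union>j\<in>{..<c}. D j)"

lemma blocks_below_subset: "c \<le> length \<beta> \<Longrightarrow> blocks_below c \<subseteq> {0..<sum_list lam}"
proof
  fix x assume c: "c \<le> length \<beta>" and "x \<in> blocks_below c"
  then obtain j where "j < c" "x \<in> D j" by (auto simp: blocks_below_def)
  thus "x \<in> {0..<sum_list lam}" using block_subset[of j] c by auto
qed

lemma finite_block: "c < length \<beta> \<Longrightarrow> finite (D c)"
  using block_subset finite_subset by blast

lemma card_blocks_below: "c \<le> length \<beta> \<Longrightarrow> card (blocks_below c) = (\<Sum>j<c. \<beta> ! j)"
proof -
  assume c: "c \<le> length \<beta>"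
  have "card (blocks_below c) = (\<Sum>j<c. card (D j))"
    unfolding blocks_below_def using blocks_disjoint finite_block c by (intro card_UN_disjoint) auto
  also have "\<dots> = (\<Sum>j<c. \<beta> ! j)" using card_block c by (intro sum.cong) auto
  finally show ?thesis .
qed

lemma card_block_row_le_1: "c < length \<beta> \<Longrightarrow> card {e\<in>D c. r e = q} \<le> 1"
proof -
  assume c: "c < length \<beta>"
  have "inj_on r {e\<in>D c. r e = q}" using inj_on_block[OF c] by (auto intro: inj_on_subset)
  hence "card {e\<in>D c. r e = q} = card (r ` {e\<in>D c. r e = q})" by (rule card_image[symmetric])
  also have "\<dots> \<le> card {q}" by (intro card_mono) auto
  finally show ?thesis by simp
qed

lemma card_blocks_below_row_le_count: "c \<le> length \<beta> \<Longrightarrow> card {e\<in>blocks_below c. r e = q} \<le> c"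
proof -
  assume c: "c \<le> length \<beta>"
  have "{e\<in>blocks_below c. r e = q} = (\<Union>j\<in>{..<c}. {e\<in>D j. r e = q})" by (auto simp: blocks_below_def)
  hence "card {e\<in>blocks_below c. r e = q} \<le> (\<Sum>j<c. card {e\<in>D j. r e = q})"
    using card_UN_le[of "{..<c}"] by simp
  also have "\<dots> \<le> (\<Sum>j<c. 1)" using c card_block_row_le_1 by (intro sum_mono) auto
  finally show ?thesis by simp
qed

lemma card_blocks_below_row_le_row: "c \<le> length \<beta> \<Longrightarrow> q < length lam
    \<Longrightarrow> card {e\<in>blocks_below c. r e = q} \<le> lam ! q"
proof -
  assume c: "c \<le> length \<beta>" and q: "q < length lam"
  have "card {e\<in>blocks_below c. r e = q} \<le> card {e\<in>{0..<sum_list lam}. r e = q}"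
    using blocks_below_subset[OF c] by (intro card_mono) auto
  thus ?thesis using tabloid q by (simp add: is_tabloid_def)
qed

lemma card_blocks_below_eq_sum_rows: "c \<le> length \<beta>
    \<Longrightarrow> card (blocks_below c) = (\<Sum>q<length lam. card {e\<in>blocks_below c. r e = q})"
proof -
  assume c: "c \<le> length \<beta>"
  have "r ` blocks_below c \<subseteq> {..<length lam}"
    using blocks_below_subset[OF c] is_tabloid_less_length[OF tabloid] by auto
  moreover have "finite (blocks_below c)" using blocks_below_subset[OF c] finite_subset by blast
  ultimately show ?thesis by (intro card_eq_sum_fibers)
qed

lemma sum_block_sizes_le: "c \<le> length \<beta> \<Longrightarrow> (\<Sum>j<c. \<beta> ! j) \<le> (\<Sum>q<length lam. min (lam ! q) c)"
proof -
  assume c: "c \<le> length \<beta>"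
  have "(\<Sum>j<c. \<beta> ! j) = (\<Sum>q<length lam. card {e\<in>blocks_below c. r e = q})"
    using card_blocks_below[OF c] card_blocks_below_eq_sum_rows[OF c] by simp
  also have "\<dots> \<le> (\<Sum>q<length lam. min (lam ! q) c)"
    using card_blocks_below_row_le_count[OF c] card_blocks_below_row_le_row[OF c]
      by (intro sum_mono) auto
  finally show ?thesis .
qed

lemma not_lex_gt_conj_part:
  assumes pos: "\<forall>p\<in>set \<beta>. 0 < p"
  shows "\<not> lex_gt \<beta> (conj_part lam)"
proof
  assume "lex_gt \<beta> (conj_part lam)"
  hence "(conj_part lam, \<beta>) \<in> lexord {(x, y). x < y}" by (simp add: lex_gt_def)
  then consider (pre) a v where "\<beta> = conj_part lam @ a # v"
    | (diff) u a b v w where "a < b" "conj_part lam = u @ a # v" "\<beta> = u @ b # w"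
    by (auto simp: lexord_def)
  then show False
  proof cases
    case pre
    let ?M = "length (conj_part lam)"
    have le: "Suc ?M \<le> length \<beta>" using pre by simp
    have "(\<Sum>j<Suc ?M. \<beta> ! j) = sum_list (take (Suc ?M) \<beta>)" using le by (simp add: sum_list_take_eq_sum)
    also have "\<dots> = sum_list (conj_part lam) + a" using pre by simp
    also have "\<dots> = sum_list lam + a" by (simp add: sum_list_conj_part)
    finally have s: "(\<Sum>j<Suc ?M. \<beta> ! j) = sum_list lam + a" .
    have "a > 0" using pos pre by simp
    moreover have "card (blocks_below (Suc ?M)) \<le> card {0..<sum_list lam}"
      using blocks_below_subset[OF le] by (intro card_mono) simp_all
    ultimately show False using card_blocks_below[OF le] s by simp
  next
    case diff
    let ?c = "Suc (length u)"
    have le: "?c \<le> length \<beta>" and lec: "?c \<le> length (conj_part lam)" using diff by auto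
    have "(\<Sum>j<?c. \<beta> ! j) = sum_list (take ?c \<beta>)" using le by (simp add: sum_list_take_eq_sum)
    also have "\<dots> = sum_list u + b" using diff by simp
    finally have s1: "(\<Sum>j<?c. \<beta> ! j) = sum_list u + b" .
    have "(\<Sum>q<length lam. min (lam ! q) ?c) = sum_list (take ?c (conj_part lam))"
      using sum_list_take_conj_part[OF lec] by simp
    also have "\<dots> = sum_list u + a" using diff by simp
    finally show False using sum_block_sizes_le[OF le] s1 diff(1) by simp
  qed
qed

lemma card_block_row:
  assumes beq: "\<beta> = conj_part lam" and c: "c < length \<beta>" and q: "q < length lam"
  shows "card {e\<in>D c. r e = q} = (if c < lam ! q then 1 else 0)"
proof -
  (* For \<beta> = conj_part lam the bound of sum_block_sizes_le is attained, hence so is each summand. *)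
  have N: "card {e\<in>blocks_below c'. r e = q} = min (lam ! q) c'" if c': "c' \<le> length \<beta>" for c'
  proof -
    have "(\<Sum>q<length lam. card {e\<in>blocks_below c'. r e = q}) = (\<Sum>j<c'. \<beta> ! j)"
      using card_blocks_below[OF c'] card_blocks_below_eq_sum_rows[OF c'] by simp
    also have "\<dots> = sum_list (take c' \<beta>)" using c' by (simp add: sum_list_take_eq_sum)
    also have "\<dots> = (\<Sum>q<length lam. min (lam ! q) c')" using sum_list_take_conj_part c' beq by simp
    finally have eq: "(\<Sum>q<length lam. card {e\<in>blocks_below c'. r e = q})
        = (\<Sum>q<length lam. min (lam ! q) c')" .
    show "card {e\<in>blocks_below c'. r e = q} = min (lam ! q) c'"
      by (rule sum_mono_inv[OF eq]) (use card_blocks_below_row_le_count[OF c'] card_blocks_below_row_le_row[OF c'] q in auto)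
  qed
  have "{e\<in>blocks_below (Suc c). r e = q} = {e\<in>blocks_below c. r e = q} \<union> {e\<in>D c. r e = q}"
    by (auto simp: blocks_below_def less_Suc_eq)
  moreover have "{e\<in>blocks_below c. r e = q} \<inter> {e\<in>D c. r e = q} = {}"
  proof (rule ccontr)
    assume "\<not> ?thesis"
    then obtain x j where "j < c" "x \<in> D j" "x \<in> D c" by (auto simp: blocks_below_def)
    thus False using blocks_disjoint[of j c] c by auto
  qed
  moreover have "finite {e\<in>blocks_below c. r e = q}" "finite {e\<in>D c. r e = q}"
    using blocks_below_subset[of c] finite_block[OF c] c
      by (auto intro: finite_subset[of _ "{0..<sum_list lam}"])
  ultimately have "card {e\<in>blocks_below (Suc c). r e = q}
      = card {e\<in>blocks_below c. r e = q} + card {e\<in>D c. r e = q}"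
    by (simp add: card_Un_disjoint)
  thus ?thesis using N[of c] N[of "Suc c"] c by auto
qed

lemma ex1_block_row:
  assumes lam: "is_partition lam" and \<beta>: "\<beta> = conj_part lam" and c: "c < length \<beta>" and q: "q < \<beta> ! c"
  shows "\<exists>!e. e \<in> D c \<and> r e = q"
proof -
  have "(q, c) \<in> young lam" using young_iff_conj_part[OF lam] c q \<beta> by simp
  hence "q < length lam" "c < lam ! q" by (auto simp: young_def)
  hence "card {e\<in>D c. r e = q} = 1" using card_block_row[OF \<beta> c] by simp
  then obtain e' where "{e\<in>D c. r e = q} = {e'}" by (auto simp: card_Suc_eq)
  thus ?thesis by (intro ex1I[of _ e']) auto
qed

end

lemma module_scale1: "Modules.module (scale1 :: complex \<Rightarrow> ('a \<Rightarrow> complex) \<Rightarrow> _)"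
  by unfold_locales (auto simp: scale1_def fun_eq_iff algebra_simps)

lemma span_support:
  assumes "w \<in> Modules.module.span scale1 S"
    and "w x \<noteq> 0"
    and "\<And>v x. v \<in> S \<Longrightarrow> v x \<noteq> 0 \<Longrightarrow> x \<in> Z"
  shows "x \<in> Z"
proof -
  have "\<forall>x. w x \<noteq> 0 \<longrightarrow> x \<in> Z"
  proof (rule module.span_induct_alt[OF module_scale1 assms(1), where h="\<lambda>w. \<forall>x. w x \<noteq> 0 \<longrightarrow> x \<in> Z"])
    show "\<forall>x. (0::'a \<Rightarrow> complex) x \<noteq> 0 \<longrightarrow> x \<in> Z" by simp
  next
    fix c v and y :: "'a \<Rightarrow> complex" assume v: "v \<in> S" and y: "\<forall>x. y x \<noteq> 0 \<longrightarrow> x \<in> Z"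
    show "\<forall>x. (scale1 c v + y) x \<noteq> 0 \<longrightarrow> x \<in> Z"
    proof (intro allI impI)
      fix x assume h: "(scale1 c v + y) x \<noteq> 0"
      show "x \<in> Z"
      proof (cases "v x = 0")
        case True thus ?thesis using h y by (simp add: scale1_def)
      next
        case False thus ?thesis using assms(3)[OF v] by blast
      qed
    qed
  qed
  thus ?thesis using assms(2) by blast
qed

lemma span_base_scale1: "v \<in> S \<Longrightarrow> v \<in> Modules.module.span scale1 S"
  by (rule module.span_base[OF module_scale1])

lemma span_scale_scale1: "v \<in> Modules.module.span scale1 S \<Longrightarrow> scale1 c v \<in> Modules.module.span scale1 S"
  by (rule module.span_scale[OF module_scale1])

lemma span_zero_scale1: "0 \<in> Modules.module.span scale1 S"
  by (rule module.span_zero[OF module_scale1])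

lemma vector_space_scale3: "Vector_Spaces.vector_space (scale3 :: complex \<Rightarrow> ('a \<Rightarrow> 'b \<Rightarrow> 'c \<Rightarrow> complex) \<Rightarrow> _)"
  by unfold_locales (auto simp: scale3_def scale2_def scale1_def fun_eq_iff algebra_simps)

lemma module_scale3: "Modules.module (scale3 :: complex \<Rightarrow> ('a \<Rightarrow> 'b \<Rightarrow> 'c \<Rightarrow> complex) \<Rightarrow> _)"
  using module_iff_vector_space vector_space_scale3 by blast

lemma dim_scale3_zero:
  fixes V :: "('a \<Rightarrow> 'b \<Rightarrow> 'c \<Rightarrow> complex) set"
  assumes "V \<subseteq> {0}"
  shows "Vector_Spaces.vector_space.dim scale3 V = 0"
proof -
  have sp: "Modules.module.span scale3 V = Modules.module.span scale3 {}"
  proof -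
    have "Modules.module.span scale3 V \<subseteq> Modules.module.span scale3 {0::'a \<Rightarrow> 'b \<Rightarrow> 'c \<Rightarrow> complex}"
      using assms by (rule Modules.module.span_mono[OF module_scale3])
    also have "\<dots> = Modules.module.span scale3 {}"
      using vector_space.span_insert_0[OF vector_space_scale3, of "{}"] by simp
    finally have "Modules.module.span scale3 V \<subseteq> Modules.module.span scale3 {}" .
    moreover have "Modules.module.span scale3 {} \<subseteq> Modules.module.span scale3 V"
      by (rule Modules.module.span_mono[OF module_scale3]) simp
    ultimately show ?thesis by blast
  qed
  have "Vector_Spaces.vector_space.dim scale3 V = card ({} :: ('a \<Rightarrow> 'b \<Rightarrow> 'c \<Rightarrow> complex) set)"
    by (rule vector_space.dim_eq_card[OF vector_space_scale3]) (use sp Modules.module.independent_empty[OF module_scale3] in auto)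
  thus ?thesis by simp
qed

lemma dim_scale3_one:
  fixes V :: "('a \<Rightarrow> 'b \<Rightarrow> 'c \<Rightarrow> complex) set"
  assumes v: "v \<in> V" "v \<noteq> 0" and sub: "V \<subseteq> Modules.module.span scale3 {v}"
  shows "Vector_Spaces.vector_space.dim scale3 V = 1"
proof -
  note M = module_scale3
  have sp: "Modules.module.span scale3 {v} = Modules.module.span scale3 V"
  proof
    show "Modules.module.span scale3 {v} \<subseteq> Modules.module.span scale3 V"
      by (rule Modules.module.span_mono[OF M]) (use v in auto)
    show "Modules.module.span scale3 V \<subseteq> Modules.module.span scale3 {v}"
      using Modules.module.span_minimal[OF M sub Modules.module.subspace_span[OF M]] .
  qed
  have ind: "\<not> Modules.module.dependent scale3 {v}"
    using vector_space.dependent_single[OF vector_space_scale3, of v] v(2) by simp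
  have "Vector_Spaces.vector_space.dim scale3 V = card {v}"
    by (rule vector_space.dim_eq_card[OF vector_space_scale3 sp ind])
  thus ?thesis by simp
qed

section \<open>Tableaux and polytabloids\<close>

context
  fixes lam :: "nat list" and T :: "nat \<times> nat \<Rightarrow> nat"
  assumes T: "T \<in> tableaux lam"
begin

definition box_of :: "nat \<Rightarrow> nat \<times> nat" where
  "box_of = inv_into (young lam) T"

lemma tableau_bij: "bij_betw T (young lam) {0..<sum_list lam}"
  using T by (simp add: tableaux_def)

lemma box_of_in: "e < sum_list lam \<Longrightarrow> box_of e \<in> young lam \<and> T (box_of e) = e"
  using tableau_bij unfolding box_of_def
  by (metis atLeastLessThan_iff bij_betw_def f_inv_into_f inv_into_into zero_le)

lemma tableau_less: "b \<in> young lam \<Longrightarrow> T b < sum_list lam"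
  using tableau_bij by (auto simp: bij_betw_def)

lemma box_of_entry: "b \<in> young lam \<Longrightarrow> box_of (T b) = b"
  using tableau_bij unfolding box_of_def by (simp add: bij_betw_def inv_into_f_f)

lemma tableau_eq_iff: "b \<in> young lam \<Longrightarrow> b' \<in> young lam \<Longrightarrow> T b = T b' \<longleftrightarrow> b = b'"
  using tableau_bij by (auto simp: bij_betw_def inj_on_def)

lemma tabloid_of_box_of: "e < sum_list lam \<Longrightarrow> tabloid_of lam T e = fst (box_of e)"
proof -
  assume e: "e < sum_list lam"
  have "(THE b. b \<in> young lam \<and> T b = e) = box_of e"
    using box_of_in[OF e] tableau_eq_iff box_of_entry by (intro the_equality) auto
  thus ?thesis using e by (simp add: tabloid_of_def)
qed

lemma tabloid_of_out: "\<not> e < sum_list lam \<Longrightarrow> tabloid_of lam T e = 0"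
  by (simp add: tabloid_of_def)

lemma comp_in_tableaux: "\<pi> permutes {0..<sum_list lam} \<Longrightarrow> \<pi> \<circ> T \<in> tableaux lam"
  unfolding tableaux_def using tableau_bij
  by (auto intro: bij_betw_trans permutes_imp_bij)

lemma is_tabloid_tabloid_of: "is_tabloid lam (tabloid_of lam T)"
proof -
  have "card {e\<in>{0..<sum_list lam}. tabloid_of lam T e = q}
      = (if q < length lam then lam ! q else 0)" for q
  proof -
    have "{e\<in>{0..<sum_list lam}. tabloid_of lam T e = q} = T ` {b\<in>young lam. fst b = q}"
    proof
      show "{e\<in>{0..<sum_list lam}. tabloid_of lam T e = q} \<subseteq> T ` {b\<in>young lam. fst b = q}"
      proof
        fix e assume "e \<in> {e\<in>{0..<sum_list lam}. tabloid_of lam T e = q}"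
        hence e: "e < sum_list lam" "fst (box_of e) = q" using tabloid_of_box_of by auto
        thus "e \<in> T ` {b\<in>young lam. fst b = q}"
          using box_of_in[OF e(1)] by (metis (mono_tags, lifting) image_eqI mem_Collect_eq)
      qed
      show "T ` {b\<in>young lam. fst b = q} \<subseteq> {e\<in>{0..<sum_list lam}. tabloid_of lam T e = q}"
        using tableau_less tabloid_of_box_of box_of_entry by auto
    qed
    also have "card \<dots> = card {b\<in>young lam. fst b = q}"
      using tableau_bij by (intro card_image) (auto simp: bij_betw_def intro: inj_on_subset)
    also have "{b\<in>young lam. fst b = q} = (if q < length lam then (\<lambda>c. (q,c)) ` {..<lam ! q} else {})"
      by (auto simp: young_def)
    also have "card \<dots> = (if q < length lam then lam ! q else 0)"
      by (auto simp: card_image inj_on_def)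
    finally show ?thesis .
  qed
  thus ?thesis unfolding is_tabloid_def using tabloid_of_out by auto
qed

lemma col_stab_iff:
  "\<pi> \<in> col_stab lam T \<longleftrightarrow> \<pi> permutes {0..<sum_list lam}
      \<and> (\<forall>e<sum_list lam. snd (box_of (\<pi> e)) = snd (box_of e))"
proof
  assume a: "\<pi> \<in> col_stab lam T"
  hence p: "\<pi> permutes {0..<sum_list lam}" by (simp add: col_stab_def)
  have "snd (box_of (\<pi> e)) = snd (box_of e)" if e: "e < sum_list lam" for e
  proof -
    obtain b' where b': "b' \<in> young lam" "T b' = \<pi> (T (box_of e))" "snd b' = snd (box_of e)"
      using a box_of_in[OF e] unfolding col_stab_def by blast
    hence "box_of (\<pi> e) = b'" using box_of_entry box_of_in[OF e] by metis
    thus ?thesis using b' by simp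
  qed
  thus "\<pi> permutes {0..<sum_list lam} \<and> (\<forall>e<sum_list lam. snd (box_of (\<pi> e)) = snd (box_of e))"
    using p by blast
next
  assume a: "\<pi> permutes {0..<sum_list lam} \<and> (\<forall>e<sum_list lam. snd (box_of (\<pi> e)) = snd (box_of e))"
  have "\<exists>b'\<in>young lam. T b' = \<pi> (T b) \<and> snd b' = snd b" if b: "b \<in> young lam" for b
  proof -
    have e: "T b < sum_list lam" using tableau_less[OF b] .
    hence pe: "\<pi> (T b) < sum_list lam" using a permutes_in_image by fastforce
    show ?thesis using box_of_in[OF pe] a e box_of_entry[OF b]
      by (intro bexI[of _ "box_of (\<pi> (T b))"]) auto
  qed
  thus "\<pi> \<in> col_stab lam T" using a by (simp add: col_stab_def)
qed

lemma col_stab_permutes: "\<pi> \<in> col_stab lam T \<Longrightarrow> \<pi> permutes {0..<sum_list lam}"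
  by (simp add: col_stab_def)

lemma finite_col_stab: "finite (col_stab lam T)"
proof -
  have "col_stab lam T \<subseteq> {\<pi>. \<pi> permutes {0..<sum_list lam}}" by (auto simp: col_stab_def)
  thus ?thesis using finite_permutations[of "{0..<sum_list lam}"] finite_subset by auto
qed

lemma col_stab_comp: "\<pi> \<in> col_stab lam T \<Longrightarrow> \<sigma> \<in> col_stab lam T \<Longrightarrow> \<pi> \<circ> \<sigma> \<in> col_stab lam T"
proof -
  assume a: "\<pi> \<in> col_stab lam T" "\<sigma> \<in> col_stab lam T"
  have p: "\<pi> \<circ> \<sigma> permutes {0..<sum_list lam}"
    using a by (auto intro: permutes_compose simp: col_stab_def)
  have "snd (box_of (\<pi> (\<sigma> e))) = snd (box_of e)" if e: "e < sum_list lam" for e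
  proof -
    have "\<sigma> e < sum_list lam" using a(2) e permutes_in_image col_stab_permutes by fastforce
    thus ?thesis using a e by (simp add: col_stab_iff)
  qed
  thus ?thesis using p by (simp add: col_stab_iff)
qed

lemma col_stab_inv: "\<pi> \<in> col_stab lam T \<Longrightarrow> inv_into UNIV \<pi> \<in> col_stab lam T"
proof -
  assume a: "\<pi> \<in> col_stab lam T"
  have pp: "\<pi> permutes {0..<sum_list lam}" using a by (rule col_stab_permutes)
  have p: "inv_into UNIV \<pi> permutes {0..<sum_list lam}" using pp by (rule permutes_inv)
  have "snd (box_of (inv_into UNIV \<pi> e)) = snd (box_of e)" if e: "e < sum_list lam" for e
  proof -
    have ie: "inv_into UNIV \<pi> e < sum_list lam" using p e permutes_in_image by fastforce
    have "snd (box_of (\<pi> (inv_into UNIV \<pi> e))) = snd (box_of (inv_into UNIV \<pi> e))"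
      using a ie by (simp add: col_stab_iff)
    thus ?thesis using pp by (simp add: permutes_inverses(1))
  qed
  thus ?thesis using p by (simp add: col_stab_iff)
qed

lemma id_in_col_stab: "id \<in> col_stab lam T"
  by (simp add: col_stab_iff permutes_id)

end

lemma tabloid_of_comp:
  assumes T: "T \<in> tableaux lam" and p: "\<pi> permutes {0..<sum_list lam}"
  shows "tabloid_of lam (\<pi> \<circ> T) = tabloid_of lam T \<circ> inv_into UNIV \<pi>"
proof
  fix e
  have ip: "inv_into UNIV \<pi> permutes {0..<sum_list lam}" using p by (rule permutes_inv)
  show "tabloid_of lam (\<pi> \<circ> T) e = (tabloid_of lam T \<circ> inv_into UNIV \<pi>) e"
  proof (cases "e < sum_list lam")
    case True
    have ie: "inv_into UNIV \<pi> e < sum_list lam" using ip True permutes_in_image by fastforce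
    let ?b = "box_of lam T (inv_into UNIV \<pi> e)"
    have b: "?b \<in> young lam" "T ?b = inv_into UNIV \<pi> e" using box_of_in[OF T ie] by auto
    have "(\<pi> \<circ> T) ?b = e" using b p by (simp add: permutes_inverses(1))
    hence "box_of lam (\<pi> \<circ> T) e = ?b" using box_of_entry[OF comp_in_tableaux[OF T p] b(1)] by simp
    thus ?thesis using True ie tabloid_of_box_of[OF T] tabloid_of_box_of[OF comp_in_tableaux[OF T p]] by simp
  next
    case False
    have "\<not> inv_into UNIV \<pi> e < sum_list lam"
      using False ip p by (metis permutes_in_image atLeastLessThan_iff zero_le permutes_inverses(1))
    thus ?thesis using False tabloid_of_out[OF T] tabloid_of_out[OF comp_in_tableaux[OF T p]] by simp
  qed
qed

lemma box_of_comp: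
  assumes T: "T \<in> tableaux lam" and p: "\<pi> permutes {0..<sum_list lam}" and e: "e < sum_list lam"
  shows "box_of lam (\<pi> \<circ> T) e = box_of lam T (inv_into UNIV \<pi> e)"
proof -
  have ip: "inv_into UNIV \<pi> permutes {0..<sum_list lam}" using p by (rule permutes_inv)
  have ie: "inv_into UNIV \<pi> e < sum_list lam" using ip e permutes_in_image by fastforce
  let ?b = "box_of lam T (inv_into UNIV \<pi> e)"
  have b: "?b \<in> young lam" "T ?b = inv_into UNIV \<pi> e" using box_of_in[OF T ie] by auto
  have "(\<pi> \<circ> T) ?b = e" using b p by (simp add: permutes_inverses(1))
  thus ?thesis using box_of_entry[OF comp_in_tableaux[OF T p] b(1)] by simp
qed

lemma polytabloid_comp_eq_sum:
  assumes T: "T \<in> tableaux lam" and p: "\<pi> permutes {0..<sum_list lam}"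
  shows "polytabloid lam T (r \<circ> \<pi>)
      = (\<Sum>\<sigma>\<in>col_stab lam T. of_int (sign \<sigma>) * (if r = tabloid_of lam (\<pi> \<circ> \<sigma> \<circ> T) then 1 else 0))"
  unfolding polytabloid_def
proof (rule sum.cong[OF refl])
  fix \<sigma> assume s: "\<sigma> \<in> col_stab lam T"
  have sT: "\<sigma> \<circ> T \<in> tableaux lam" using comp_in_tableaux[OF T col_stab_permutes[OF T s]] .
  have "tabloid_of lam (\<pi> \<circ> \<sigma> \<circ> T) = tabloid_of lam (\<sigma> \<circ> T) \<circ> inv_into UNIV \<pi>"
    using tabloid_of_comp[OF sT p] by (simp add: o_assoc)
  moreover have "(r = t \<circ> inv_into UNIV \<pi>) \<longleftrightarrow> (r \<circ> \<pi> = t)" for t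
  proof
    assume "r = t \<circ> inv_into UNIV \<pi>" thus "r \<circ> \<pi> = t"
      using permutes_inverses[OF p] by (auto simp: fun_eq_iff)
  next
    assume h: "r \<circ> \<pi> = t"
    show "r = t \<circ> inv_into UNIV \<pi>"
    proof
      fix x
      have "r x = r (\<pi> (inv_into UNIV \<pi> x))" using permutes_inverses[OF p] by simp
      also have "\<dots> = t (inv_into UNIV \<pi> x)" using h by (auto simp: fun_eq_iff)
      finally show "r x = (t \<circ> inv_into UNIV \<pi>) x" by simp
    qed
  qed
  ultimately have "(r \<circ> \<pi> = tabloid_of lam (\<sigma> \<circ> T)) \<longleftrightarrow> (r = tabloid_of lam (\<pi> \<circ> \<sigma> \<circ> T))"
    by simp
  thus "of_int (sign \<sigma>) * (if r \<circ> \<pi> = tabloid_of lam (\<sigma> \<circ> T) then 1 else 0)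
      = of_int (sign \<sigma>) * (if r = tabloid_of lam (\<pi> \<circ> \<sigma> \<circ> T) then 1 else (0::complex))"
    by simp
qed

lemma permutes_interval_permutation: "\<pi> permutes {0..<(n::nat)} \<Longrightarrow> permutation \<pi>"
  using permutation_permutes by blast

lemma sign_conjugate:
  assumes p: "\<pi> permutes {0..<(n::nat)}" and s: "\<sigma> permutes {0..<n}"
  shows "sign (\<pi> \<circ> \<sigma> \<circ> inv_into UNIV \<pi>) = sign \<sigma>"
proof -
  have ip: "inv_into UNIV \<pi> permutes {0..<n}" using p by (rule permutes_inv)
  have 1: "sign (\<pi> \<circ> \<sigma> \<circ> inv_into UNIV \<pi>) = sign \<pi> * sign \<sigma> * sign (inv_into UNIV \<pi>)"
    using permutes_interval_permutation[OF p] permutes_interval_permutation[OF s] permutes_interval_permutation[OF ip]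
    by (simp only: sign_compose permutation_compose)
  have 2: "sign (inv_into UNIV \<pi>) = sign \<pi>"
    using sign_inverse permutes_interval_permutation[OF p] by blast
  show ?thesis unfolding 1 2 by (simp add: mult.commute mult.left_commute)
qed

lemma col_stab_conj:
  assumes T: "T \<in> tableaux lam" and p: "\<pi> permutes {0..<sum_list lam}" and s: "\<sigma> \<in> col_stab lam T"
  shows "\<pi> \<circ> \<sigma> \<circ> inv_into UNIV \<pi> \<in> col_stab lam (\<pi> \<circ> T)"
proof -
  let ?i = "inv_into UNIV \<pi>"
  have ip: "?i permutes {0..<sum_list lam}" using p by (rule permutes_inv)
  have sp: "\<sigma> permutes {0..<sum_list lam}" using s by (rule col_stab_permutes[OF T])
  have perm: "\<pi> \<circ> \<sigma> \<circ> ?i permutes {0..<sum_list lam}"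
    using p sp ip by (intro permutes_compose)
  have "snd (box_of lam (\<pi> \<circ> T) ((\<pi> \<circ> \<sigma> \<circ> ?i) e)) = snd (box_of lam (\<pi> \<circ> T) e)"
    if e: "e < sum_list lam" for e
  proof -
    have ie: "?i e < sum_list lam" using ip e permutes_in_image by fastforce
    have sie: "\<sigma> (?i e) < sum_list lam" using sp ie permutes_in_image by fastforce
    have "(\<pi> \<circ> \<sigma> \<circ> ?i) e < sum_list lam" using p sie permutes_in_image by fastforce
    hence "box_of lam (\<pi> \<circ> T) ((\<pi> \<circ> \<sigma> \<circ> ?i) e) = box_of lam T (\<sigma> (?i e))"
      using box_of_comp[OF T p] permutes_inverses[OF p] by simp
    moreover have "box_of lam (\<pi> \<circ> T) e = box_of lam T (?i e)" using box_of_comp[OF T p e] .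
    moreover have "snd (box_of lam T (\<sigma> (?i e))) = snd (box_of lam T (?i e))"
      using s ie col_stab_iff[OF T] by blast
    ultimately show ?thesis by simp
  qed
  thus ?thesis using perm col_stab_iff[OF comp_in_tableaux[OF T p]] by blast
qed

lemma polytabloid_comp:
  assumes T: "T \<in> tableaux lam" and p: "\<pi> permutes {0..<sum_list lam}"
  shows "polytabloid lam T (r \<circ> \<pi>) = polytabloid lam (\<pi> \<circ> T) r"
proof -
  let ?i = "inv_into UNIV \<pi>"
  have ip: "?i permutes {0..<sum_list lam}" using p by (rule permutes_inv)
  note pi = permutes_inverses[OF p]
  have "polytabloid lam T (r \<circ> \<pi>)
      = (\<Sum>\<sigma>\<in>col_stab lam T. of_int (sign \<sigma>) * (if r = tabloid_of lam (\<pi> \<circ> \<sigma> \<circ> T) then 1 else 0))"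
    by (rule polytabloid_comp_eq_sum[OF T p])
  also have "\<dots> = polytabloid lam (\<pi> \<circ> T) r"
    unfolding polytabloid_def
  proof (rule sum.reindex_bij_witness[where j = "\<lambda>\<sigma>. \<pi> \<circ> \<sigma> \<circ> ?i" and i = "\<lambda>\<tau>. ?i \<circ> \<tau> \<circ> \<pi>"])
    fix \<sigma> assume s: "\<sigma> \<in> col_stab lam T"
    show "?i \<circ> (\<pi> \<circ> \<sigma> \<circ> ?i) \<circ> \<pi> = \<sigma>" using pi by (simp add: fun_eq_iff)
    show "\<pi> \<circ> \<sigma> \<circ> ?i \<in> col_stab lam (\<pi> \<circ> T)" by (rule col_stab_conj[OF T p s])
    have "\<pi> \<circ> \<sigma> \<circ> ?i \<circ> (\<pi> \<circ> T) = \<pi> \<circ> \<sigma> \<circ> T" using pi by (simp add: fun_eq_iff)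
    moreover have "sign (\<pi> \<circ> \<sigma> \<circ> ?i) = sign \<sigma>"
      by (rule sign_conjugate[OF p col_stab_permutes[OF T s]])
    ultimately show "of_int (sign (\<pi> \<circ> \<sigma> \<circ> ?i))
        * (if r = tabloid_of lam ((\<pi> \<circ> \<sigma> \<circ> ?i) \<circ> (\<pi> \<circ> T)) then 1 else 0) = of_int (sign \<sigma>) * (if r = tabloid_of lam (\<pi> \<circ> \<sigma> \<circ> T) then 1 else (0::complex))" by simp
  next
    fix \<tau> assume t: "\<tau> \<in> col_stab lam (\<pi> \<circ> T)"
    show "\<pi> \<circ> (?i \<circ> \<tau> \<circ> \<pi>) \<circ> ?i = \<tau>" using pi by (simp add: fun_eq_iff)
    have "?i \<circ> \<tau> \<circ> inv_into UNIV ?i \<in> col_stab lam (?i \<circ> (\<pi> \<circ> T))"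
      by (rule col_stab_conj[OF comp_in_tableaux[OF T p] ip t])
    moreover have "inv_into UNIV ?i = \<pi>" using p by (simp add: inv_inv_eq permutes_bij)
    moreover have "?i \<circ> (\<pi> \<circ> T) = T" using pi by (simp add: fun_eq_iff)
    ultimately show "?i \<circ> \<tau> \<circ> \<pi> \<in> col_stab lam T" by simp
  qed
  finally show ?thesis .
qed

lemma polytabloid_comp_col_stab:
  assumes T: "T \<in> tableaux lam" and p: "\<pi> \<in> col_stab lam T"
  shows "polytabloid lam T (r \<circ> \<pi>) = of_int (sign \<pi>) * polytabloid lam T r"
proof -
  let ?i = "inv_into UNIV \<pi>"
  have pp: "\<pi> permutes {0..<sum_list lam}" using p by (rule col_stab_permutes[OF T])
  note pi = permutes_inverses[OF pp]
  have ipc: "?i \<in> col_stab lam T" using col_stab_inv[OF T p] .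
  have "polytabloid lam T (r \<circ> \<pi>)
      = (\<Sum>\<sigma>\<in>col_stab lam T. of_int (sign \<sigma>) * (if r = tabloid_of lam (\<pi> \<circ> \<sigma> \<circ> T) then 1 else 0))"
    by (rule polytabloid_comp_eq_sum[OF T pp])
  also have "\<dots> = (\<Sum>\<sigma>\<in>col_stab lam T. of_int (sign \<pi>) * (of_int (sign \<sigma>) * (if r = tabloid_of lam (\<sigma> \<circ> T) then 1 else 0)))"
  proof (rule sum.reindex_bij_witness[where j = "\<lambda>\<sigma>. \<pi> \<circ> \<sigma>" and i = "\<lambda>\<tau>. ?i \<circ> \<tau>"])
    fix \<sigma> assume s: "\<sigma> \<in> col_stab lam T"
    show "?i \<circ> (\<pi> \<circ> \<sigma>) = \<sigma>" using pi by (simp add: fun_eq_iff)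
    show "\<pi> \<circ> \<sigma> \<in> col_stab lam T" using col_stab_comp[OF T p s] .
    have sp: "\<sigma> permutes {0..<sum_list lam}" using s by (rule col_stab_permutes[OF T])
    have "sign (\<pi> \<circ> \<sigma>) = sign \<pi> * sign \<sigma>"
      using permutes_interval_permutation[OF pp] permutes_interval_permutation[OF sp]
        by (simp add: sign_compose)
    moreover have "of_int (sign \<pi>) * of_int (sign \<pi>) = (1::complex)"
      by (simp only: of_int_mult[symmetric] sign_idempotent of_int_1)
    ultimately show "of_int (sign \<pi>)
        * (of_int (sign (\<pi> \<circ> \<sigma>)) * (if r = tabloid_of lam ((\<pi> \<circ> \<sigma>) \<circ> T) then 1 else 0)) = of_int (sign \<sigma>) * (if r = tabloid_of lam (\<pi> \<circ> \<sigma> \<circ> T) then 1 else (0::complex))"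
      by (simp add: o_assoc mult.assoc[symmetric])
  next
    fix \<tau> assume t: "\<tau> \<in> col_stab lam T"
    show "\<pi> \<circ> (?i \<circ> \<tau>) = \<tau>" using pi by (simp add: fun_eq_iff)
    show "?i \<circ> \<tau> \<in> col_stab lam T" using col_stab_comp[OF T ipc t] .
  qed
  also have "\<dots> = of_int (sign \<pi>) * polytabloid lam T r"
    by (simp add: polytabloid_def sum_distrib_left)
  finally show ?thesis .
qed

lemma polytabloid_nonzero:
  assumes T: "T \<in> tableaux lam" and "polytabloid lam T r \<noteq> 0"
  shows "\<exists>\<sigma>\<in>col_stab lam T. r = tabloid_of lam (\<sigma> \<circ> T)"
proof (rule ccontr)
  assume "\<not> ?thesis"
  hence "polytabloid lam T r = 0" unfolding polytabloid_def by (intro sum.neutral) auto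
  thus False using assms by simp
qed

lemma specht_support:
  assumes "f \<in> specht lam" "f r \<noteq> 0"
  shows "is_tabloid lam r"
proof -
  have "r \<in> {r. is_tabloid lam r}"
  proof (rule span_support[where w=f and S="{polytabloid lam T |T. T \<in> tableaux lam}"])
    show "f \<in> Modules.module.span scale1 {polytabloid lam T |T. T \<in> tableaux lam}"
      using assms(1) by (simp add: specht_def)
    show "f r \<noteq> 0" by (rule assms(2))
  next
    fix v x assume v: "v \<in> {polytabloid lam T |T. T \<in> tableaux lam}" and vx: "v x \<noteq> 0"
    then obtain T where T: "T \<in> tableaux lam" "v = polytabloid lam T" by auto
    then obtain \<sigma> where s: "\<sigma> \<in> col_stab lam T" "x = tabloid_of lam (\<sigma> \<circ> T)"
      using polytabloid_nonzero vx by blast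
    have "\<sigma> \<circ> T \<in> tableaux lam" by (rule comp_in_tableaux[OF T(1) col_stab_permutes[OF T(1) s(1)]])
    thus "x \<in> {r. is_tabloid lam r}" using s(2) is_tabloid_tabloid_of by auto
  qed
  thus ?thesis by simp
qed

lemma tensor_specht_support:
  assumes "w \<in> tensor_specht lam mu" "w (r1, r2) \<noteq> 0"
  shows "is_tabloid lam r1 \<and> is_tabloid mu r2"
proof -
  have "(r1, r2) \<in> {(r1, r2). is_tabloid lam r1 \<and> is_tabloid mu r2}"
  proof (rule span_support[where w=w
    and S="{(\<lambda>(r1, r2). f r1 * g r2) |f g. f \<in> specht lam \<and> g \<in> specht mu}"])
    show "w \<in> Modules.module.span scale1 {(\<lambda>(r1, r2). f r1 * g r2) |f g. f \<in> specht lam \<and> g \<in> specht mu}"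
      using assms(1) by (simp add: tensor_specht_def)
    show "w (r1, r2) \<noteq> 0" by (rule assms(2))
  next
    fix v x assume v: "v \<in> {(\<lambda>(r1, r2). f r1 * g r2) |f g. f \<in> specht lam \<and> g \<in> specht mu}"
      and vx: "v x \<noteq> 0"
    then obtain f g where fg: "f \<in> specht lam" "g \<in> specht mu" "v = (\<lambda>(r1, r2). f r1 * g r2)" by auto
    obtain x1 x2 where x: "x = (x1, x2)" by fastforce
    have "f x1 \<noteq> 0" "g x2 \<noteq> 0" using vx fg(3) x by auto
    thus "x \<in> {(r1, r2). is_tabloid lam r1 \<and> is_tabloid mu r2}" using specht_support fg x by auto
  qed
  thus ?thesis by simp
qed

definition col_tableau :: "nat list \<Rightarrow> nat \<times> nat \<Rightarrow> nat" where
  "col_tableau lam = (\<lambda>(q, c). block_start (conj_part lam) c + q)"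

lemma inj_on_col_tableau:
  assumes lam: "is_partition lam"
  shows "inj_on (col_tableau lam) (young lam)"
proof (rule inj_onI)
  let ?a = "conj_part lam"
  fix b b' assume b: "b \<in> young lam" "b' \<in> young lam" "col_tableau lam b = col_tableau lam b'"
  obtain q c where qc: "b = (q,c)" by fastforce
  obtain q' c' where qc': "b' = (q',c')" by fastforce
  have h: "c < length ?a" "q < ?a ! c" "c' < length ?a" "q' < ?a ! c'"
    using b qc qc' young_iff_conj_part[OF lam] by auto
  have e1: "block_start ?a c \<le> block_start ?a c + q" "block_start ?a c + q < block_start ?a (Suc c)"
    using h block_start_Suc by auto
  have e2: "block_start ?a c' \<le> block_start ?a c + q" "block_start ?a c + q < block_start ?a (Suc c')"
    using h block_start_Suc[of c' ?a] b(3) qc qc' by (auto simp: col_tableau_def)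
  have "c = c'" using block_start_unique[OF e1 e2] .
  thus "b = b'" using b(3) qc qc' by (simp add: col_tableau_def)
qed

lemma col_tableau_image:
  assumes lam: "is_partition lam"
  shows "col_tableau lam ` young lam = {0..<sum_list lam}"
proof -
  let ?a = "conj_part lam"
  have m: "sum_list ?a = sum_list lam" by (rule sum_list_conj_part)
  show ?thesis
  proof
    show "col_tableau lam ` young lam \<subseteq> {0..<sum_list lam}"
    proof
      fix e assume "e \<in> col_tableau lam ` young lam"
      then obtain q c where qc: "(q,c) \<in> young lam" "e = block_start ?a c + q"
        by (auto simp: col_tableau_def)
      have h: "c < length ?a" "q < ?a ! c" using qc young_iff_conj_part[OF lam] by auto
      have "e < block_start ?a (Suc c)" using h qc block_start_Suc by simp
      also have "\<dots> \<le> block_start ?a (length ?a)" using h by (intro block_start_mono) simp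
      finally show "e \<in> {0..<sum_list lam}" using block_start_length[of ?a] m by simp
    qed
    show "{0..<sum_list lam} \<subseteq> col_tableau lam ` young lam"
    proof
      fix e assume "e \<in> {0..<sum_list lam}"
      hence "e < sum_list ?a" using m by simp
      then obtain c where c: "c < length ?a" "block_start ?a c \<le> e" "e < block_start ?a (Suc c)"
        using block_exists by blast
      have "(e - block_start ?a c, c) \<in> young lam"
        using c block_start_Suc young_iff_conj_part[OF lam] by auto
      moreover have "col_tableau lam (e - block_start ?a c, c) = e"
        using c by (simp add: col_tableau_def)
      ultimately show "e \<in> col_tableau lam ` young lam" by force
    qed
  qed
qed

lemma col_tableau_in_tableaux:
  assumes lam: "is_partition lam"
  shows "col_tableau lam \<in> tableaux lam"
  using inj_on_col_tableau[OF lam] col_tableau_image[OF lam] by (simp add: tableaux_def bij_betw_def)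

lemma box_of_col_tableau:
  assumes lam: "is_partition lam" and e: "e < sum_list lam"
  shows "box_of lam (col_tableau lam) e
      = (e - block_start (conj_part lam) (block_of (conj_part lam) e), block_of (conj_part lam) e)"
proof -
  let ?a = "conj_part lam" let ?c = "block_of ?a e"
  have c: "?c < length ?a" "block_start ?a ?c \<le> e" "e < block_start ?a (Suc ?c)"
    using block_of_bounds[of e ?a] e sum_list_conj_part by auto
  have y: "(e - block_start ?a ?c, ?c) \<in> young lam"
    using c block_start_Suc young_iff_conj_part[OF lam] by auto
  have "col_tableau lam (e - block_start ?a ?c, ?c) = e" using c by (simp add: col_tableau_def)
  thus ?thesis using box_of_entry[OF col_tableau_in_tableaux[OF lam] y] by simp
qed

lemma col_stab_col_tableauI:
  assumes lam: "is_partition lam" and p: "\<pi> permutes {0..<sum_list lam}"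
    and preserves_blocks: "\<And>c e. c < length (conj_part lam) \<Longrightarrow>
        block_start (conj_part lam) c \<le> e \<Longrightarrow> e < block_start (conj_part lam) (Suc c) \<Longrightarrow>
        block_start (conj_part lam) c \<le> \<pi> e \<and> \<pi> e < block_start (conj_part lam) (Suc c)"
  shows "\<pi> \<in> col_stab lam (col_tableau lam)"
proof -
  let ?a = "conj_part lam"
  have "snd (box_of lam (col_tableau lam) (\<pi> e)) = snd (box_of lam (col_tableau lam) e)"
    if e: "e < sum_list lam" for e
  proof -
    have c: "block_of ?a e < length ?a" "block_start ?a (block_of ?a e) \<le> e"
      "e < block_start ?a (Suc (block_of ?a e))" using block_of_bounds[of e ?a] e sum_list_conj_part by auto
    have pe: "\<pi> e < sum_list lam" using p e permutes_in_image by fastforce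
    have "block_of ?a (\<pi> e) = block_of ?a e"
      using preserves_blocks[OF c] c(1) by (intro block_of_eqI) auto
    thus ?thesis using box_of_col_tableau[OF lam e] box_of_col_tableau[OF lam pe] by simp
  qed
  thus ?thesis using p col_stab_iff[OF col_tableau_in_tableaux[OF lam]] by blast
qed

lemma col_stab_tabloid_inj:
  assumes T: "T \<in> tableaux lam" and s: "\<sigma> \<in> col_stab lam T" and p: "\<pi> \<in> col_stab lam T"
    and eq: "tabloid_of lam (\<sigma> \<circ> T) = tabloid_of lam (\<pi> \<circ> T)"
  shows "\<sigma> = \<pi>"
proof -
  have sp: "\<sigma> permutes {0..<sum_list lam}" and pp: "\<pi> permutes {0..<sum_list lam}"
    using s p col_stab_permutes[OF T] by auto
  let ?is = "inv_into UNIV \<sigma>" and ?ip = "inv_into UNIV \<pi>"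
  have isc: "?is \<in> col_stab lam T" and ipc: "?ip \<in> col_stab lam T" using col_stab_inv[OF T] s p by auto
  have isp: "?is permutes {0..<sum_list lam}" and ipp: "?ip permutes {0..<sum_list lam}"
    using sp pp by (auto intro: permutes_inv)
  have eq2: "tabloid_of lam T \<circ> ?is = tabloid_of lam T \<circ> ?ip"
    using eq tabloid_of_comp[OF T sp] tabloid_of_comp[OF T pp] by simp
  have "?is e = ?ip e" for e
  proof (cases "e < sum_list lam")
    case True
    have a: "?is e < sum_list lam" "?ip e < sum_list lam"
      using True isp ipp permutes_in_image by fastforce+
    have "fst (box_of lam T (?is e)) = fst (box_of lam T (?ip e))"
      using fun_cong[OF eq2, of e] tabloid_of_box_of[OF T a(1)] tabloid_of_box_of[OF T a(2)] by simp
    moreover have "snd (box_of lam T (?is e)) = snd (box_of lam T e)"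
      "snd (box_of lam T (?ip e)) = snd (box_of lam T e)"
      using isc ipc True col_stab_iff[OF T] by blast+
    ultimately have "box_of lam T (?is e) = box_of lam T (?ip e)" by (simp add: prod_eq_iff)
    moreover have "T (box_of lam T (?is e)) = ?is e" "T (box_of lam T (?ip e)) = ?ip e"
      using box_of_in[OF T a(1)] box_of_in[OF T a(2)] by auto
    ultimately show ?thesis by metis
  next
    case False
    thus ?thesis using isp ipp by (simp add: permutes_not_in)
  qed
  hence "?is = ?ip" by auto
  hence "inv_into UNIV ?is = inv_into UNIV ?ip" by simp
  thus ?thesis using sp pp by (simp add: inv_inv_eq permutes_bij)
qed

lemma polytabloid_col_stab_tabloid:
  assumes T: "T \<in> tableaux lam" and p: "\<pi> \<in> col_stab lam T"
  shows "polytabloid lam T (tabloid_of lam (\<pi> \<circ> T)) = of_int (sign \<pi>)"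
proof -
  have "polytabloid lam T (tabloid_of lam (\<pi> \<circ> T))
      = (\<Sum>\<sigma>\<in>col_stab lam T. if \<sigma> = \<pi> then of_int (sign \<sigma>) else 0)"
    unfolding polytabloid_def
    by (intro sum.cong refl) (use col_stab_tabloid_inj[OF T _ p] in auto)
  also have "\<dots> = of_int (sign \<pi>)" using p finite_col_stab[OF T] by simp
  finally show ?thesis .
qed

lemma block_perm_exists:
  fixes ps :: "nat list" and r :: "nat \<Rightarrow> nat"
  assumes uniq: "\<And>c q. c < length ps \<Longrightarrow> q < ps ! c
      \<Longrightarrow> \<exists>!e. e \<in> {block_start ps c..<block_start ps (Suc c)} \<and> r e = q"
  obtains \<pi> where "\<pi> permutes {0..<sum_list ps}"
    and "\<And>e. e < sum_list ps \<Longrightarrow> block_of ps (\<pi> e) = block_of ps e"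
    and "\<And>e. e < sum_list ps \<Longrightarrow> r (\<pi> e) = e - block_start ps (block_of ps e)"
proof -
  let ?m = "sum_list ps" and ?s = "\<lambda>e. block_start ps (block_of ps e)"
  define \<pi> where "\<pi> e = (if e < ?m then (THE e'. e' \<in> {?s e..<block_start ps (Suc (block_of ps e))} \<and> r e' = e - ?s e) else e)" for e
  have spec: "\<pi> e \<in> {?s e..<block_start ps (Suc (block_of ps e))} \<and> r (\<pi> e) = e - ?s e"
    if e: "e < ?m" for e
  proof -
    note b = block_of_bounds[OF e]
    hence "e - ?s e < ps ! block_of ps e" using block_start_Suc by auto
    from theI'[OF uniq[OF conjunct1[OF b] this]] show ?thesis using e by (simp add: \<pi>_def)
  qed
  have blk: "block_of ps (\<pi> e) = block_of ps e" if e: "e < ?m" for e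
    using spec[OF e] block_of_bounds[OF e] by (intro block_of_eqI) auto
  have less: "\<pi> e < ?m" if "e < ?m" for e
    using spec[OF that] block_start_le_sum[of ps "Suc (block_of ps e)"] by auto
  have inj: "inj_on \<pi> {0..<?m}"
  proof (rule inj_onI)
    fix x y assume x: "x \<in> {0..<?m}" and y: "y \<in> {0..<?m}" and eq: "\<pi> x = \<pi> y"
    have "block_of ps x = block_of ps y" using blk[of x] blk[of y] x y eq by simp
    moreover have "?s x \<le> x" "?s y \<le> y" using block_of_bounds x y by auto
    moreover have "x - ?s x = y - ?s y" using spec[of x] spec[of y] x y eq by simp
    ultimately show "x = y" by simp
  qed
  have "\<pi> permutes {0..<?m}"
  proof (rule bij_imp_permutes)
    show "bij_betw \<pi> {0..<?m} {0..<?m}"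
      using inj less by (simp add: bij_betw_def endo_inj_surj image_subset_iff)
    show "\<And>x. x \<notin> {0..<?m} \<Longrightarrow> \<pi> x = x" by (simp add: \<pi>_def)
  qed
  thus ?thesis using that blk spec by blast
qed

lemma col_stab_realizes_tabloid:
  assumes lam: "is_partition lam" and rc: "is_tabloid lam r"
    and inj: "\<And>c. c < length (conj_part lam)
        \<Longrightarrow> inj_on r {block_start (conj_part lam) c..<block_start (conj_part lam) (Suc c)}"
  obtains \<pi> where "\<pi> \<in> col_stab lam (col_tableau lam)" and "r = tabloid_of lam (\<pi> \<circ> col_tableau lam)"
proof -
  let ?a = "conj_part lam" and ?m = "sum_list lam" and ?T = "col_tableau lam"
  define D where "D c = {block_start ?a c..<block_start ?a (Suc c)}" for c
  have m: "sum_list ?a = ?m" by (rule sum_list_conj_part)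
  have T: "?T \<in> tableaux lam" by (rule col_tableau_in_tableaux[OF lam])
  interpret B: injective_blocks lam r ?a D
  proof
    show "is_tabloid lam r" by (rule rc)
    show "D c \<subseteq> {0..<?m}" if "c < length ?a" for c
      using block_start_le_sum[of ?a "Suc c"] m by (auto simp: D_def)
    show "\<And>c. c < length ?a \<Longrightarrow> card (D c) = ?a ! c" by (simp add: D_def block_start_Suc)
    show "\<And>c c'. c < length ?a \<Longrightarrow> c' < length ?a \<Longrightarrow> c \<noteq> c' \<Longrightarrow> D c \<inter> D c' = {}"
      using block_start_unique by (fastforce simp: D_def)
    show "\<And>c. c < length ?a \<Longrightarrow> inj_on r (D c)" using inj by (simp add: D_def)
  qed
  obtain \<pi> where \<pi>: "\<pi> permutes {0..<?m}"
    "\<And>e. e < ?m \<Longrightarrow> block_of ?a (\<pi> e) = block_of ?a e"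
    "\<And>e. e < ?m \<Longrightarrow> r (\<pi> e) = e - block_start ?a (block_of ?a e)"
    using block_perm_exists[of ?a r] B.ex1_block_row[OF lam refl] m unfolding D_def by metis
  have "\<pi> \<in> col_stab lam ?T"
  proof (rule col_stab_col_tableauI[OF lam \<pi>(1)])
    fix c e assume c: "c < length ?a" "block_start ?a c \<le> e" "e < block_start ?a (Suc c)"
    have e: "e < ?m" using c(3) block_start_le_sum[of ?a "Suc c"] m by simp
    have "block_of ?a (\<pi> e) = c" using c \<pi>(2)[OF e] by (simp add: block_of_eqI)
    moreover have "\<pi> e < sum_list ?a" using permutes_in_image[OF \<pi>(1)] e m by simp
    ultimately show "block_start ?a c \<le> \<pi> e \<and> \<pi> e < block_start ?a (Suc c)"
      using block_of_bounds[of "\<pi> e" ?a] by simp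
  qed
  moreover have "r e = tabloid_of lam (\<pi> \<circ> ?T) e" for e
  proof (cases "e < ?m")
    case True
    let ?e = "inv_into UNIV \<pi> e"
    have ie: "?e < ?m" using True permutes_inv[OF \<pi>(1)] permutes_in_image by fastforce
    have "tabloid_of lam (\<pi> \<circ> ?T) e = fst (box_of lam ?T ?e)"
      using tabloid_of_box_of[OF comp_in_tableaux[OF T \<pi>(1)] True] box_of_comp[OF T \<pi>(1) True] by simp
    also have "\<dots> = r (\<pi> ?e)" using box_of_col_tableau[OF lam ie] \<pi>(3)[OF ie] by simp
    finally show ?thesis using permutes_inverses(1)[OF \<pi>(1)] by simp
  next
    case False
    thus ?thesis using rc tabloid_of_out[OF comp_in_tableaux[OF T \<pi>(1)]] by (simp add: is_tabloid_def)
  qed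
  ultimately show ?thesis using that by blast
qed

lemma block_of_col_stab:
  assumes lam: "is_partition lam" and p: "\<pi> \<in> col_stab lam (col_tableau lam)" and e: "e < sum_list lam"
  shows "block_of (conj_part lam) (\<pi> e) = block_of (conj_part lam) e"
proof -
  have pe: "\<pi> e < sum_list lam"
    using permutes_in_image[OF col_stab_permutes[OF col_tableau_in_tableaux[OF lam] p], of e] e by simp
  have "snd (box_of lam (col_tableau lam) (\<pi> e)) = snd (box_of lam (col_tableau lam) e)"
    using p e col_stab_iff[OF col_tableau_in_tableaux[OF lam]] by blast
  thus ?thesis using box_of_col_tableau[OF lam e] box_of_col_tableau[OF lam pe] by simp
qed

definition join_perm :: "nat \<Rightarrow> nat \<Rightarrow> (nat \<Rightarrow> nat) \<Rightarrow> (nat \<Rightarrow> nat) \<Rightarrow> nat \<Rightarrow> nat" where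
  "join_perm i n p1 p2 e = (if e < i then p1 e else if e < n then p2 (e - i) + i else e)"

definition low_perm :: "nat \<Rightarrow> (nat \<Rightarrow> nat) \<Rightarrow> nat \<Rightarrow> nat" where
  "low_perm i p e = (if e < i then p e else e)"

definition high_perm :: "nat \<Rightarrow> nat \<Rightarrow> (nat \<Rightarrow> nat) \<Rightarrow> nat \<Rightarrow> nat" where
  "high_perm i n p e = (if e < n - i then p (e + i) - i else e)"

lemma act_W_eq: "act_W i n h w (r1, r2)
    = of_int (chi i h) * w (r1 \<circ> low_perm i (sp_perm h), r2 \<circ> high_perm i n (sp_perm h))"
  by (simp add: act_W_def low_perm_def[abs_def] high_perm_def[abs_def])

lemma shift_permutes:
  fixes i m :: nat
  assumes p: "p permutes {0..<m}"
  shows "(\<lambda>e. if i \<le> e \<and> e < i + m then p (e - i) + i else e) permutes {i..<i+m}"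
    and "sign (\<lambda>e. if i \<le> e \<and> e < i + m then p (e - i) + i else e) = sign p"
proof -
  let ?f = "\<lambda>e::nat. e + i"
  have inj: "inj_on ?f {0..<m}" by (simp add: inj_on_def)
  have img: "?f ` {0..<m} = {i..<i+m}" by (simp add: add.commute)
  have eq: "map_permutation {0..<m} ?f p = (\<lambda>e. if i \<le> e \<and> e < i + m then p (e - i) + i else e)"
  proof
    fix e
    show "map_permutation {0..<m} ?f p e = (if i \<le> e \<and> e < i + m then p (e - i) + i else e)"
    proof (cases "i \<le> e \<and> e < i + m")
      case True
      hence "e \<in> ?f ` {0..<m}" using img by auto
      moreover have "inv_into {0..<m} ?f e = e - i"
        using True by (intro inv_into_f_eq[OF inj]) auto
      ultimately show ?thesis using True by (auto simp add: map_permutation_def restrict_id_def img)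
    next
      case False
      hence "e \<notin> ?f ` {0..<m}" using img by auto
      thus ?thesis using False by (auto simp add: map_permutation_def restrict_id_def img)
    qed
  qed
  have bij: "bij_betw ?f {0..<m} {i..<i+m}" using inj img by (simp add: bij_betw_def)
  have "map_permutation {0..<m} ?f p permutes {i..<i+m}"
    by (rule map_permutation_permutes[OF bij p])
  thus "(\<lambda>e. if i \<le> e \<and> e < i + m then p (e - i) + i else e) permutes {i..<i+m}" using eq by simp
  show "sign (\<lambda>e. if i \<le> e \<and> e < i + m then p (e - i) + i else e) = sign p"
    using sign_map_permutation[OF inj p] eq by simp
qed

lemma join_perm_permutes:
  assumes p1: "p1 permutes {0..<i}" and p2: "p2 permutes {0..<n - i}" and i: "i \<le> n"
  shows "join_perm i n p1 p2 permutes {0..<n}" and "sign (join_perm i n p1 p2) = sign p1 * sign p2"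
proof -
  let ?s = "\<lambda>e. if i \<le> e \<and> e < i + (n - i) then p2 (e - i) + i else e"
  have s: "?s permutes {i..<n}" "sign ?s = sign p2" using shift_permutes[OF p2, of i] i by auto
  have eq: "join_perm i n p1 p2 = p1 \<circ> ?s"
  proof
    fix e
    show "join_perm i n p1 p2 e = (p1 \<circ> ?s) e"
    proof (cases "e < i")
      case True thus ?thesis by (simp add: join_perm_def)
    next
      case False
      have "?s e \<notin> {0..<i}"
      proof (cases "e < n")
        case True
        hence "?s e \<in> {i..<n}" using permutes_in_image[OF s(1), of e] False by simp
        thus ?thesis by auto
      qed (use False in auto)
      hence "p1 (?s e) = ?s e" by (rule permutes_not_in[OF p1])
      thus ?thesis using False i by (simp add: join_perm_def)
    qed
  qed
  have p1': "p1 permutes {0..<n}" using p1 i by (auto intro: permutes_subset)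
  have s': "?s permutes {0..<n}" using s(1) by (auto intro: permutes_subset)
  show "join_perm i n p1 p2 permutes {0..<n}" unfolding eq by (rule permutes_compose[OF s' p1'])
  show "sign (join_perm i n p1 p2) = sign p1 * sign p2" unfolding eq
    using sign_compose[OF permutes_interval_permutation[OF p1'] permutes_interval_permutation[OF s']] s(2) by simp
qed

lemma low_high_join_perm:
  assumes p1: "p1 permutes {0..<i}" and p2: "p2 permutes {0..<n - i}" and i: "i \<le> n"
  shows "low_perm i (join_perm i n p1 p2) = p1" "high_perm i n (join_perm i n p1 p2) = p2"
proof -
  show "low_perm i (join_perm i n p1 p2) = p1"
  proof
    fix e show "low_perm i (join_perm i n p1 p2) e = p1 e"
      by (cases "e < i") (simp_all add: low_perm_def join_perm_def permutes_not_in[OF p1])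
  qed
  show "high_perm i n (join_perm i n p1 p2) = p2"
  proof
    fix e show "high_perm i n (join_perm i n p1 p2) e = p2 e"
    proof (cases "e < n - i")
      case True
      hence "\<not> e + i < i" "e + i < n" by auto
      thus ?thesis using True by (simp add: high_perm_def join_perm_def)
    next
      case False thus ?thesis by (simp add: high_perm_def permutes_not_in[OF p2])
    qed
  qed
qed

lemma permutes_image_compl:
  assumes p: "p permutes S" and S: "finite S" and A: "A \<subseteq> S" and pA: "p ` A \<subseteq> A"
    and x: "x \<in> S - A"
  shows "p x \<in> S - A"
proof -
  have inj: "inj p" using p permutes_inj by blast
  hence "p ` A = A" by (rule endo_inj_surj[OF finite_subset[OF A S] pA inj_on_subset[OF _ subset_UNIV]])
  hence "p x \<notin> A" using x inj_image_mem_iff[OF inj, of x A] by simp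
  moreover have "p x \<in> S" using x permutes_in_image[OF p] by simp
  ultimately show ?thesis by simp
qed

lemma permutes_high_if_low:
  fixes p :: "nat \<Rightarrow> nat"
  assumes p: "p permutes {0..<n}" and low: "\<And>e. e < i \<Longrightarrow> p e < i"
    and e: "i \<le> e" "e < n"
  shows "i \<le> p e \<and> p e < n"
proof -
  have "p e \<in> {0..<n} - {0..<i}"
  proof (rule permutes_image_compl[OF p])
    show "{0..<i} \<subseteq> {0..<n}" "e \<in> {0..<n} - {0..<i}" using e by auto
    show "p ` {0..<i} \<subseteq> {0..<i}" using low by auto
  qed simp
  thus ?thesis by auto
qed

lemma permutes_low_if_high:
  fixes p :: "nat \<Rightarrow> nat"
  assumes p: "p permutes {0..<n}"
    and high: "\<And>j. i \<le> j \<Longrightarrow> j < n \<Longrightarrow> i \<le> p j"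
    and j: "j < i" and i: "i \<le> n"
  shows "p j < i"
proof -
  have "p j \<in> {0..<n} - {i..<n}"
  proof (rule permutes_image_compl[OF p])
    show "{i..<n} \<subseteq> {0..<n}" "j \<in> {0..<n} - {i..<n}" using j i by auto
    show "p ` {i..<n} \<subseteq> {i..<n}" using high permutes_in_image[OF p] by fastforce
  qed simp
  thus ?thesis by auto
qed

lemma low_perm_permutes:
  assumes p: "p permutes {0..<n}" and i: "i \<le> n" and low: "\<And>e. e < i \<Longrightarrow> p e < i"
  shows "low_perm i p permutes {0..<i}"
proof (rule bij_imp_permutes)
  have inj: "inj_on p {0..<i}" using permutes_inj[OF p] inj_on_subset by blast
  hence "bij_betw p {0..<i} {0..<i}"
    using low by (simp add: bij_betw_def endo_inj_surj image_subset_iff)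
  thus "bij_betw (low_perm i p) {0..<i} {0..<i}"
    by (rule bij_betw_cong[THEN iffD1, rotated]) (simp add: low_perm_def)
  show "\<And>x. x \<notin> {0..<i} \<Longrightarrow> low_perm i p x = x" by (simp add: low_perm_def)
qed

lemma high_perm_permutes:
  assumes p: "p permutes {0..<n}" and i: "i \<le> n" and low: "\<And>e. e < i \<Longrightarrow> p e < i"
  shows "high_perm i n p permutes {0..<n - i}"
proof (rule bij_imp_permutes)
  note high = permutes_high_if_low[OF p low]
  have "high_perm i n p e < n - i" if e: "e < n - i" for e
  proof -
    have "i \<le> p (e + i) \<and> p (e + i) < n" using e by (intro high) auto
    hence "p (e + i) - i < n - i" by (intro diff_less_mono) auto
    thus ?thesis using e by (simp add: high_perm_def)
  qed
  hence "high_perm i n p ` {0..<n - i} \<subseteq> {0..<n - i}" by auto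
  moreover have "inj_on (high_perm i n p) {0..<n - i}"
  proof (rule inj_onI)
    fix x y assume xy: "x \<in> {0..<n - i}" "y \<in> {0..<n - i}" "high_perm i n p x = high_perm i n p y"
    hence "p (x + i) - i = p (y + i) - i" by (simp add: high_perm_def)
    moreover have "i \<le> p (x + i)" "i \<le> p (y + i)" using high xy by auto
    ultimately have "p (x + i) = p (y + i)" by simp
    thus "x = y" using permutes_inj[OF p] by (simp add: inj_eq)
  qed
  ultimately show "bij_betw (high_perm i n p) {0..<n - i} {0..<n - i}"
    by (simp add: bij_betw_def endo_inj_surj)
  show "\<And>x. x \<notin> {0..<n - i} \<Longrightarrow> high_perm i n p x = x" by (simp add: high_perm_def)
qed

lemma join_low_high_perm:
  assumes p: "p permutes {0..<n}" and low: "\<And>e. e < i \<Longrightarrow> p e < i"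
  shows "join_perm i n (low_perm i p) (high_perm i n p) = p"
proof
  fix e
  show "join_perm i n (low_perm i p) (high_perm i n p) e = p e"
  proof (cases "e < i")
    case True
    thus ?thesis by (simp add: join_perm_def low_perm_def)
  next
    case False
    show ?thesis
    proof (cases "e < n")
      case True
      have "e - i < n - i" "e - i + i = e" using True False by auto
      moreover have "i \<le> p e" using permutes_high_if_low[OF p low] True False by simp
      ultimately show ?thesis using True False by (simp add: join_perm_def high_perm_def)
    next
      case False
      thus ?thesis using \<open>\<not> e < i\<close> by (simp add: join_perm_def permutes_not_in[OF p])
    qed
  qed
qed

lemma low_high_perm_transpose_low:
  assumes "a < i" "b < i"
  shows "low_perm i (Transposition.transpose a b) = Transposition.transpose a b"
    "high_perm i n (Transposition.transpose a b) = id"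
proof -
  show "low_perm i (Transposition.transpose a b) = Transposition.transpose a b"
  proof
    fix e show "low_perm i (Transposition.transpose a b) e = Transposition.transpose a b e"
      using assms by (cases "e < i") (auto simp: low_perm_def)
  qed
  show "high_perm i n (Transposition.transpose a b) = id"
  proof
    fix e show "high_perm i n (Transposition.transpose a b) e = id e"
      using assms by (cases "e < n - i") (auto simp: high_perm_def)
  qed
qed

lemma low_high_perm_transpose_high:
  assumes "i \<le> a" "i \<le> b" "a < n" "b < n"
  shows "low_perm i (Transposition.transpose a b) = id"
    "high_perm i n (Transposition.transpose a b) = Transposition.transpose (a - i) (b - i)"
proof -
  show "low_perm i (Transposition.transpose a b) = id"
  proof
    fix e show "low_perm i (Transposition.transpose a b) e = id e"
      using assms by (cases "e < i") (auto simp: low_perm_def)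
  qed
  show "high_perm i n (Transposition.transpose a b) = Transposition.transpose (a - i) (b - i)"
  proof
    fix e show "high_perm i n (Transposition.transpose a b) e
        = Transposition.transpose (a - i) (b - i) e"
    proof (cases "e < n - i")
      case True
      have "e + i = a \<longleftrightarrow> e = a - i" "e + i = b \<longleftrightarrow> e = b - i" using assms by auto
      thus ?thesis using True assms by (auto simp: high_perm_def transpose_def)
    next
      case False
      hence "e \<noteq> a - i" "e \<noteq> b - i" using assms by auto
      thus ?thesis using False by (simp add: high_perm_def)
    qed
  qed
qed

lemma low_high_perm_id: "low_perm i id = id" "high_perm i n id = id"
  by (auto simp: fun_eq_iff low_perm_def high_perm_def)

lemma young_subI:
  assumes "k \<in> signed_perm_mats n" "\<And>j. j < i \<Longrightarrow> sp_perm k j < i"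
  shows "k \<in> young_sub i n"
  using assms by (simp add: young_sub_def)

lemma young_subD:
  assumes h: "h \<in> young_sub i n" and i: "i \<le> n"
  shows "h \<in> signed_perm_mats n"
    and "\<And>e. e < i \<Longrightarrow> sp_perm h e < i"
    and "\<And>e. i \<le> e \<Longrightarrow> e < n \<Longrightarrow> i \<le> sp_perm h e \<and> sp_perm h e < n"
    and "low_perm i (sp_perm h) permutes {0..<i}" "high_perm i n (sp_perm h) permutes {0..<n - i}"
    and "join_perm i n (low_perm i (sp_perm h)) (high_perm i n (sp_perm h)) = sp_perm h"
proof -
  show hB: "h \<in> signed_perm_mats n" using h by (simp add: young_sub_def)
  show low: "\<And>e. e < i \<Longrightarrow> sp_perm h e < i" using h by (simp add: young_sub_def)
  have p: "sp_perm h permutes {0..<n}" by (rule sp_perm_permutes[OF hB])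
  show "low_perm i (sp_perm h) permutes {0..<i}" by (rule low_perm_permutes[OF p i low])
  show "high_perm i n (sp_perm h) permutes {0..<n - i}" by (rule high_perm_permutes[OF p i low])
  show "join_perm i n (low_perm i (sp_perm h)) (high_perm i n (sp_perm h)) = sp_perm h"
    by (rule join_low_high_perm[OF p low])
  show "i \<le> sp_perm h e \<and> sp_perm h e < n" if "i \<le> e" "e < n" for e
    by (rule permutes_high_if_low[OF p low that])
qed

lemma young_sub_mult:
  assumes h: "h \<in> young_sub i n" and g: "g \<in> young_sub i n" and i: "i \<le> n"
  shows "h * g \<in> young_sub i n"
proof -
  note Fh = young_subD[OF h i] and Fg = young_subD[OF g i]
  show ?thesis
    using signed_perm_mats_mult[OF Fh(1) Fg(1)] Fh(2) Fg(2) by (intro young_subI) auto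
qed

lemma young_sub_mult_cancel_right:
  assumes x: "x \<in> signed_perm_mats n" and g: "g \<in> young_sub i n" and xg: "x * g \<in> young_sub i n"
    and i: "i \<le> n"
  shows "x \<in> young_sub i n"
proof (rule young_subI[OF x])
  fix e assume e: "e < i"
  note Fg = young_subD[OF g i]
  have p1: "low_perm i (sp_perm g) permutes {0..<i}" by (rule Fg(4))
  have "e \<in> low_perm i (sp_perm g) ` {0..<i}" using permutes_image[OF p1] e by simp
  then obtain e' where e': "e' \<in> {0..<i}" "low_perm i (sp_perm g) e' = e" by blast
  have e'i: "e' < i" using e' by simp
  have "sp_perm g e' = e" using e' by (simp add: low_perm_def)
  moreover have "sp_perm (x * g) e' < i" using xg e'i by (simp add: young_sub_def)
  ultimately show "sp_perm x e < i" using signed_perm_mats_mult(2)[OF x Fg(1)] by simp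
qed

lemma chi_mult:
  assumes h: "h \<in> young_sub i n" and g: "g \<in> young_sub i n" and i: "i \<le> n"
  shows "chi i (h * g) = chi i h * chi i g"
proof -
  note Fh = young_subD[OF h i] and Fg = young_subD[OF g i]
  have dh: "dim_col h = n" "dim_col g = n" "dim_col (h * g) = n"
    using signed_perm_matsD(1)[OF Fh(1)] signed_perm_matsD(1)[OF Fg(1)] by auto
  have "chi i (h * g) = (\<Prod>j\<in>{i..<n}. sp_sign h (sp_perm g j) * sp_sign g j)"
    unfolding chi_def dh using signed_perm_mats_mult(3)[OF Fh(1) Fg(1)] by (intro prod.cong) auto
  also have "\<dots> = (\<Prod>j\<in>{i..<n}. sp_sign h (sp_perm g j)) * chi i g"
    unfolding chi_def dh by (rule prod.distrib)
  also have "(\<Prod>j\<in>{i..<n}. sp_sign h (sp_perm g j)) = (\<Prod>j\<in>{i..<n}. sp_sign h j)"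
  proof -
    have inj: "inj_on (sp_perm g) {i..<n}"
      using sp_perm_permutes[OF Fg(1)] permutes_inj inj_on_subset by blast
    have img: "sp_perm g ` {i..<n} = {i..<n}"
    proof -
      have "sp_perm g ` {i..<n} \<subseteq> {i..<n}" using Fg(3) by auto
      thus ?thesis using inj by (simp add: endo_inj_surj)
    qed
    show ?thesis using prod.reindex[OF inj, of "sp_sign h"] img by (simp add: comp_def)
  qed
  finally show ?thesis unfolding chi_def dh by simp
qed

lemma act_W_mult:
  assumes h: "h \<in> young_sub i n" and g: "g \<in> young_sub i n" and i: "i \<le> n"
  shows "act_W i n (h * g) w = act_W i n h (act_W i n g w)"
proof -
  note Fh = young_subD[OF h i] and Fg = young_subD[OF g i]
  have pm: "sp_perm (h * g) = sp_perm h \<circ> sp_perm g" using signed_perm_mats_mult(2)[OF Fh(1) Fg(1)] .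
  have p1: "low_perm i (sp_perm h \<circ> sp_perm g) = low_perm i (sp_perm h) \<circ> low_perm i (sp_perm g)"
    using Fg(2) by (auto simp: fun_eq_iff low_perm_def)
  have p2: "high_perm i n (sp_perm h \<circ> sp_perm g)
      = high_perm i n (sp_perm h) \<circ> high_perm i n (sp_perm g)"
  proof
    fix e show "high_perm i n (sp_perm h \<circ> sp_perm g) e
        = (high_perm i n (sp_perm h) \<circ> high_perm i n (sp_perm g)) e"
    proof (cases "e < n - i")
      case True
      have "i \<le> sp_perm g (e + i)" "sp_perm g (e + i) < n" using Fg(3)[of "e + i"] True by auto
      thus ?thesis using True by (simp add: high_perm_def)
    qed (simp add: high_perm_def)
  qed
  show ?thesis
  proof
    fix p :: "(nat \<Rightarrow> nat) \<times> (nat \<Rightarrow> nat)"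
    obtain r1 r2 where p: "p = (r1, r2)" by fastforce
    show "act_W i n (h * g) w p = act_W i n h (act_W i n g w) p"
      unfolding p act_W_eq pm p1 p2 chi_mult[OF h g i] by (simp add: o_assoc)
  qed
qed

lemma act_W_scale: "act_W i n h (scale1 c w) = scale1 c (act_W i n h w)"
  by (auto simp: fun_eq_iff act_W_def scale1_def)

lemma act_W_zero: "act_W i n h 0 = 0"
  by (auto simp: fun_eq_iff act_W_def)

lemma young_sub_signed_perm_mats: "h \<in> young_sub i n \<Longrightarrow> h \<in> signed_perm_mats n"
  by (simp add: young_sub_def)

lemma one_mat_in_young_sub: "1\<^sub>m n \<in> young_sub i n"
  using one_mat_in_signed_perm_mats by (intro young_subI) (auto simp: sp_perm_one_mat)

lemma act_W_one: "act_W i n (1\<^sub>m n) w = w"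
proof
  fix p :: "(nat \<Rightarrow> nat) \<times> (nat \<Rightarrow> nat)"
  obtain r1 r2 where p: "p = (r1, r2)" by fastforce
  have "chi i (1\<^sub>m n) = 1" unfolding chi_def using sp_sign_one_mat by (intro prod.neutral) auto
  thus "act_W i n (1\<^sub>m n) w p = w p" by (simp add: p act_W_eq sp_perm_one_mat low_high_perm_id)
qed

lemma young_sub_mult_cancel_left:
  assumes h: "h \<in> young_sub i n" and g: "g \<in> signed_perm_mats n" and hg: "h * g \<in> young_sub i n"
    and i: "i \<le> n"
  shows "g \<in> young_sub i n"
proof (rule young_subI[OF g])
  fix e assume e: "e < i"
  have "sp_perm (h * g) e < i" using hg e by (simp add: young_sub_def)
  hence lt: "sp_perm h (sp_perm g e) < i"
    using signed_perm_mats_mult(2)[OF young_sub_signed_perm_mats[OF h] g] by simp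
  show "sp_perm g e < i"
  proof (rule ccontr)
    assume "\<not> sp_perm g e < i"
    moreover have "sp_perm g e < n" using sp_perm_less[OF g] e i by simp
    ultimately have "i \<le> sp_perm h (sp_perm g e)" using young_subD(3)[OF h i] by simp
    thus False using lt by simp
  qed
qed

lemma gen_parabolicD:
  assumes A: "A \<in> gen_parabolic a b" and j: "j < sum_list (a @ b)"
  shows "block_of (a @ b) (sp_perm A j) = block_of (a @ b) j"
    and "j < sum_list a \<Longrightarrow> sp_sign A j = 1"
proof -
  let ?ps = "a @ b"
  have c: "block_of ?ps j < length ?ps" "block_start ?ps (block_of ?ps j) \<le> j"
    "j < block_start ?ps (Suc (block_of ?ps j))" using block_of_bounds[OF j] by auto
  have h: "block_start ?ps (block_of ?ps j) \<le> sp_perm A j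
      \<and> sp_perm A j < block_start ?ps (Suc (block_of ?ps j)) \<and> (block_of ?ps j < length a \<longrightarrow> sp_sign A j = 1)"
    using A c unfolding gen_parabolic_def Let_def block_start_def by auto
  show "block_of ?ps (sp_perm A j) = block_of ?ps j" using h c(1) by (intro block_of_eqI) auto
  assume ja: "j < sum_list a"
  have "block_of ?ps j = block_of a j" using block_of_append_left[OF ja] .
  moreover have "block_of a j < length a" using block_of_bounds[OF ja] by simp
  ultimately show "sp_sign A j = 1" using h by simp
qed

lemma gen_parabolic_signed_perm_mats: "A \<in> gen_parabolic a b \<Longrightarrow> A \<in> signed_perm_mats (sum_list (a @ b))"
  by (simp add: gen_parabolic_def Let_def)

lemma gen_parabolicI:
  assumes A: "A \<in> signed_perm_mats (sum_list (a @ b))"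
    and bl: "\<And>j. j < sum_list (a @ b) \<Longrightarrow> block_of (a @ b) (sp_perm A j) = block_of (a @ b) j"
    and sg: "\<And>j. j < sum_list a \<Longrightarrow> sp_sign A j = 1"
  shows "A \<in> gen_parabolic a b"
proof -
  let ?ps = "a @ b"
  have "block_start ?ps k \<le> sp_perm A j \<and> sp_perm A j < block_start ?ps (Suc k)
      \<and> (k < length a \<longrightarrow> sp_sign A j = 1)"
    if k: "k < length ?ps" "block_start ?ps k \<le> j" "j < block_start ?ps (Suc k)" for k j
  proof -
    have jn: "j < sum_list ?ps"
      using k block_start_mono[of "Suc k" "length ?ps" ?ps] block_start_length[of ?ps] by simp
    have bj: "block_of ?ps j = k" using k by (intro block_of_eqI) auto
    have pj: "sp_perm A j < sum_list ?ps" using signed_perm_matsD(2)[OF A jn] by simp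
    have "block_of ?ps (sp_perm A j) = k" using bl[OF jn] bj by simp
    hence 1: "block_start ?ps k \<le> sp_perm A j \<and> sp_perm A j < block_start ?ps (Suc k)"
      using block_of_bounds[OF pj] by simp
    have "k < length a \<Longrightarrow> j < sum_list a"
    proof -
      assume ka: "k < length a"
      have "block_start ?ps (Suc k) = block_start a (Suc k)" using ka by (simp add: block_start_def)
      also have "\<dots> \<le> block_start a (length a)" using ka by (intro block_start_mono) simp
      finally show ?thesis using k(3) block_start_length[of a] by simp
    qed
    thus ?thesis using 1 sg by blast
  qed
  thus ?thesis using A unfolding gen_parabolic_def Let_def block_start_def by auto
qed

lemma transp_mat_in_gen_parabolic:
  assumes a: "a < sum_list (al @ be)" and b: "b < sum_list (al @ be)"
    and bl: "block_of (al @ be) a = block_of (al @ be) b"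
  shows "transp_mat (sum_list (al @ be)) a b \<in> gen_parabolic al be"
proof (rule gen_parabolicI)
  show "transp_mat (sum_list (al @ be)) a b \<in> signed_perm_mats (sum_list (al @ be))"
    by (rule transp_mat_in[OF a b])
  show "block_of (al @ be) (sp_perm (transp_mat (sum_list (al @ be)) a b) j) = block_of (al @ be) j"
    for j
    unfolding sp_perm_transp_mat[OF a b] using bl by (simp add: transpose_def)
  show "sp_sign (transp_mat (sum_list (al @ be)) a b) j = 1" if "j < sum_list al" for j
    using sp_sign_transp_mat[OF a b] that by simp
qed

lemma sign_flip_in_gen_parabolic:
  assumes j: "sum_list al \<le> j"
  shows "sign_flip (sum_list (al @ be)) j \<in> gen_parabolic al be"
proof (rule gen_parabolicI)
  show "sign_flip (sum_list (al @ be)) j \<in> signed_perm_mats (sum_list (al @ be))" by (rule sign_flip_in)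
  show "block_of (al @ be) (sp_perm (sign_flip (sum_list (al @ be)) j) l) = block_of (al @ be) l" for l
    by (simp add: sp_perm_sign_flip)
  show "sp_sign (sign_flip (sum_list (al @ be)) j) l = 1" if "l < sum_list al" for l
    using sp_sign_sign_flip[of l] that j by simp
qed

lemma gen_parabolic_young_sub:
  assumes g: "g \<in> gen_parabolic a b"
  shows "g \<in> young_sub (sum_list a) (sum_list a + sum_list b)"
proof (rule young_subI)
  show "g \<in> signed_perm_mats (sum_list a + sum_list b)"
    using gen_parabolic_signed_perm_mats[OF g] by simp
  fix e assume e: "e < sum_list a"
  have en: "e < sum_list (a @ b)" using e by simp
  have pe: "sp_perm g e < sum_list (a @ b)"
    using signed_perm_matsD(2)[OF gen_parabolic_signed_perm_mats[OF g] en] by simp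
  have "block_of (a @ b) (sp_perm g e) = block_of a e"
    using gen_parabolicD(1)[OF g en] block_of_append_left[OF e] by simp
  moreover have "block_of a e < length a" using block_of_bounds[OF e] by simp
  ultimately show "sp_perm g e < sum_list a"
    using block_of_append_right[of a "sp_perm g e" b] pe by (cases "sp_perm g e < sum_list a") auto
qed

section \<open>Sign-equivariant homomorphisms\<close>

lemma hom_sgnD:
  assumes "\<phi> \<in> hom_sgn P lam mu"
  shows "\<phi> 1 \<in> ind_rep lam mu"
    and "\<And>a c. \<phi> (a * c) = scale2 a (\<phi> c)"
    and "\<And>g c. g \<in> P \<Longrightarrow> \<phi> (of_int (det g) * c) = act_ind (sum_list lam + sum_list mu) g (\<phi> c)"
    and "\<And>c d. \<phi> (c + d) = \<phi> c + \<phi> d"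
  using assms by (auto simp: hom_sgn_def Let_def)

lemma ind_repD:
  assumes "f \<in> ind_rep lam mu"
  shows "\<And>x. x \<notin> signed_perm_mats (sum_list lam + sum_list mu) \<Longrightarrow> f x = 0"
    and "\<And>g. g \<in> signed_perm_mats (sum_list lam + sum_list mu) \<Longrightarrow> f g \<in> tensor_specht lam mu"
    and "\<And>h g. h \<in> young_sub (sum_list lam) (sum_list lam + sum_list mu)
        \<Longrightarrow> g \<in> signed_perm_mats (sum_list lam + sum_list mu) \<Longrightarrow> f (h * g) = act_W (sum_list lam) (sum_list lam + sum_list mu) h (f g)"
  using assms by (auto simp: ind_rep_def Let_def)

lemma hom_sgn_scale: "\<phi> \<in> hom_sgn P lam mu \<Longrightarrow> \<phi> c = scale2 c (\<phi> 1)"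
  using hom_sgnD(2)[of \<phi> P lam mu c 1] by simp

lemma hom_sgn_eigen:
  assumes phi: "\<phi> \<in> hom_sgn P lam mu" and g: "g \<in> P"
    and x: "x \<in> signed_perm_mats (sum_list lam + sum_list mu)"
    and k: "k \<in> young_sub (sum_list lam) (sum_list lam + sum_list mu)" and kx: "k * x = x * g"
  shows "act_W (sum_list lam) (sum_list lam + sum_list mu) k (\<phi> 1 x) p = of_int (det g) * \<phi> 1 x p"
proof -
  let ?n = "sum_list lam + sum_list mu"
  have "\<phi> (of_int (det g) * 1) = act_ind ?n g (\<phi> 1)" using hom_sgnD(3)[OF phi g] .
  moreover have "\<phi> (of_int (det g) * 1) = scale2 (of_int (det g)) (\<phi> 1)" using hom_sgnD(2)[OF phi] .
  ultimately have "act_ind ?n g (\<phi> 1) x p = of_int (det g) * \<phi> 1 x p"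
    by (metis scale1_def scale2_def)
  hence "\<phi> 1 (x * g) p = of_int (det g) * \<phi> 1 x p" using x by (simp add: act_ind_def)
  moreover have "\<phi> 1 (k * x) = act_W (sum_list lam) ?n k (\<phi> 1 x)"
    using ind_repD(3)[OF hom_sgnD(1)[OF phi] k x] .
  ultimately show ?thesis using kx by simp
qed

lemma hom_sgn_vanish_flip:
  assumes phi: "\<phi> \<in> hom_sgn P lam mu" and fl: "sign_flip (sum_list lam + sum_list mu) j \<in> P"
    and x: "x \<in> signed_perm_mats (sum_list lam + sum_list mu)" and j: "j < sum_list lam + sum_list mu"
    and low: "sp_perm x j < sum_list lam"
  shows "\<phi> 1 x = 0"
proof -
  let ?n = "sum_list lam + sum_list mu" let ?i = "sum_list lam"
  let ?k = "sign_flip ?n (sp_perm x j)"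
  have pj: "sp_perm x j < ?n" using signed_perm_matsD(2)[OF x j] by simp
  have k: "?k \<in> young_sub ?i ?n" using sign_flip_in sp_perm_sign_flip by (intro young_subI) auto
  have kx: "?k * x = x * sign_flip ?n j" by (rule sign_flip_conj[OF x j])
  have "\<phi> 1 x p = 0" for p
  proof -
    obtain r1 r2 where p: "p = (r1, r2)" by fastforce
    have "act_W ?i ?n ?k (\<phi> 1 x) p = of_int (det (sign_flip ?n j)) * \<phi> 1 x p"
      by (rule hom_sgn_eigen[OF phi fl x k kx])
    moreover have "act_W ?i ?n ?k (\<phi> 1 x) p = \<phi> 1 x p"
      using p chi_sign_flip[OF pj, of ?i] low by (simp add: act_W_eq sp_perm_sign_flip low_high_perm_id)
    ultimately show ?thesis using det_sign_flip[OF j] by simp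
  qed
  thus ?thesis by (simp add: fun_eq_iff)
qed

lemma hom_sgn_transp:
  fixes lam mu :: "nat list"
  defines "i \<equiv> sum_list lam" and "n \<equiv> sum_list lam + sum_list mu"
  assumes phi: "\<phi> \<in> hom_sgn P lam mu" and tr: "transp_mat n a b \<in> P"
    and x: "x \<in> signed_perm_mats n" and a: "a < n" and b: "b < n" and ab: "a \<noteq> b"
    and side: "(sp_perm x a < i \<and> sp_perm x b < i) \<or> (i \<le> sp_perm x a \<and> i \<le> sp_perm x b)"
  shows "\<phi> 1 x (r1 \<circ> low_perm i (Transposition.transpose (sp_perm x a) (sp_perm x b)),
      r2 \<circ> high_perm i n (Transposition.transpose (sp_perm x a) (sp_perm x b))) = - \<phi> 1 x (r1, r2)"
proof -
  let ?pa = "sp_perm x a" and ?pb = "sp_perm x b" and ?c = "sp_sign x a * sp_sign x b"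
  let ?k = "signed_transp_mat n ?pa ?pb ?c"
  have pa: "?pa < n" and pb: "?pb < n" using sp_perm_less[OF x] a b by auto
  have pab: "?pa \<noteq> ?pb" using sp_perm_permutes[OF x] ab permutes_inj by (metis injD)
  have c: "?c \<in> {-1, 1}" using sp_sign_in[OF x a] sp_sign_in[OF x b] by auto
  note sf = signed_transp_mat_in[OF pa pb c]
  have k: "?k \<in> young_sub i n"
  proof (rule young_subI[OF sf(1)])
    fix j assume "j < i" thus "sp_perm ?k j < i" using side sf(2) by (auto simp: transpose_def)
  qed
  have kx: "?k * x = x * transp_mat n a b" by (rule signed_transp_mat_conj[OF x a b ab])
  have "act_W i n ?k (\<phi> 1 x) (r1, r2) = of_int (det (transp_mat n a b)) * \<phi> 1 x (r1, r2)"
    using hom_sgn_eigen[OF phi tr] x k kx unfolding i_def n_def by blast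
  moreover have "act_W i n ?k (\<phi> 1 x) (r1, r2)
      = \<phi> 1 x (r1 \<circ> low_perm i (Transposition.transpose ?pa ?pb), r2 \<circ> high_perm i n (Transposition.transpose ?pa ?pb))"
    using chi_signed_transp_mat[OF pa pb c pab side] sf(2) by (simp add: act_W_eq)
  ultimately show ?thesis using det_transp_mat[OF a b ab] by simp
qed

lemma hom_sgn_transp_low:
  fixes lam mu :: "nat list"
  defines "i \<equiv> sum_list lam" and "n \<equiv> sum_list lam + sum_list mu"
  assumes phi: "\<phi> \<in> hom_sgn P lam mu" and tr: "transp_mat n a b \<in> P"
    and x: "x \<in> signed_perm_mats n" and a: "a < n" and b: "b < n" and ab: "a \<noteq> b"
    and la: "sp_perm x a < i" and lb: "sp_perm x b < i"
  shows "\<phi> 1 x (r1 \<circ> Transposition.transpose (sp_perm x a) (sp_perm x b), r2) = - \<phi> 1 x (r1, r2)"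
proof -
  let ?t = "Transposition.transpose (sp_perm x a) (sp_perm x b)"
  have "\<phi> 1 x (r1 \<circ> low_perm i ?t, r2 \<circ> high_perm i n ?t) = - \<phi> 1 x (r1, r2)"
    using hom_sgn_transp[OF phi] tr x a b ab la lb unfolding i_def n_def by blast
  thus ?thesis using low_high_perm_transpose_low[OF la lb] by simp
qed

lemma hom_sgn_transp_high:
  fixes lam mu :: "nat list"
  defines "i \<equiv> sum_list lam" and "n \<equiv> sum_list lam + sum_list mu"
  assumes phi: "\<phi> \<in> hom_sgn P lam mu" and tr: "transp_mat n a b \<in> P"
    and x: "x \<in> signed_perm_mats n" and a: "a < n" and b: "b < n" and ab: "a \<noteq> b"
    and la: "i \<le> sp_perm x a" and lb: "i \<le> sp_perm x b"
  shows "\<phi> 1 x (r1, r2 \<circ> Transposition.transpose (sp_perm x a - i) (sp_perm x b - i))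
      = - \<phi> 1 x (r1, r2)"
proof -
  let ?t = "Transposition.transpose (sp_perm x a) (sp_perm x b)"
  have "\<phi> 1 x (r1 \<circ> low_perm i ?t, r2 \<circ> high_perm i n ?t) = - \<phi> 1 x (r1, r2)"
    using hom_sgn_transp[OF phi] tr x a b ab la lb unfolding i_def n_def by blast
  moreover have "sp_perm x a < n" "sp_perm x b < n" using sp_perm_less[OF x] a b by auto
  ultimately show ?thesis using low_high_perm_transpose_high[OF la lb] by simp
qed

lemma comp_transpose_eq: "f a = f b \<Longrightarrow> f \<circ> Transposition.transpose a b = f"
  by (auto simp: fun_eq_iff transpose_def)

section \<open>Vanishing below the diagonal\<close>

lemma block_images:
  fixes p :: "nat \<Rightarrow> nat" and s M off :: nat
  assumes inj: "inj p" and offh: "\<And>j. off \<le> j \<Longrightarrow> j < off + sum_list \<gamma> \<Longrightarrow> s \<le> p j \<and> p j < s + M"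
  defines "D \<equiv> \<lambda>c. (\<lambda>e. e - s) ` p ` {off + block_start \<gamma> c..<off + block_start \<gamma> (Suc c)}"
  shows "\<And>c. c < length \<gamma> \<Longrightarrow> D c \<subseteq> {0..<M}"
    and "\<And>c. c < length \<gamma> \<Longrightarrow> card (D c) = \<gamma> ! c"
    and "\<And>c c'. c < length \<gamma> \<Longrightarrow> c' < length \<gamma> \<Longrightarrow> c \<noteq> c' \<Longrightarrow> D c \<inter> D c' = {}"
proof -
  let ?f = "\<lambda>e. p e - s"
  have Dc: "D c = ?f ` {off + block_start \<gamma> c..<off + block_start \<gamma> (Suc c)}" for c
    by (simp add: D_def image_image)
  have sub: "{off + block_start \<gamma> c..<off + block_start \<gamma> (Suc c)} \<subseteq> {off..<off + sum_list \<gamma>}" for c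
    using block_start_le_sum[of \<gamma> "Suc c"] by auto
  have finj: "inj_on ?f {off..<off + sum_list \<gamma>}"
  proof (rule inj_onI)
    fix x y assume xy: "x \<in> {off..<off + sum_list \<gamma>}" "y \<in> {off..<off + sum_list \<gamma>}"
      and eq: "p x - s = p y - s"
    have sx: "s \<le> p x" and sy: "s \<le> p y" using offh xy by auto
    have "p x = (p x - s) + s" using sx by simp
    also have "\<dots> = (p y - s) + s" using eq by simp
    also have "\<dots> = p y" using sy by simp
    finally have "p x = p y" .
    thus "x = y" using inj by (simp add: inj_eq)
  qed
  show "D c \<subseteq> {0..<M}" if "c < length \<gamma>" for c
  proof
    fix e assume "e \<in> D c"
    then obtain j where j: "j \<in> {off + block_start \<gamma> c..<off + block_start \<gamma> (Suc c)}" "e = p j - s"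
      using Dc by auto
    have jj: "off \<le> j" "j < off + sum_list \<gamma>" using subsetD[OF sub j(1)] by auto
    hence "s \<le> p j \<and> p j < s + M" by (rule offh)
    thus "e \<in> {0..<M}" using j by auto
  qed
  show "card (D c) = \<gamma> ! c" if "c < length \<gamma>" for c
  proof -
    have "card (D c) = card {off + block_start \<gamma> c..<off + block_start \<gamma> (Suc c)}"
      unfolding Dc by (rule card_image) (rule inj_on_subset[OF finj sub])
    thus ?thesis using block_start_Suc[OF that] by simp
  qed
  show "D c \<inter> D c' = {}" if "c < length \<gamma>" "c' < length \<gamma>" "c \<noteq> c'" for c c'
  proof (rule ccontr)
    assume "D c \<inter> D c' \<noteq> {}"
    then obtain j j' where j: "j \<in> {off + block_start \<gamma> c..<off + block_start \<gamma> (Suc c)}" "j' \<in> {off + block_start \<gamma> c'..<off + block_start \<gamma> (Suc c')}" "?f j = ?f j'"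
      unfolding Dc by blast
    have "j = j'" by (rule inj_onD[OF finj j(3) subsetD[OF sub j(1)] subsetD[OF sub j(2)]])
    hence "block_start \<gamma> c \<le> j - off" "j - off < block_start \<gamma> (Suc c)" "block_start \<gamma> c' \<le> j - off"
      "j - off < block_start \<gamma> (Suc c')" using j by auto
    hence "c = c'" by (rule block_start_unique)
    thus False using that(3) by simp
  qed
qed

lemma hom_sgn_inj_low:
  fixes lam mu :: "nat list"
  assumes phi: "\<phi> \<in> hom_sgn (gen_parabolic \<alpha> \<beta>) lam mu"
    and n: "sum_list (\<alpha> @ \<beta>) = sum_list lam + sum_list mu"
    and x: "x \<in> signed_perm_mats (sum_list lam + sum_list mu)" and nz: "\<phi> 1 x (r1, r2) \<noteq> 0"
    and c: "c < length (\<alpha> @ \<beta>)" and J: "J \<subseteq> {block_start (\<alpha> @ \<beta>) c..<block_start (\<alpha> @ \<beta>) (Suc c)}"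
    and low: "\<And>j. j \<in> J \<Longrightarrow> sp_perm x j < sum_list lam"
  shows "inj_on r1 (sp_perm x ` J)"
proof (rule inj_onI, rule ccontr)
  fix e1 e2 assume e: "e1 \<in> sp_perm x ` J" "e2 \<in> sp_perm x ` J" "r1 e1 = r1 e2" "e1 \<noteq> e2"
  then obtain j1 j2 where j: "j1 \<in> J" "j2 \<in> J" "e1 = sp_perm x j1" "e2 = sp_perm x j2" by blast
  have j12: "j1 \<noteq> j2" using e(4) j by auto
  have blk: "block_of (\<alpha> @ \<beta>) j1 = c" "block_of (\<alpha> @ \<beta>) j2 = c"
    using j(1,2) J c by (auto intro!: block_of_eqI)
  have lt: "j1 < sum_list lam + sum_list mu" "j2 < sum_list lam + sum_list mu"
    using j(1,2) J block_start_le_sum[of "\<alpha> @ \<beta>" "Suc c"] n by fastforce+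
  have "transp_mat (sum_list lam + sum_list mu) j1 j2 \<in> gen_parabolic \<alpha> \<beta>"
    using transp_mat_in_gen_parabolic[of j1 \<alpha> \<beta> j2] lt blk n by simp
  from hom_sgn_transp_low[OF phi this x lt j12 low[OF j(1)] low[OF j(2)], of r1 r2]
  have "\<phi> 1 x (r1, r2) = - \<phi> 1 x (r1, r2)" using comp_transpose_eq[of r1 e1 e2] e(3) j by simp
  thus False using nz by simp
qed

lemma hom_sgn_inj_high:
  fixes lam mu :: "nat list"
  assumes phi: "\<phi> \<in> hom_sgn (gen_parabolic \<alpha> \<beta>) lam mu"
    and n: "sum_list (\<alpha> @ \<beta>) = sum_list lam + sum_list mu"
    and x: "x \<in> signed_perm_mats (sum_list lam + sum_list mu)" and nz: "\<phi> 1 x (r1, r2) \<noteq> 0"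
    and c: "c < length (\<alpha> @ \<beta>)" and J: "J \<subseteq> {block_start (\<alpha> @ \<beta>) c..<block_start (\<alpha> @ \<beta>) (Suc c)}"
    and high: "\<And>j. j \<in> J \<Longrightarrow> sum_list lam \<le> sp_perm x j"
  shows "inj_on r2 ((\<lambda>e. e - sum_list lam) ` sp_perm x ` J)"
proof (rule inj_onI, rule ccontr)
  fix e1 e2 assume e: "e1 \<in> (\<lambda>e. e - sum_list lam) ` sp_perm x ` J"
    "e2 \<in> (\<lambda>e. e - sum_list lam) ` sp_perm x ` J" "r2 e1 = r2 e2" "e1 \<noteq> e2"
  then obtain j1 j2 where j: "j1 \<in> J" "j2 \<in> J"
    "e1 = sp_perm x j1 - sum_list lam" "e2 = sp_perm x j2 - sum_list lam" by blast
  have j12: "j1 \<noteq> j2" using e(4) j by auto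
  have blk: "block_of (\<alpha> @ \<beta>) j1 = c" "block_of (\<alpha> @ \<beta>) j2 = c"
    using j(1,2) J c by (auto intro!: block_of_eqI)
  have lt: "j1 < sum_list lam + sum_list mu" "j2 < sum_list lam + sum_list mu"
    using j(1,2) J block_start_le_sum[of "\<alpha> @ \<beta>" "Suc c"] n by fastforce+
  have "transp_mat (sum_list lam + sum_list mu) j1 j2 \<in> gen_parabolic \<alpha> \<beta>"
    using transp_mat_in_gen_parabolic[of j1 \<alpha> \<beta> j2] lt blk n by simp
  from hom_sgn_transp_high[OF phi this x lt j12 high[OF j(1)] high[OF j(2)], of r1 r2]
  have "\<phi> 1 x (r1, r2) = - \<phi> 1 x (r1, r2)" using comp_transpose_eq[of r2 e1 e2] e(3) j by simp
  thus False using nz by simp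
qed

lemma hom_sgn_support_high:
  fixes lam mu :: "nat list"
  assumes phi: "\<phi> \<in> hom_sgn (gen_parabolic \<alpha> \<beta>) lam mu"
    and n: "sum_list (\<alpha> @ \<beta>) = sum_list lam + sum_list mu"
    and x: "x \<in> signed_perm_mats (sum_list lam + sum_list mu)" and nz: "\<phi> 1 x \<noteq> 0"
    and j: "sum_list \<alpha> \<le> j" "j < sum_list lam + sum_list mu"
  shows "sum_list lam \<le> sp_perm x j"
proof (rule ccontr)
  assume "\<not> sum_list lam \<le> sp_perm x j"
  moreover have "sign_flip (sum_list lam + sum_list mu) j \<in> gen_parabolic \<alpha> \<beta>"
    using sign_flip_in_gen_parabolic[OF j(1), of \<beta>] n by simp
  ultimately show False using hom_sgn_vanish_flip[OF phi _ x j(2)] nz by simp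
qed

lemma hom_sgn_support_not_lex_gt_high:
  fixes lam mu :: "nat list"
  assumes phi: "\<phi> \<in> hom_sgn (gen_parabolic \<alpha> \<beta>) lam mu"
    and n: "sum_list (\<alpha> @ \<beta>) = sum_list lam + sum_list mu" and pos: "\<forall>p\<in>set \<beta>. 0 < p"
    and x: "x \<in> signed_perm_mats (sum_list lam + sum_list mu)" and nz: "\<phi> 1 x (r1, r2) \<noteq> 0"
    and tab: "is_tabloid mu r2"
  shows "\<not> lex_gt \<beta> (conj_part mu)"
proof -
  let ?i = "sum_list lam" and ?a = "sum_list \<alpha>"
  define D where "D c = (\<lambda>e. e - ?i) ` sp_perm x ` {?a + block_start \<beta> c..<?a + block_start \<beta> (Suc c)}" for c
  have high: "?i \<le> sp_perm x j \<and> sp_perm x j < ?i + sum_list mu" if "?a \<le> j" "j < ?a + sum_list \<beta>" for j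
    using hom_sgn_support_high[OF phi n x _ that(1)] sp_perm_less[OF x, of j] nz that n by fastforce
  have inj: "inj (sp_perm x)" using sp_perm_permutes[OF x] permutes_inj by blast
  note D = block_images[where p="sp_perm x" and off="?a" and \<gamma>=\<beta> and s="?i" and M="sum_list mu",
      OF inj high, folded D_def]
  have "inj_on r2 (D c)" if c: "c < length \<beta>" for c
    unfolding D_def
  proof (rule hom_sgn_inj_high[OF phi n x nz])
    show "length \<alpha> + c < length (\<alpha> @ \<beta>)" using c by simp
    show "{?a + block_start \<beta> c..<?a + block_start \<beta> (Suc c)}
        \<subseteq> {block_start (\<alpha> @ \<beta>) (length \<alpha> + c)..<block_start (\<alpha> @ \<beta>) (Suc (length \<alpha> + c))}"
      using block_start_append_right[of \<alpha> \<beta> c] block_start_append_right[of \<alpha> \<beta> "Suc c"] by simp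
    show "?i \<le> sp_perm x j" if "j \<in> {?a + block_start \<beta> c..<?a + block_start \<beta> (Suc c)}" for j
      using high that block_start_le_sum[of \<beta> "Suc c"] by auto
  qed
  then interpret injective_blocks mu r2 \<beta> D
    by unfold_locales (use tab D in auto)
  show ?thesis using not_lex_gt_conj_part pos by blast
qed

lemma hom_sgn_support_young_sub:
  fixes lam mu :: "nat list"
  assumes phi: "\<phi> \<in> hom_sgn (gen_parabolic \<alpha> \<beta>) lam mu"
    and n: "sum_list (\<alpha> @ \<beta>) = sum_list lam + sum_list mu" and a: "sum_list \<alpha> = sum_list lam"
    and x: "x \<in> signed_perm_mats (sum_list lam + sum_list mu)" and nz: "\<phi> 1 x \<noteq> 0"
  shows "x \<in> young_sub (sum_list lam) (sum_list lam + sum_list mu)"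
proof (rule young_subI[OF x])
  have "\<And>j. sum_list lam \<le> j \<Longrightarrow> j < sum_list lam + sum_list mu \<Longrightarrow> sum_list lam \<le> sp_perm x j"
    using hom_sgn_support_high[OF phi n x nz] a by simp
  thus "sp_perm x j < sum_list lam" if "j < sum_list lam" for j
    using permutes_low_if_high[OF sp_perm_permutes[OF x] _ that le_add1] by blast
qed

lemma hom_sgn_support_not_lex_gt_low:
  fixes lam mu :: "nat list"
  assumes phi: "\<phi> \<in> hom_sgn (gen_parabolic \<alpha> \<beta>) lam mu"
    and n: "sum_list (\<alpha> @ \<beta>) = sum_list lam + sum_list mu" and a: "sum_list \<alpha> = sum_list lam"
    and pos: "\<forall>p\<in>set \<alpha>. 0 < p"
    and x: "x \<in> signed_perm_mats (sum_list lam + sum_list mu)" and nz: "\<phi> 1 x (r1, r2) \<noteq> 0"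
    and tab: "is_tabloid lam r1"
  shows "\<not> lex_gt \<alpha> (conj_part lam)"
proof -
  let ?i = "sum_list lam"
  define D where "D c = sp_perm x ` {block_start \<alpha> c..<block_start \<alpha> (Suc c)}" for c
  have perm: "sp_perm x permutes {0..<sum_list lam + sum_list mu}" by (rule sp_perm_permutes[OF x])
  have "\<phi> 1 x \<noteq> 0" using nz by auto
  hence low: "sp_perm x j < ?i" if "j < ?i" for j
    using young_subD(2)[OF hom_sgn_support_young_sub[OF phi n a x] le_add1] that by blast
  have inj: "inj (sp_perm x)" using perm permutes_inj by blast
  note D = block_images[where p="sp_perm x" and off=0 and \<gamma>=\<alpha> and s=0 and M="?i", OF inj,
      simplified, folded D_def]
  have "inj_on r1 (D c)" if c: "c < length \<alpha>" for c
    unfolding D_def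
  proof (rule hom_sgn_inj_low[OF phi n x nz])
    show "c < length (\<alpha> @ \<beta>)" using c by simp
    show "{block_start \<alpha> c..<block_start \<alpha> (Suc c)}
        \<subseteq> {block_start (\<alpha> @ \<beta>) c..<block_start (\<alpha> @ \<beta>) (Suc c)}"
      using block_start_append_left[of c \<alpha> \<beta>] block_start_append_left[of "Suc c" \<alpha> \<beta>] c by simp
    show "sp_perm x j < ?i" if "j \<in> {block_start \<alpha> c..<block_start \<alpha> (Suc c)}" for j
      using low that block_start_le_sum[of \<alpha> "Suc c"] a by auto
  qed
  then interpret injective_blocks lam r1 \<alpha> D
    by unfold_locales (use tab D low a in auto)
  show ?thesis using not_lex_gt_conj_part pos by blast
qed

lemma hom_sgn_vanish_pair_succ:
  fixes lam mu nu sigma :: "nat list"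
  assumes sums: "sum_list lam + sum_list mu = sum_list nu + sum_list sigma"
    and succ: "pair_succ (nu, sigma) (lam, mu)"
    and phi: "\<phi> \<in> hom_sgn (gen_parabolic (conj_part nu) (conj_part sigma)) lam mu"
  shows "\<phi> = 0"
proof -
  let ?\<alpha> = "conj_part nu" and ?\<beta> = "conj_part sigma" and ?n = "sum_list lam + sum_list mu"
  have n: "sum_list (?\<alpha> @ ?\<beta>) = ?n" using sums by (simp add: sum_list_conj_part)
  have "\<phi> 1 x = 0" for x
  proof (rule ccontr)
    assume nz: "\<phi> 1 x \<noteq> 0"
    have x: "x \<in> signed_perm_mats ?n" using nz ind_repD(1)[OF hom_sgnD(1)[OF phi]] by blast
    obtain r1 r2 where nzp: "\<phi> 1 x (r1, r2) \<noteq> 0" using nz by (metis ext prod.collapse zero_fun_def)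
    have tab: "is_tabloid lam r1" "is_tabloid mu r2"
      using tensor_specht_support[OF ind_repD(2)[OF hom_sgnD(1)[OF phi] x] nzp] by auto
    have pos: "\<forall>p\<in>set ?\<alpha>. 0 < p" "\<forall>p\<in>set ?\<beta>. 0 < p" using conj_part_pos by blast+
    from succ consider "lex_gt ?\<beta> (conj_part mu)" | "mu = sigma" "lex_gt ?\<alpha> (conj_part lam)"
      unfolding pair_succ_def by auto
    then show False
    proof cases
      case 1
      thus False using hom_sgn_support_not_lex_gt_high[OF phi n pos(2) x nzp tab(2)] by simp
    next
      case 2
      hence "sum_list ?\<alpha> = sum_list lam" using sums by (simp add: sum_list_conj_part)
      thus False using hom_sgn_support_not_lex_gt_low[OF phi n _ pos(1) x nzp tab(1)] 2 by simp
    qed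
  qed
  hence "\<phi> c = 0" for c
    using hom_sgn_scale[OF phi, of c] by (simp add: scale2_def scale1_def fun_eq_iff)
  thus "\<phi> = 0" by auto
qed

lemma mult_sgn_vanish:
  fixes lam mu nu sigma :: "nat list"
  assumes "sum_list lam + sum_list mu = sum_list nu + sum_list sigma"
    and "pair_succ (nu, sigma) (lam, mu)"
  shows "mult_sgn (gen_parabolic (conj_part nu) (conj_part sigma)) lam mu = 0"
  unfolding mult_sgn_def by (rule dim_scale3_zero) (use hom_sgn_vanish_pair_succ[OF assms] in blast)

section \<open>The diagonal case\<close>

locale diagonal =
  fixes lam mu :: "nat list"
  assumes partition_lam: "is_partition lam" and partition_mu: "is_partition mu"
begin

abbreviation "n1 \<equiv> sum_list lam"
abbreviation "n2 \<equiv> sum_list mu"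
abbreviation "N \<equiv> sum_list lam + sum_list mu"
abbreviation "\<alpha> \<equiv> conj_part lam"
abbreviation "\<beta> \<equiv> conj_part mu"
abbreviation "P \<equiv> gen_parabolic (conj_part lam) (conj_part mu)"
abbreviation "H \<equiv> young_sub (sum_list lam) (sum_list lam + sum_list mu)"

lemma sum_list_alpha: "sum_list \<alpha> = n1" and sum_list_beta: "sum_list \<beta> = n2"
  and sum_list_alpha_beta: "sum_list (\<alpha> @ \<beta>) = N"
  by (simp_all add: sum_list_conj_part)

lemma col_tableau_lam: "col_tableau lam \<in> tableaux lam"
  and col_tableau_mu: "col_tableau mu \<in> tableaux mu"
  by (simp_all add: col_tableau_in_tableaux partition_lam partition_mu)

lemma P_in_H: "g \<in> P \<Longrightarrow> g \<in> H"
  using gen_parabolic_young_sub[of g \<alpha> \<beta>] sum_list_alpha sum_list_beta by simp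

lemma P_in_signed_perm_mats: "g \<in> P \<Longrightarrow> g \<in> signed_perm_mats N"
  using gen_parabolic_signed_perm_mats[of g \<alpha> \<beta>] sum_list_alpha_beta by simp

lemma low_perm_P_in_col_stab:
  assumes g: "g \<in> P"
  shows "low_perm n1 (sp_perm g) \<in> col_stab lam (col_tableau lam)"
proof (rule col_stab_col_tableauI[OF partition_lam])
  note F = young_subD[OF P_in_H[OF g] le_add1]
  show "low_perm n1 (sp_perm g) permutes {0..<n1}" using F(4) .
  fix c e assume c: "c < length \<alpha>" "block_start \<alpha> c \<le> e" "e < block_start \<alpha> (Suc c)"
  have e: "e < n1" using c(3) block_start_le_sum[of \<alpha> "Suc c"] sum_list_alpha by simp
  have pe: "sp_perm g e < n1" using F(2)[OF e] .
  have "block_of (\<alpha> @ \<beta>) (sp_perm g e) = block_of (\<alpha> @ \<beta>) e"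
    using gen_parabolicD(1)[OF g] e sum_list_alpha_beta by simp
  hence "block_of \<alpha> (sp_perm g e) = block_of \<alpha> e"
    using e block_of_append_left[of e \<alpha> \<beta>] block_of_append_left[of "sp_perm g e" \<alpha> \<beta>] pe sum_list_alpha
    by simp
  also have "block_of \<alpha> e = c" using c by (intro block_of_eqI) auto
  finally have "block_of \<alpha> (sp_perm g e) = c" .
  thus "block_start \<alpha> c \<le> low_perm n1 (sp_perm g) e \<and> low_perm n1 (sp_perm g) e < block_start \<alpha> (Suc c)"
    using block_of_bounds[of "sp_perm g e" \<alpha>] pe sum_list_alpha e by (simp add: low_perm_def)
qed

lemma high_perm_P_in_col_stab:
  assumes g: "g \<in> P"
  shows "high_perm n1 N (sp_perm g) \<in> col_stab mu (col_tableau mu)"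
proof (rule col_stab_col_tableauI[OF partition_mu])
  note F = young_subD[OF P_in_H[OF g] le_add1]
  show "high_perm n1 N (sp_perm g) permutes {0..<n2}" using F(5) by simp
  fix c e assume c: "c < length \<beta>" "block_start \<beta> c \<le> e" "e < block_start \<beta> (Suc c)"
  let ?e = "sp_perm g (e + n1) - n1"
  have e: "e < n2" using c(3) block_start_le_sum[of \<beta> "Suc c"] sum_list_beta by simp
  have r: "n1 \<le> sp_perm g (e + n1) \<and> sp_perm g (e + n1) < N" using F(3)[of "e + n1"] e by simp
  have "block_of (\<alpha> @ \<beta>) (sp_perm g (e + n1)) = block_of (\<alpha> @ \<beta>) (e + n1)"
    using gen_parabolicD(1)[OF g] e sum_list_alpha_beta by simp
  moreover have "block_of (\<alpha> @ \<beta>) (e + n1) = length \<alpha> + block_of \<beta> e"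
    using block_of_append_right[of \<alpha> "e + n1" \<beta>] e sum_list_alpha sum_list_beta by simp
  moreover have "block_of (\<alpha> @ \<beta>) (sp_perm g (e + n1)) = length \<alpha> + block_of \<beta> ?e"
    using block_of_append_right[of \<alpha> "sp_perm g (e + n1)" \<beta>] r sum_list_alpha sum_list_beta by simp
  ultimately have "block_of \<beta> ?e = block_of \<beta> e" by simp
  also have "block_of \<beta> e = c" using c by (intro block_of_eqI) auto
  finally have "block_of \<beta> ?e = c" .
  moreover have "?e < sum_list \<beta>" using r sum_list_beta by arith
  ultimately show "block_start \<beta> c \<le> high_perm n1 N (sp_perm g) e
      \<and> high_perm n1 N (sp_perm g) e < block_start \<beta> (Suc c)"
    using block_of_bounds[of ?e \<beta>] e by (simp add: high_perm_def)
qed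

lemma det_P:
  assumes g: "g \<in> P"
  shows "det g = sign (low_perm n1 (sp_perm g)) * sign (high_perm n1 N (sp_perm g)) * chi n1 g"
proof -
  have gH: "g \<in> H" by (rule P_in_H[OF g])
  have gB: "g \<in> signed_perm_mats N" by (rule P_in_signed_perm_mats[OF g])
  note F = young_subD[OF gH le_add1]
  have "det g = sign (sp_perm g) * (\<Prod>j<N. sp_sign g j)" by (rule det_signed_perm_mats[OF gB])
  also have "sign (sp_perm g) = sign (low_perm n1 (sp_perm g)) * sign (high_perm n1 N (sp_perm g))"
    using join_perm_permutes(2)[OF F(4,5) le_add1] F(6) by simp
  also have "(\<Prod>j<N. sp_sign g j) = (\<Prod>j\<in>{0..<n1}. sp_sign g j) * (\<Prod>j\<in>{n1..<N}. sp_sign g j)"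
    by (simp add: atLeast0LessThan[symmetric] prod.atLeastLessThan_concat)
  also have "(\<Prod>j\<in>{0..<n1}. sp_sign g j) = 1"
    using gen_parabolicD(2)[OF g] sum_list_alpha sum_list_alpha_beta by (intro prod.neutral) auto
  finally show ?thesis using signed_perm_matsD(1)[OF gB] by (simp add: chi_def)
qed

lemma block_of_join_perm:
  assumes p1: "\<pi>1 \<in> col_stab lam (col_tableau lam)" and p2: "\<pi>2 \<in> col_stab mu (col_tableau mu)"
    and j: "j < N"
  shows "block_of (\<alpha> @ \<beta>) (join_perm n1 N \<pi>1 \<pi>2 j) = block_of (\<alpha> @ \<beta>) j"
proof (cases "j < n1")
  case True
  have pj: "\<pi>1 j < n1" using permutes_in_image[OF col_stab_permutes[OF col_tableau_lam p1], of j] True by simp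
  have "block_of \<alpha> (\<pi>1 j) = block_of \<alpha> j" using block_of_col_stab[OF partition_lam p1 True] .
  thus ?thesis
    using True pj block_of_append_left[of j \<alpha> \<beta>] block_of_append_left[of "\<pi>1 j" \<alpha> \<beta>] sum_list_alpha
    by (simp add: join_perm_def)
next
  case False
  have e: "j - n1 < n2" using j False by arith
  have pe: "\<pi>2 (j - n1) < n2"
    using permutes_in_image[OF col_stab_permutes[OF col_tableau_mu p2], of "j - n1"] e by simp
  have "block_of \<beta> (\<pi>2 (j - n1)) = block_of \<beta> (j - n1)"
    using block_of_col_stab[OF partition_mu p2 e] .
  moreover have "block_of (\<alpha> @ \<beta>) j = length \<alpha> + block_of \<beta> (j - n1)"
    using block_of_append_right[of \<alpha> j \<beta>] False j sum_list_alpha sum_list_beta by simp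
  moreover have "block_of (\<alpha> @ \<beta>) (\<pi>2 (j - n1) + n1) = length \<alpha> + block_of \<beta> (\<pi>2 (j - n1))"
    using block_of_append_right[of \<alpha> "\<pi>2 (j - n1) + n1" \<beta>] pe sum_list_alpha sum_list_beta by simp
  ultimately show ?thesis using False j by (simp add: join_perm_def)
qed

lemma signed_perm_mat_join_perm:
  assumes p1: "\<pi>1 \<in> col_stab lam (col_tableau lam)" and p2: "\<pi>2 \<in> col_stab mu (col_tableau mu)"
  defines "g \<equiv> signed_perm_mat N (join_perm n1 N \<pi>1 \<pi>2) (\<lambda>_. 1)"
  shows "g \<in> P" "low_perm n1 (sp_perm g) = \<pi>1" "high_perm n1 N (sp_perm g) = \<pi>2"
    "det g = sign \<pi>1 * sign \<pi>2" "chi n1 g = 1"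
proof -
  have q1: "\<pi>1 permutes {0..<n1}" using col_stab_permutes[OF col_tableau_lam p1] .
  have q2: "\<pi>2 permutes {0..<N - n1}" using col_stab_permutes[OF col_tableau_mu p2] by simp
  note C = join_perm_permutes[OF q1 q2 le_add1]
  have gB: "g \<in> signed_perm_mats N" unfolding g_def by (rule signed_perm_mat_in[OF C(1)]) auto
  have pg: "sp_perm g = join_perm n1 N \<pi>1 \<pi>2"
    unfolding g_def by (rule sp_perm_signed_perm_mat[OF C(1)]) auto
  have sg: "sp_sign g j = 1" if "j < N" for j
    unfolding g_def by (rule sp_sign_signed_perm_mat[OF C(1) _ that]) auto
  show "g \<in> P"
  proof (rule gen_parabolicI)
    show "g \<in> signed_perm_mats (sum_list (\<alpha> @ \<beta>))" using gB sum_list_alpha_beta by simp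
    show "sp_sign g j = 1" if "j < sum_list \<alpha>" for j using sg[of j] that sum_list_alpha by simp
    show "block_of (\<alpha> @ \<beta>) (sp_perm g j) = block_of (\<alpha> @ \<beta>) j" if "j < sum_list (\<alpha> @ \<beta>)" for j
      using block_of_join_perm[OF p1 p2] that pg sum_list_alpha_beta by simp
  qed
  show "low_perm n1 (sp_perm g) = \<pi>1" "high_perm n1 N (sp_perm g) = \<pi>2"
    using low_high_join_perm[OF q1 q2 le_add1] pg by auto
  show "det g = sign \<pi>1 * sign \<pi>2" unfolding g_def using det_signed_perm_mat[OF C(1)] C(2) by simp
  show "chi n1 g = 1" unfolding chi_def
    using sg signed_perm_matsD(1)[OF gB] by (intro prod.neutral) auto
qed

definition e_lam :: "(nat \<Rightarrow> nat) \<Rightarrow> complex" where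
  "e_lam = polytabloid lam (col_tableau lam)"

definition e_mu :: "(nat \<Rightarrow> nat) \<Rightarrow> complex" where
  "e_mu = polytabloid mu (col_tableau mu)"

definition w0 :: "(nat \<Rightarrow> nat) \<times> (nat \<Rightarrow> nat) \<Rightarrow> complex" where
  "w0 = (\<lambda>(r1, r2). e_lam r1 * e_mu r2)"

definition f0 :: "int mat \<Rightarrow> (nat \<Rightarrow> nat) \<times> (nat \<Rightarrow> nat) \<Rightarrow> complex" where
  "f0 x = (if x \<in> H then act_W n1 N x w0 else 0)"

definition \<phi>0 :: "complex \<Rightarrow> int mat \<Rightarrow> (nat \<Rightarrow> nat) \<times> (nat \<Rightarrow> nat) \<Rightarrow> complex" where
  "\<phi>0 c = scale2 c f0"

definition t_lam :: "nat \<Rightarrow> nat" where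
  "t_lam = tabloid_of lam (col_tableau lam)"

definition t_mu :: "nat \<Rightarrow> nat" where
  "t_mu = tabloid_of mu (col_tableau mu)"

lemma act_W_w0_P:
  assumes g: "g \<in> P"
  shows "act_W n1 N g w0 p = of_int (det g) * w0 p"
proof -
  obtain r1 r2 where p: "p = (r1, r2)" by fastforce
  have "act_W n1 N g w0 p = of_int (chi n1 g)
      * (e_lam (r1 \<circ> low_perm n1 (sp_perm g)) * e_mu (r2 \<circ> high_perm n1 N (sp_perm g)))"
    by (simp add: p act_W_eq w0_def)
  also have "e_lam (r1 \<circ> low_perm n1 (sp_perm g)) = of_int (sign (low_perm n1 (sp_perm g))) * e_lam r1"
    unfolding e_lam_def by (rule polytabloid_comp_col_stab[OF col_tableau_lam low_perm_P_in_col_stab[OF g]])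
  also have "e_mu (r2 \<circ> high_perm n1 N (sp_perm g))
      = of_int (sign (high_perm n1 N (sp_perm g))) * e_mu r2"
    unfolding e_mu_def by (rule polytabloid_comp_col_stab[OF col_tableau_mu high_perm_P_in_col_stab[OF g]])
  finally show ?thesis using det_P[OF g] by (simp add: p w0_def algebra_simps)
qed

lemma act_W_w0_in_tensor_specht:
  assumes h: "h \<in> H"
  shows "act_W n1 N h w0 \<in> tensor_specht lam mu"
proof -
  note F = young_subD[OF h le_add1]
  have q1: "low_perm n1 (sp_perm h) permutes {0..<n1}" using F(4) .
  have q2: "high_perm n1 N (sp_perm h) permutes {0..<n2}" using F(5) by simp
  define f where "f = polytabloid lam (low_perm n1 (sp_perm h) \<circ> col_tableau lam)"
  define g where "g = polytabloid mu (high_perm n1 N (sp_perm h) \<circ> col_tableau mu)"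
  have f: "f \<in> specht lam" unfolding f_def specht_def
    by (rule span_base_scale1) (use comp_in_tableaux[OF col_tableau_lam q1] in blast)
  have g: "g \<in> specht mu" unfolding g_def specht_def
    by (rule span_base_scale1) (use comp_in_tableaux[OF col_tableau_mu q2] in blast)
  have eq: "act_W n1 N h w0 = scale1 (of_int (chi n1 h)) (\<lambda>(r1, r2). f r1 * g r2)"
  proof
    fix p :: "(nat \<Rightarrow> nat) \<times> (nat \<Rightarrow> nat)"
    obtain r1 r2 where p: "p = (r1, r2)" by fastforce
    show "act_W n1 N h w0 p = scale1 (of_int (chi n1 h)) (\<lambda>(r1, r2). f r1 * g r2) p"
      using polytabloid_comp[OF col_tableau_lam q1, of r1] polytabloid_comp[OF col_tableau_mu q2, of r2]
      by (simp add: p act_W_eq w0_def e_lam_def e_mu_def f_def g_def scale1_def)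
  qed
  show ?thesis unfolding eq tensor_specht_def
    by (rule span_scale_scale1, rule span_base_scale1) (use f g in blast)
qed

lemma f0_outside_H: "x \<notin> H \<Longrightarrow> f0 x = 0"
  by (simp add: f0_def)

lemma f0_in_tensor_specht: "f0 x \<in> tensor_specht lam mu"
proof (cases "x \<in> H")
  case True thus ?thesis using act_W_w0_in_tensor_specht by (simp add: f0_def)
next
  case False thus ?thesis unfolding f0_def tensor_specht_def using span_zero_scale1 by simp
qed

lemma f0_mult_left:
  assumes h: "h \<in> H" and g: "g \<in> signed_perm_mats N"
  shows "f0 (h * g) = act_W n1 N h (f0 g)"
proof (cases "g \<in> H")
  case True
  thus ?thesis using young_sub_mult[OF h True le_add1] act_W_mult[OF h True le_add1]
    by (simp add: f0_def)
next
  case False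
  hence "h * g \<notin> H" using young_sub_mult_cancel_left[OF h g _ le_add1] by blast
  thus ?thesis using False by (simp add: f0_def act_W_zero)
qed

lemma f0_mult_right:
  assumes g: "g \<in> P" and x: "x \<in> signed_perm_mats N"
  shows "f0 (x * g) = scale1 (of_int (det g)) (f0 x)"
proof (cases "x \<in> H")
  case True
  have gH: "g \<in> H" by (rule P_in_H[OF g])
  have "f0 (x * g) = act_W n1 N x (act_W n1 N g w0)"
    using young_sub_mult[OF True gH le_add1] act_W_mult[OF True gH le_add1] by (simp add: f0_def)
  also have "act_W n1 N g w0 = scale1 (of_int (det g)) w0"
    using act_W_w0_P[OF g] by (simp add: fun_eq_iff scale1_def)
  finally show ?thesis using True by (simp add: act_W_scale f0_def)
next
  case False
  hence "x * g \<notin> H" using young_sub_mult_cancel_right[OF x P_in_H[OF g] _ le_add1] by blast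
  thus ?thesis using False by (simp add: f0_def scale1_def fun_eq_iff)
qed

lemma \<phi>0_in_hom_sgn: "\<phi>0 \<in> hom_sgn P lam mu"
proof -
  have ind: "\<phi>0 c \<in> ind_rep lam mu" for c
  proof -
    have "\<phi>0 c x = 0" if "x \<notin> signed_perm_mats N" for x
      using that young_sub_signed_perm_mats f0_outside_H[of x]
      by (auto simp: \<phi>0_def scale2_def scale1_def fun_eq_iff)
    moreover have "\<phi>0 c g \<in> tensor_specht lam mu" for g
      unfolding \<phi>0_def scale2_def tensor_specht_def
      by (rule span_scale_scale1) (use f0_in_tensor_specht in \<open>simp add: tensor_specht_def\<close>)
    moreover have "\<phi>0 c (h * g) = act_W n1 N h (\<phi>0 c g)" if "h \<in> H" "g \<in> signed_perm_mats N" for h g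
      using f0_mult_left[OF that] by (simp add: \<phi>0_def scale2_def act_W_scale)
    ultimately show ?thesis by (simp add: ind_rep_def Let_def)
  qed
  have eqv: "\<phi>0 (of_int (det g) * c) = act_ind N g (\<phi>0 c)" if g: "g \<in> P" for g c
  proof
    fix x
    show "\<phi>0 (of_int (det g) * c) x = act_ind N g (\<phi>0 c) x"
    proof (cases "x \<in> signed_perm_mats N")
      case False
      hence "x \<notin> H" using young_sub_signed_perm_mats by blast
      thus ?thesis using False by (simp add: act_ind_def \<phi>0_def scale2_def scale1_def f0_outside_H fun_eq_iff)
    next
      case True
      thus ?thesis using f0_mult_right[OF g True]
        by (simp add: act_ind_def \<phi>0_def scale2_def scale1_def fun_eq_iff)
    qed
  qed
  show ?thesis unfolding hom_sgn_def Let_def using ind eqv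
    by (simp add: \<phi>0_def scale2_def scale1_def fun_eq_iff algebra_simps)
qed

lemma w0_at_col_tabloids:
  assumes p1: "\<pi>1 \<in> col_stab lam (col_tableau lam)" and p2: "\<pi>2 \<in> col_stab mu (col_tableau mu)"
  shows "w0 (tabloid_of lam (\<pi>1 \<circ> col_tableau lam), tabloid_of mu (\<pi>2 \<circ> col_tableau mu))
      = of_int (sign \<pi>1 * sign \<pi>2)"
  using polytabloid_col_stab_tabloid[OF col_tableau_lam p1] polytabloid_col_stab_tabloid[OF col_tableau_mu p2]
  by (simp add: w0_def e_lam_def e_mu_def)

lemma w0_at_col_tableaux: "w0 (t_lam, t_mu) = 1"
  using w0_at_col_tabloids[OF id_in_col_stab[OF col_tableau_lam] id_in_col_stab[OF col_tableau_mu]]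
  by (simp add: t_lam_def t_mu_def)

lemma \<phi>0_nonzero: "\<phi>0 \<noteq> 0"
proof
  assume "\<phi>0 = 0"
  moreover have "\<phi>0 1 (1\<^sub>m N) (t_lam, t_mu) = 1"
    using one_mat_in_young_sub act_W_one w0_at_col_tableaux
      by (simp add: \<phi>0_def scale2_def scale1_def f0_def)
  ultimately show False by simp
qed

lemma hom_at_one_eigen:
  assumes phi: "\<phi> \<in> hom_sgn P lam mu" and g: "g \<in> P"
  shows "act_W n1 N g (\<phi> 1 (1\<^sub>m N)) p = of_int (det g) * \<phi> 1 (1\<^sub>m N) p"
proof -
  have "g * 1\<^sub>m N = 1\<^sub>m N * g" using signed_perm_matsD(1)[OF P_in_signed_perm_mats[OF g]] by simp
  thus ?thesis by (rule hom_sgn_eigen[OF phi g one_mat_in_signed_perm_mats P_in_H[OF g]])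
qed

lemma hom_at_col_tabloids:
  assumes phi: "\<phi> \<in> hom_sgn P lam mu"
    and p1: "\<pi>1 \<in> col_stab lam (col_tableau lam)" and p2: "\<pi>2 \<in> col_stab mu (col_tableau mu)"
  shows "\<phi> 1 (1\<^sub>m N) (tabloid_of lam (\<pi>1 \<circ> col_tableau lam), tabloid_of mu (\<pi>2 \<circ> col_tableau mu))
      = of_int (sign \<pi>1 * sign \<pi>2) * \<phi> 1 (1\<^sub>m N) (t_lam, t_mu)"
proof -
  define g where "g = signed_perm_mat N (join_perm n1 N \<pi>1 \<pi>2) (\<lambda>_. 1)"
  note PB = signed_perm_mat_join_perm[OF p1 p2, folded g_def]
  let ?w = "\<phi> 1 (1\<^sub>m N)"
  let ?r1 = "tabloid_of lam (\<pi>1 \<circ> col_tableau lam)" and ?r2 = "tabloid_of mu (\<pi>2 \<circ> col_tableau mu)"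
  have q1: "\<pi>1 permutes {0..<n1}" using col_stab_permutes[OF col_tableau_lam p1] .
  have q2: "\<pi>2 permutes {0..<n2}" using col_stab_permutes[OF col_tableau_mu p2] .
  have c1: "?r1 \<circ> \<pi>1 = t_lam"
    using tabloid_of_comp[OF col_tableau_lam q1] permutes_inverses[OF q1]
      by (auto simp: fun_eq_iff t_lam_def)
  have c2: "?r2 \<circ> \<pi>2 = t_mu"
    using tabloid_of_comp[OF col_tableau_mu q2] permutes_inverses[OF q2]
      by (auto simp: fun_eq_iff t_mu_def)
  have "act_W n1 N g ?w (?r1, ?r2) = of_int (det g) * ?w (?r1, ?r2)"
    by (rule hom_at_one_eigen[OF phi PB(1)])
  moreover have "act_W n1 N g ?w (?r1, ?r2) = ?w (t_lam, t_mu)"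
    unfolding act_W_eq PB(2,3,5) c1 c2 by simp
  ultimately have hc: "?w (t_lam, t_mu) = of_int (sign \<pi>1 * sign \<pi>2) * ?w (?r1, ?r2)"
    using PB(4) by simp
  define z where "z = sign \<pi>1 * sign \<pi>2"
  have "z * z = 1" unfolding z_def by (simp add: algebra_simps)
  hence zz: "(of_int z :: complex) * of_int z = 1" by (simp only: of_int_mult[symmetric] of_int_1)
  have "of_int z * ?w (t_lam, t_mu) = (of_int z * of_int z) * ?w (?r1, ?r2)"
    using hc by (simp add: z_def mult.assoc)
  also have "\<dots> = ?w (?r1, ?r2)" using zz by simp
  finally show ?thesis by (simp add: z_def)
qed

lemma hom_at_one_support:
  assumes phi: "\<phi> \<in> hom_sgn P lam mu" and nz: "\<phi> 1 (1\<^sub>m N) (r1, r2) \<noteq> 0"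
  obtains \<pi>1 \<pi>2 where "\<pi>1 \<in> col_stab lam (col_tableau lam)" "\<pi>2 \<in> col_stab mu (col_tableau mu)"
    "r1 = tabloid_of lam (\<pi>1 \<circ> col_tableau lam)" "r2 = tabloid_of mu (\<pi>2 \<circ> col_tableau mu)"
proof -
  have one: "1\<^sub>m N \<in> signed_perm_mats N" by (rule one_mat_in_signed_perm_mats)
  have rc: "is_tabloid lam r1" "is_tabloid mu r2"
    using tensor_specht_support[OF ind_repD(2)[OF hom_sgnD(1)[OF phi] one] nz] by auto
  have inj1: "inj_on r1 {block_start \<alpha> c..<block_start \<alpha> (Suc c)}" if c: "c < length \<alpha>" for c
  proof -
    let ?J = "{block_start \<alpha> c..<block_start \<alpha> (Suc c)}"
    have "inj_on r1 (sp_perm (1\<^sub>m N) ` ?J)"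
    proof (rule hom_sgn_inj_low[OF phi sum_list_alpha_beta one nz])
      show "c < length (\<alpha> @ \<beta>)" using c by simp
      show "?J \<subseteq> {block_start (\<alpha> @ \<beta>) c..<block_start (\<alpha> @ \<beta>) (Suc c)}"
        using block_start_append_left[of c \<alpha> \<beta>] block_start_append_left[of "Suc c" \<alpha> \<beta>] c by simp
      show "sp_perm (1\<^sub>m N) j < n1" if "j \<in> ?J" for j
        using that block_start_le_sum[of \<alpha> "Suc c"] sum_list_alpha by (auto simp: sp_perm_one_mat)
    qed
    thus ?thesis by (simp add: sp_perm_one_mat)
  qed
  have inj2: "inj_on r2 {block_start \<beta> c..<block_start \<beta> (Suc c)}" if c: "c < length \<beta>" for c
  proof -
    let ?J = "{n1 + block_start \<beta> c..<n1 + block_start \<beta> (Suc c)}"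
    have "inj_on r2 ((\<lambda>e. e - n1) ` sp_perm (1\<^sub>m N) ` ?J)"
    proof (rule hom_sgn_inj_high[OF phi sum_list_alpha_beta one nz])
      show "length \<alpha> + c < length (\<alpha> @ \<beta>)" using c by simp
      show "?J \<subseteq> {block_start (\<alpha> @ \<beta>) (length \<alpha> + c)..<block_start (\<alpha> @ \<beta>) (Suc (length \<alpha> + c))}"
        using block_start_append_right[of \<alpha> \<beta> c] block_start_append_right[of \<alpha> \<beta> "Suc c"] sum_list_alpha
        by simp
      show "n1 \<le> sp_perm (1\<^sub>m N) j" if "j \<in> ?J" for j using that by (simp add: sp_perm_one_mat)
    qed
    moreover have "?J = (\<lambda>e. e + n1) ` {block_start \<beta> c..<block_start \<beta> (Suc c)}"
      by (simp add: add.commute)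
    moreover have "(\<lambda>e. e - n1) ` (\<lambda>e. e + n1) ` X = X" for X :: "nat set" by (simp add: image_image)
    ultimately show ?thesis by (simp only: sp_perm_one_mat image_id id_apply)
  qed
  obtain \<pi>1 where p1: "\<pi>1 \<in> col_stab lam (col_tableau lam)" "r1 = tabloid_of lam (\<pi>1 \<circ> col_tableau lam)"
    using col_stab_realizes_tabloid[OF partition_lam rc(1) inj1] by blast
  obtain \<pi>2 where p2: "\<pi>2 \<in> col_stab mu (col_tableau mu)" "r2 = tabloid_of mu (\<pi>2 \<circ> col_tableau mu)"
    using col_stab_realizes_tabloid[OF partition_mu rc(2) inj2] by blast
  show ?thesis by (rule that[OF p1(1) p2(1) p1(2) p2(2)])
qed

lemma hom_at_one_eq:
  assumes phi: "\<phi> \<in> hom_sgn P lam mu"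
  shows "\<phi> 1 (1\<^sub>m N) = scale1 (\<phi> 1 (1\<^sub>m N) (t_lam, t_mu)) w0"
proof
  let ?w = "\<phi> 1 (1\<^sub>m N)"
  fix p :: "(nat \<Rightarrow> nat) \<times> (nat \<Rightarrow> nat)"
  obtain r1 r2 where p: "p = (r1, r2)" by fastforce
  show "?w p = scale1 (?w (t_lam, t_mu)) w0 p"
  proof (cases "?w (r1, r2) = 0 \<and> w0 (r1, r2) = 0")
    case True
    thus ?thesis using p by (simp add: scale1_def)
  next
    case False
    obtain \<pi>1 \<pi>2 where pp: "\<pi>1 \<in> col_stab lam (col_tableau lam)" "\<pi>2 \<in> col_stab mu (col_tableau mu)"
      "r1 = tabloid_of lam (\<pi>1 \<circ> col_tableau lam)" "r2 = tabloid_of mu (\<pi>2 \<circ> col_tableau mu)"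
    proof (cases "?w (r1, r2) = 0")
      case True
      hence "e_lam r1 \<noteq> 0" "e_mu r2 \<noteq> 0" using False by (auto simp: w0_def)
      thus thesis using that polytabloid_nonzero[OF col_tableau_lam] polytabloid_nonzero[OF col_tableau_mu]
        unfolding e_lam_def e_mu_def by metis
    next
      case False
      show thesis by (rule hom_at_one_support[OF phi False that])
    qed
    show ?thesis using hom_at_col_tabloids[OF phi pp(1,2)] w0_at_col_tabloids[OF pp(1,2)] pp(3,4) p
      by (simp add: scale1_def mult.commute)
  qed
qed

lemma hom_eq_scale_f0:
  assumes phi: "\<phi> \<in> hom_sgn P lam mu"
  shows "\<phi> 1 x = scale1 (\<phi> 1 (1\<^sub>m N) (t_lam, t_mu)) (f0 x)"
proof (cases "x \<in> H")
  case True
  define c where "c = \<phi> 1 (1\<^sub>m N) (t_lam, t_mu)"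
  have "\<phi> 1 (1\<^sub>m N) = scale1 c w0" unfolding c_def by (rule hom_at_one_eq[OF phi])
  moreover have "\<phi> 1 (x * 1\<^sub>m N) = act_W n1 N x (\<phi> 1 (1\<^sub>m N))"
    by (rule ind_repD(3)[OF hom_sgnD(1)[OF phi] True one_mat_in_signed_perm_mats])
  moreover have "x * 1\<^sub>m N = x"
    using signed_perm_matsD(1)[OF young_sub_signed_perm_mats[OF True]] by simp
  ultimately have "\<phi> 1 x = scale1 c (f0 x)" using True by (simp add: act_W_scale f0_def)
  thus ?thesis unfolding c_def .
next
  case False
  have "\<phi> 1 x = 0"
  proof (rule ccontr)
    assume nz: "\<phi> 1 x \<noteq> 0"
    hence "x \<in> signed_perm_mats N" using ind_repD(1)[OF hom_sgnD(1)[OF phi]] by blast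
    thus False using hom_sgn_support_young_sub[OF phi sum_list_alpha_beta sum_list_alpha _ nz] False
      by blast
  qed
  thus ?thesis using False by (simp add: f0_outside_H scale1_def fun_eq_iff)
qed

lemma hom_sgn_eq_multiple:
  assumes phi: "\<phi> \<in> hom_sgn P lam mu"
  shows "\<phi> = scale3 (\<phi> 1 (1\<^sub>m N) (t_lam, t_mu)) \<phi>0"
proof
  fix d
  define c where "c = \<phi> 1 (1\<^sub>m N) (t_lam, t_mu)"
  have "\<phi> 1 x = scale1 c (f0 x)" for x unfolding c_def by (rule hom_eq_scale_f0[OF phi])
  thus "\<phi> d = scale3 (\<phi> 1 (1\<^sub>m N) (t_lam, t_mu)) \<phi>0 d"
    unfolding hom_sgn_scale[OF phi, of d] c_def[symmetric]
    by (simp add: scale3_def scale2_def scale1_def \<phi>0_def fun_eq_iff)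
qed

lemma mult_sgn_eq_1: "mult_sgn P lam mu = 1"
  unfolding mult_sgn_def
proof (rule dim_scale3_one[OF \<phi>0_in_hom_sgn \<phi>0_nonzero], rule subsetI)
  fix \<phi> assume phi: "\<phi> \<in> hom_sgn P lam mu"
  have "\<phi>0 \<in> Modules.module.span scale3 {\<phi>0}" by (rule Modules.module.span_base[OF module_scale3]) simp
  hence "scale3 (\<phi> 1 (1\<^sub>m N) (t_lam, t_mu)) \<phi>0 \<in> Modules.module.span scale3 {\<phi>0}"
    by (rule Modules.module.span_scale[OF module_scale3])
  thus "\<phi> \<in> Modules.module.span scale3 {\<phi>0}" using hom_sgn_eq_multiple[OF phi] by simp
qed

end

lemma mult_sgn_diagonal:
  "is_partition lam \<Longrightarrow> is_partition mu
      \<Longrightarrow> mult_sgn (gen_parabolic (conj_part lam) (conj_part mu)) lam mu = 1"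
  using diagonal.mult_sgn_eq_1[of lam mu] by (simp add: diagonal_def)

lemma gen_parabolic_conj_part_in_gen_parabolics:
  "sum_list lam + sum_list mu = n \<Longrightarrow> gen_parabolic (conj_part lam) (conj_part mu) \<in> gen_parabolics n"
  unfolding gen_parabolics_def using conj_part_pos sum_list_conj_part by fastforce

theorem proposition4p16:
  shows
   "(\<forall>lam \<mu> \<nu> \<sigma>. is_partition lam \<and> is_partition \<mu> \<and> is_partition \<nu> \<and> is_partition \<sigma> \<and>
        sum_list lam + sum_list \<mu> = sum_list \<nu> + sum_list \<sigma> \<longrightarrow>
        (pair_succ (\<nu>, \<sigma>) (lam, \<mu>) \<longrightarrow>
            mult_sgn (gen_parabolic (conj_part \<nu>) (conj_part \<sigma>)) lam \<mu> = 0) \<and>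
        ((\<nu>, \<sigma>) = (lam, \<mu>) \<longrightarrow>
            mult_sgn (gen_parabolic (conj_part \<nu>) (conj_part \<sigma>)) lam \<mu> = 1))
    \<and>
    (\<forall>(n::nat) (L :: (nat list \<times> nat list) list).
        set L = {(lam, \<mu>). is_partition lam \<and> is_partition \<mu> \<and> sum_list lam + sum_list \<mu> = n} \<and>
        (\<forall>j k. j < k \<and> k < length L \<longrightarrow> pair_succ (L ! j) (L ! k)) \<longrightarrow>
        (\<forall>i < length L.
           let P = (\<lambda>j. gen_parabolic (conj_part (fst (L ! j))) (conj_part (snd (L ! j))));
               S = {Q \<in> gen_parabolics n. mult_sgn Q (fst (L ! i)) (snd (L ! i)) > 0}
           in P i \<in> S \<and> (\<forall>j < i. P j \<notin> S)))"
proof (intro conjI allI impI)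
  fix lam \<mu> \<nu> \<sigma> :: "nat list"
  assume "is_partition lam \<and> is_partition \<mu> \<and> is_partition \<nu> \<and> is_partition \<sigma>
      \<and> sum_list lam + sum_list \<mu> = sum_list \<nu> + sum_list \<sigma>"
  then show "pair_succ (\<nu>, \<sigma>) (lam, \<mu>) \<Longrightarrow> mult_sgn (gen_parabolic (conj_part \<nu>) (conj_part \<sigma>)) lam \<mu> = 0"
    and "(\<nu>, \<sigma>) = (lam, \<mu>) \<Longrightarrow> mult_sgn (gen_parabolic (conj_part \<nu>) (conj_part \<sigma>)) lam \<mu> = 1"
    using mult_sgn_vanish mult_sgn_diagonal by auto
next
  fix n :: nat and L :: "(nat list \<times> nat list) list" and i :: nat
  assume L: "set L = {(lam, \<mu>). is_partition lam \<and> is_partition \<mu> \<and> sum_list lam + sum_list \<mu> = n}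
      \<and> (\<forall>j k. j < k \<and> k < length L \<longrightarrow> pair_succ (L ! j) (L ! k))" and i: "i < length L"
  have mem: "is_partition (fst (L ! k)) \<and> is_partition (snd (L ! k))
      \<and> sum_list (fst (L ! k)) + sum_list (snd (L ! k)) = n" if "k < length L" for k
    using nth_mem[OF that] L by (auto simp: case_prod_beta)
  have "mult_sgn (gen_parabolic (conj_part (fst (L ! j))) (conj_part (snd (L ! j)))) (fst (L ! i)) (snd (L ! i)) = 0"
    if "j < i" for j
    using mult_sgn_vanish[of "fst (L ! i)" "snd (L ! i)" "fst (L ! j)" "snd (L ! j)"] L that i mem[OF i]
      mem[of j] by simp
  then show "let P = (\<lambda>j. gen_parabolic (conj_part (fst (L ! j))) (conj_part (snd (L ! j))));
        S = {Q \<in> gen_parabolics n. mult_sgn Q (fst (L ! i)) (snd (L ! i)) > 0}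
      in P i \<in> S \<and> (\<forall>j < i. P j \<notin> S)"
    using mem[OF i] mult_sgn_diagonal gen_parabolic_conj_part_in_gen_parabolics[of "fst (L ! i)" "snd (L ! i)"]
    by (simp add: Let_def)
qed

end
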